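(* Let $R$ be a commutative ring and let $U$ be an Abelian monoid object in the category of (cocommutative, counital) coalgebras over $R$, with addition map $\sigma\colon U\otimes_R U\to U$. Suppose that $U$ admits a good filtration $\{F_sU\}$ such that the zero (unit) of the monoid is the good basepoint associated to this filtration and $\sigma(F_sU\otimes F_tU)\subseteq F_{s+t}U$ for all $s,t\ge0$. Then $U$ is an Abelian group object in the category of coalgebras over $R$.
   Context: In the category of coalgebras over $R$, the product of $U$ and $V$ is $U\otimes_RV$ (with the evident coalgebra structure) and the terminal object is $R$. A good filtration of a coalgebra $U$ (counit $\epsilon$, coproduct $\psi$) is a sequence of submodules $F_sU$, $s\ge0$, such that: (a) $\epsilon\colon F_0U\to R$ is an isomorphism; (b) for $s>0$, $F_sU/F_{s-1}U$ is a finitely generated free $R$-module; (c) $\bigcup_sF_sU=U$; (d) $\psi(F_sU)\subseteq\sum_{s=t+u}F_tU\otimes F_uU$. The associated good basepoint is the coalgebra map $\eta\colon R\xrightarrow{\epsilon^{-1}}F_0U\hookrightarrow U$. *)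

theory Defs
  imports "HOL-Algebra.Module"
begin

definition ring_as_module :: "'r ring \<Rightarrow> ('r, 'r) module" where
  "ring_as_module R = \<lparr>carrier = carrier R, mult = mult R, one = one R,
      zero = zero R, add = add R, smult = mult R\<rparr>"

definition linear_map :: "'r ring \<Rightarrow> ('r, 'm) module \<Rightarrow> ('r, 'n) module \<Rightarrow> ('m \<Rightarrow> 'n) \<Rightarrow> bool" where
  "linear_map R M N f \<longleftrightarrow> f \<in> carrier M \<rightarrow> carrier N \<and>
     (\<forall>x\<in>carrier M. \<forall>y\<in>carrier M. f (x \<oplus>\<^bsub>M\<^esub> y) = f x \<oplus>\<^bsub>N\<^esub> f y) \<and>
     (\<forall>a\<in>carrier R. \<forall>x\<in>carrier M. f (a \<odot>\<^bsub>M\<^esub> x) = a \<odot>\<^bsub>N\<^esub> f x)"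

definition rep :: "'a set \<Rightarrow> 'a" where
  "rep A = (SOME x. x \<in> A)"

definition mcoset :: "('r, 'm) module \<Rightarrow> 'm set \<Rightarrow> 'm \<Rightarrow> 'm set" where
  "mcoset M B x = {x \<oplus>\<^bsub>M\<^esub> b | b. b \<in> B}"

definition quot_mod :: "'r ring \<Rightarrow> ('r, 'm) module \<Rightarrow> 'm set \<Rightarrow> 'm set \<Rightarrow> ('r, 'm set) module" where
  "quot_mod R M A B = \<lparr>carrier = mcoset M B ` A, mult = (\<lambda>_ _. undefined), one = undefined,
      zero = B,
      add = (\<lambda>X Y. mcoset M B (rep X \<oplus>\<^bsub>M\<^esub> rep Y)),
      smult = (\<lambda>a X. mcoset M B (a \<odot>\<^bsub>M\<^esub> rep X))\<rparr>"

definition lincomb :: "('r, 'm) module \<Rightarrow> 'r list \<Rightarrow> 'm list \<Rightarrow> 'm" where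
  "lincomb N cs bs = finsum N (\<lambda>i. cs ! i \<odot>\<^bsub>N\<^esub> bs ! i) {..<length bs}"

definition fg_free :: "'r ring \<Rightarrow> ('r, 'm) module \<Rightarrow> bool" where
  "fg_free R N \<longleftrightarrow> (\<exists>bs. set bs \<subseteq> carrier N \<and>
     (\<forall>x\<in>carrier N. \<exists>cs. length cs = length bs \<and> set cs \<subseteq> carrier R \<and> x = lincomb N cs bs) \<and>
     (\<forall>cs. length cs = length bs \<and> set cs \<subseteq> carrier R \<and> lincomb N cs bs = \<zero>\<^bsub>N\<^esub>
            \<longrightarrow> set cs \<subseteq> {\<zero>\<^bsub>R\<^esub>}))"

text \<open>Free module on M \<times> N: finitely supported coefficient functions.\<close>
definition fsupp :: "'r ring \<Rightarrow> ('p \<Rightarrow> 'r) \<Rightarrow> 'p set" where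
  "fsupp R f = {p. f p \<noteq> \<zero>\<^bsub>R\<^esub>}"

definition free_sums :: "'r ring \<Rightarrow> ('r, 'm) module \<Rightarrow> ('r, 'n) module \<Rightarrow> ('m \<times> 'n \<Rightarrow> 'r) set" where
  "free_sums R M N = {f. finite (fsupp R f) \<and> (\<forall>p. f p \<in> carrier R) \<and>
                         fsupp R f \<subseteq> carrier M \<times> carrier N}"

definition fs_delta :: "'r ring \<Rightarrow> 'm \<Rightarrow> 'n \<Rightarrow> ('m \<times> 'n \<Rightarrow> 'r)" where
  "fs_delta R m n = (\<lambda>p. if p = (m, n) then \<one>\<^bsub>R\<^esub> else \<zero>\<^bsub>R\<^esub>)"

inductive_set tensor_rel :: "'r ring \<Rightarrow> ('r, 'm) module \<Rightarrow> ('r, 'n) module \<Rightarrow> ('m \<times> 'n \<Rightarrow> 'r) set"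
  for R M N where
  rel_zero: "(\<lambda>p. \<zero>\<^bsub>R\<^esub>) \<in> tensor_rel R M N"
| rel_add: "f \<in> tensor_rel R M N \<Longrightarrow> g \<in> tensor_rel R M N \<Longrightarrow>
     (\<lambda>p. f p \<oplus>\<^bsub>R\<^esub> g p) \<in> tensor_rel R M N"
| rel_smult: "a \<in> carrier R \<Longrightarrow> f \<in> tensor_rel R M N \<Longrightarrow>
     (\<lambda>p. a \<otimes>\<^bsub>R\<^esub> f p) \<in> tensor_rel R M N"
| rel_add_l: "m \<in> carrier M \<Longrightarrow> m' \<in> carrier M \<Longrightarrow> n \<in> carrier N \<Longrightarrow>
     (\<lambda>p. fs_delta R (m \<oplus>\<^bsub>M\<^esub> m') n p \<ominus>\<^bsub>R\<^esub> fs_delta R m n p \<ominus>\<^bsub>R\<^esub> fs_delta R m' n p)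
       \<in> tensor_rel R M N"
| rel_add_r: "m \<in> carrier M \<Longrightarrow> n \<in> carrier N \<Longrightarrow> n' \<in> carrier N \<Longrightarrow>
     (\<lambda>p. fs_delta R m (n \<oplus>\<^bsub>N\<^esub> n') p \<ominus>\<^bsub>R\<^esub> fs_delta R m n p \<ominus>\<^bsub>R\<^esub> fs_delta R m n' p)
       \<in> tensor_rel R M N"
| rel_smult_l: "a \<in> carrier R \<Longrightarrow> m \<in> carrier M \<Longrightarrow> n \<in> carrier N \<Longrightarrow>
     (\<lambda>p. fs_delta R (a \<odot>\<^bsub>M\<^esub> m) n p \<ominus>\<^bsub>R\<^esub> a \<otimes>\<^bsub>R\<^esub> fs_delta R m n p) \<in> tensor_rel R M N"
| rel_smult_r: "a \<in> carrier R \<Longrightarrow> m \<in> carrier M \<Longrightarrow> n \<in> carrier N \<Longrightarrow>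
     (\<lambda>p. fs_delta R m (a \<odot>\<^bsub>N\<^esub> n) p \<ominus>\<^bsub>R\<^esub> a \<otimes>\<^bsub>R\<^esub> fs_delta R m n p) \<in> tensor_rel R M N"

definition tensor_class :: "'r ring \<Rightarrow> ('r, 'm) module \<Rightarrow> ('r, 'n) module \<Rightarrow>
    ('m \<times> 'n \<Rightarrow> 'r) \<Rightarrow> ('m \<times> 'n \<Rightarrow> 'r) set" where
  "tensor_class R M N f = {g \<in> free_sums R M N. (\<lambda>p. g p \<ominus>\<^bsub>R\<^esub> f p) \<in> tensor_rel R M N}"

text \<open>The tensor product module M \<otimes>_R N (free module modulo bilinearity relations).\<close>
definition tensor :: "'r ring \<Rightarrow> ('r, 'm) module \<Rightarrow> ('r, 'n) module \<Rightarrow> ('r, ('m \<times> 'n \<Rightarrow> 'r) set) module" where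
  "tensor R M N = \<lparr>carrier = tensor_class R M N ` free_sums R M N,
      mult = (\<lambda>_ _. undefined), one = undefined,
      zero = tensor_class R M N (\<lambda>p. \<zero>\<^bsub>R\<^esub>),
      add = (\<lambda>A B. tensor_class R M N (\<lambda>p. rep A p \<oplus>\<^bsub>R\<^esub> rep B p)),
      smult = (\<lambda>a A. tensor_class R M N (\<lambda>p. a \<otimes>\<^bsub>R\<^esub> rep A p))\<rparr>"

definition tens :: "'r ring \<Rightarrow> ('r, 'm) module \<Rightarrow> ('r, 'n) module \<Rightarrow> 'm \<Rightarrow> 'n \<Rightarrow> ('m \<times> 'n \<Rightarrow> 'r) set" where
  "tens R M N m n = tensor_class R M N (fs_delta R m n)"

text \<open>The linear map M \<otimes> N \<rightarrow> P induced by a bilinear map \<phi> : M \<times> N \<rightarrow> P.\<close>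
definition tlift :: "'r ring \<Rightarrow> ('r, 'm) module \<Rightarrow> ('r, 'n) module \<Rightarrow> ('r, 'p) module \<Rightarrow>
    ('m \<times> 'n \<Rightarrow> 'p) \<Rightarrow> ('m \<times> 'n \<Rightarrow> 'r) set \<Rightarrow> 'p" where
  "tlift R M N P \<phi> A = finsum P (\<lambda>q. rep A q \<odot>\<^bsub>P\<^esub> \<phi> q) (fsupp R (rep A))"

definition tmap :: "'r ring \<Rightarrow> ('r, 'm) module \<Rightarrow> ('r, 'n) module \<Rightarrow> ('r, 'm2) module \<Rightarrow> ('r, 'n2) module \<Rightarrow>
    ('m \<Rightarrow> 'm2) \<Rightarrow> ('n \<Rightarrow> 'n2) \<Rightarrow> ('m \<times> 'n \<Rightarrow> 'r) set \<Rightarrow> ('m2 \<times> 'n2 \<Rightarrow> 'r) set" where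
  "tmap R M N M' N' f g = tlift R M N (tensor R M' N') (\<lambda>(m, n). tens R M' N' (f m) (g n))"

definition tassoc :: "'r ring \<Rightarrow> ('r, 'a) module \<Rightarrow> ('r, 'b) module \<Rightarrow> ('r, 'c) module \<Rightarrow>
    ((('a \<times> 'b \<Rightarrow> 'r) set) \<times> 'c \<Rightarrow> 'r) set \<Rightarrow> ('a \<times> (('b \<times> 'c \<Rightarrow> 'r) set) \<Rightarrow> 'r) set" where
  "tassoc R A B C = tlift R (tensor R A B) C (tensor R A (tensor R B C))
     (\<lambda>(X, c). tlift R A B (tensor R A (tensor R B C))
        (\<lambda>(a, b). tens R A (tensor R B C) a (tens R B C b c)) X)"

definition tswap :: "'r ring \<Rightarrow> ('r, 'a) module \<Rightarrow> ('r, 'b) module \<Rightarrow>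
    ('a \<times> 'b \<Rightarrow> 'r) set \<Rightarrow> ('b \<times> 'a \<Rightarrow> 'r) set" where
  "tswap R A B = tlift R A B (tensor R B A) (\<lambda>(a, b). tens R B A b a)"

definition coalgebra :: "'r ring \<Rightarrow> ('r, 'c) module \<Rightarrow> ('c \<Rightarrow> 'r) \<Rightarrow> ('c \<Rightarrow> ('c \<times> 'c \<Rightarrow> 'r) set) \<Rightarrow> bool" where
  "coalgebra R C eps psi \<longleftrightarrow> module R C \<and>
     linear_map R C (ring_as_module R) eps \<and>
     linear_map R C (tensor R C C) psi \<and>
     (\<forall>c\<in>carrier C. tlift R C C C (\<lambda>(a, b). eps a \<odot>\<^bsub>C\<^esub> b) (psi c) = c) \<and>
     (\<forall>c\<in>carrier C. tlift R C C C (\<lambda>(a, b). eps b \<odot>\<^bsub>C\<^esub> a) (psi c) = c) \<and>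
     (\<forall>c\<in>carrier C. tassoc R C C C (tmap R C C (tensor R C C) C psi (\<lambda>x. x) (psi c))
                     = tmap R C C C (tensor R C C) (\<lambda>x. x) psi (psi c)) \<and>
     (\<forall>c\<in>carrier C. tswap R C C (psi c) = psi c)"

text \<open>Coalgebra structure on R (terminal object).\<close>
definition ring_coprod :: "'r ring \<Rightarrow> 'r \<Rightarrow> ('r \<times> 'r \<Rightarrow> 'r) set" where
  "ring_coprod R r = r \<odot>\<^bsub>tensor R (ring_as_module R) (ring_as_module R)\<^esub>
      tens R (ring_as_module R) (ring_as_module R) \<one>\<^bsub>R\<^esub> \<one>\<^bsub>R\<^esub>"

text \<open>The evident coalgebra structure on U \<otimes> V (the categorical product).\<close>
definition tensor_counit :: "'r ring \<Rightarrow> ('r, 'u) module \<Rightarrow> ('r, 'v) module \<Rightarrow>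
    ('u \<Rightarrow> 'r) \<Rightarrow> ('v \<Rightarrow> 'r) \<Rightarrow> ('u \<times> 'v \<Rightarrow> 'r) set \<Rightarrow> 'r" where
  "tensor_counit R U V eU eV = tlift R U V (ring_as_module R) (\<lambda>(u, v). eU u \<otimes>\<^bsub>R\<^esub> eV v)"

definition tmiddle :: "'r ring \<Rightarrow> ('r, 'u) module \<Rightarrow> ('r, 'v) module \<Rightarrow>
    ((('u \<times> 'u \<Rightarrow> 'r) set) \<times> (('v \<times> 'v \<Rightarrow> 'r) set) \<Rightarrow> 'r) set \<Rightarrow>
    ((('u \<times> 'v \<Rightarrow> 'r) set) \<times> (('u \<times> 'v \<Rightarrow> 'r) set) \<Rightarrow> 'r) set" where
  "tmiddle R U V =
     (let T = tensor R (tensor R U V) (tensor R U V) in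
      tlift R (tensor R U U) (tensor R V V) T
        (\<lambda>(X, Y). tlift R U U T (\<lambda>(a, a'). tlift R V V T
            (\<lambda>(b, b'). tens R (tensor R U V) (tensor R U V) (tens R U V a b) (tens R U V a' b')) Y) X))"

definition tensor_coprod :: "'r ring \<Rightarrow> ('r, 'u) module \<Rightarrow> ('r, 'v) module \<Rightarrow>
    ('u \<Rightarrow> ('u \<times> 'u \<Rightarrow> 'r) set) \<Rightarrow> ('v \<Rightarrow> ('v \<times> 'v \<Rightarrow> 'r) set) \<Rightarrow>
    ('u \<times> 'v \<Rightarrow> 'r) set \<Rightarrow> ((('u \<times> 'v \<Rightarrow> 'r) set) \<times> (('u \<times> 'v \<Rightarrow> 'r) set) \<Rightarrow> 'r) set" where
  "tensor_coprod R U V pU pV x =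
     tmiddle R U V (tmap R U V (tensor R U U) (tensor R V V) pU pV x)"

definition coalg_map :: "'r ring \<Rightarrow> ('r, 'c) module \<Rightarrow> ('c \<Rightarrow> 'r) \<Rightarrow> ('c \<Rightarrow> ('c \<times> 'c \<Rightarrow> 'r) set) \<Rightarrow>
    ('r, 'd) module \<Rightarrow> ('d \<Rightarrow> 'r) \<Rightarrow> ('d \<Rightarrow> ('d \<times> 'd \<Rightarrow> 'r) set) \<Rightarrow> ('c \<Rightarrow> 'd) \<Rightarrow> bool" where
  "coalg_map R C eC pC D eD pD f \<longleftrightarrow> linear_map R C D f \<and>
     (\<forall>c\<in>carrier C. eD (f c) = eC c) \<and>
     (\<forall>c\<in>carrier C. pD (f c) = tmap R C C D D f f (pC c))"

text \<open>Abelian monoid object (U, \<sigma>, \<eta>) in coalgebras; product is \<otimes>, terminal object is R.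
  The axioms are stated on elementary tensors, which generate.\<close>
definition coalg_ab_monoid :: "'r ring \<Rightarrow> ('r, 'u) module \<Rightarrow> ('u \<Rightarrow> 'r) \<Rightarrow> ('u \<Rightarrow> ('u \<times> 'u \<Rightarrow> 'r) set) \<Rightarrow>
    (('u \<times> 'u \<Rightarrow> 'r) set \<Rightarrow> 'u) \<Rightarrow> ('r \<Rightarrow> 'u) \<Rightarrow> bool" where
  "coalg_ab_monoid R U eps psi sigma eta \<longleftrightarrow>
     coalgebra R U eps psi \<and>
     coalg_map R (tensor R U U) (tensor_counit R U U eps eps) (tensor_coprod R U U psi psi)
               U eps psi sigma \<and>
     coalg_map R (ring_as_module R) (\<lambda>r. r) (ring_coprod R) U eps psi eta \<and>
     (\<forall>a\<in>carrier U. \<forall>b\<in>carrier U. \<forall>c\<in>carrier U.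
        sigma (tens R U U (sigma (tens R U U a b)) c) = sigma (tens R U U a (sigma (tens R U U b c)))) \<and>
     (\<forall>r\<in>carrier R. \<forall>u\<in>carrier U. sigma (tens R U U (eta r) u) = r \<odot>\<^bsub>U\<^esub> u) \<and>
     (\<forall>r\<in>carrier R. \<forall>u\<in>carrier U. sigma (tens R U U u (eta r)) = r \<odot>\<^bsub>U\<^esub> u) \<and>
     (\<forall>a\<in>carrier U. \<forall>b\<in>carrier U. sigma (tens R U U a b) = sigma (tens R U U b a))"

text \<open>An Abelian monoid object is an Abelian group object if it has an inverse morphism \<chi>
  with \<sigma> \<circ> (1 \<times> \<chi>) \<circ> \<Delta> = \<eta> \<circ> ! and \<sigma> \<circ> (\<chi> \<times> 1) \<circ> \<Delta> = \<eta> \<circ> ! (here \<Delta> = \<psi>, ! = \<epsilon>).\<close>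
definition coalg_ab_group :: "'r ring \<Rightarrow> ('r, 'u) module \<Rightarrow> ('u \<Rightarrow> 'r) \<Rightarrow> ('u \<Rightarrow> ('u \<times> 'u \<Rightarrow> 'r) set) \<Rightarrow>
    (('u \<times> 'u \<Rightarrow> 'r) set \<Rightarrow> 'u) \<Rightarrow> ('r \<Rightarrow> 'u) \<Rightarrow> bool" where
  "coalg_ab_group R U eps psi sigma eta \<longleftrightarrow>
     coalg_ab_monoid R U eps psi sigma eta \<and>
     (\<exists>chi. coalg_map R U eps psi U eps psi chi \<and>
        (\<forall>u\<in>carrier U. sigma (tmap R U U U U (\<lambda>x. x) chi (psi u)) = eta (eps u)) \<and>
        (\<forall>u\<in>carrier U. sigma (tmap R U U U U chi (\<lambda>x. x) (psi u)) = eta (eps u)))"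

inductive_set tspan :: "'r ring \<Rightarrow> ('r, 'm) module \<Rightarrow> ('r, 'n) module \<Rightarrow> ('m \<times> 'n) set \<Rightarrow>
    ('m \<times> 'n \<Rightarrow> 'r) set set" for R M N S where
  tspan_zero: "\<zero>\<^bsub>tensor R M N\<^esub> \<in> tspan R M N S"
| tspan_gen: "(a, b) \<in> S \<Longrightarrow> tens R M N a b \<in> tspan R M N S"
| tspan_add: "x \<in> tspan R M N S \<Longrightarrow> y \<in> tspan R M N S \<Longrightarrow> x \<oplus>\<^bsub>tensor R M N\<^esub> y \<in> tspan R M N S"
| tspan_smult: "r \<in> carrier R \<Longrightarrow> x \<in> tspan R M N S \<Longrightarrow> r \<odot>\<^bsub>tensor R M N\<^esub> x \<in> tspan R M N S"

definition good_filtration :: "'r ring \<Rightarrow> ('r, 'u) module \<Rightarrow> ('u \<Rightarrow> 'r) \<Rightarrow> ('u \<Rightarrow> ('u \<times> 'u \<Rightarrow> 'r) set) \<Rightarrow>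
    (nat \<Rightarrow> 'u set) \<Rightarrow> bool" where
  "good_filtration R U eps psi F \<longleftrightarrow>
     (\<forall>s. submodule (F s) R U) \<and>
     (\<forall>s. F s \<subseteq> F (Suc s)) \<and>
     bij_betw eps (F 0) (carrier R) \<and>
     (\<forall>s>0. fg_free R (quot_mod R U (F s) (F (s - 1)))) \<and>
     (\<Union>s. F s) = carrier U \<and>
     (\<forall>s. psi ` F s \<subseteq> tspan R U U {(a, b) | a b t u. t + u = s \<and> a \<in> F t \<and> b \<in> F u})"

definition good_basepoint :: "'r ring \<Rightarrow> ('u \<Rightarrow> 'r) \<Rightarrow> (nat \<Rightarrow> 'u set) \<Rightarrow> ('r \<Rightarrow> 'u) \<Rightarrow> bool" where
  "good_basepoint R eps F eta \<longleftrightarrow> (\<forall>r\<in>carrier R. eta r \<in> F 0 \<and> eps (eta r) = r)"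

end

theory Submission
  imports Defs
begin

text \<open>
  For linear endomorphisms f, g of U let f \<star> g = \<sigma> \<circ> (f \<otimes> g) \<circ> \<psi> be their convolution; its
  unit is \<eta> \<epsilon>.  An inverse for the monoid object is a coalgebra map \<chi> with
  id \<star> \<chi> = \<chi> \<star> id = \<eta> \<epsilon>.  Write id = \<eta> \<epsilon> - g.  Since \<eta> is the good basepoint, g vanishes
  on F_0 U, and since \<psi> respects the filtration, the n-th convolution power of g vanishes on
  F_s U for n > s.  So the geometric series \<chi> = \<Sum>_n g^n is a finite sum on each F_s U, and
  telescoping gives id \<star> \<chi> = \<eta> \<epsilon>; cocommutativity gives \<chi> \<star> id = \<eta> \<epsilon>, and \<epsilon> g = 0
  gives \<epsilon> \<chi> = \<epsilon>.

  To see that \<chi> is comultiplicative, use that \<sigma> makes U \<otimes> U an algebra and that \<psi> is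
  multiplicative.  Both \<psi> \<chi> and (\<chi> \<otimes> \<chi>) \<psi> are then left convolution inverses of \<psi> in
  Hom(U, U \<otimes> U), the second one because coassociativity and cocommutativity allow the middle
  factors of \<psi> \<otimes> \<psi> to be swapped.  Left inverses of \<psi> are unique: if D \<star> \<psi> = 0, then D
  vanishes on every F_s U by induction on s, because modulo terms of lower filtration, \<psi> v
  is v \<otimes> 1 for v in F_s U.
\<close>

section \<open>Linear and bilinear maps\<close>

lemma (in abelian_group) add_minus_minus_cancel: "x \<in> carrier G \<Longrightarrow> y \<in> carrier G \<Longrightarrow> (x \<oplus> y) \<ominus> x \<ominus> y = \<zero>"
proof -
  assume xy: "x \<in> carrier G" "y \<in> carrier G"
  then have "(x \<oplus> y) \<ominus> x \<ominus> y = (x \<oplus> y) \<oplus> (\<ominus> x \<oplus> \<ominus> y)" by (simp add: minus_eq a_assoc)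
  also have "\<dots> = (x \<oplus> y) \<oplus> \<ominus> (x \<oplus> y)" using xy by (simp add: minus_add)
  also have "\<dots> = \<zero>" using xy by (simp add: r_neg)
  finally show ?thesis .
qed

lemma (in abelian_group) minus_self: "x \<in> carrier G \<Longrightarrow> x \<ominus> x = \<zero>"
  by (simp add: minus_eq r_neg)

lemma (in abelian_group) minus_telescope: "x \<in> carrier G \<Longrightarrow> y \<in> carrier G \<Longrightarrow> z \<in> carrier G \<Longrightarrow>
  (x \<ominus> y) \<oplus> (y \<ominus> z) = x \<ominus> z"
proof -
  assume c: "x \<in> carrier G" "y \<in> carrier G" "z \<in> carrier G"
  have "(x \<ominus> y) \<oplus> (y \<ominus> z) = x \<oplus> ((\<ominus> y \<oplus> y) \<oplus> \<ominus> z)"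
    using c by (simp add: minus_eq a_assoc)
  also have "\<dots> = x \<ominus> z" using c by (simp add: l_neg minus_eq)
  finally show ?thesis .
qed

lemma (in abelian_group) minus_eq_zeroD: "x \<in> carrier G \<Longrightarrow> y \<in> carrier G \<Longrightarrow> x \<ominus> y = \<zero> \<Longrightarrow> x = y"
proof -
  assume c: "x \<in> carrier G" "y \<in> carrier G" "x \<ominus> y = \<zero>"
  have "x = x \<oplus> (\<ominus> y \<oplus> y)" using c by (simp add: l_neg)
  also have "\<dots> = (x \<ominus> y) \<oplus> y" using c(1,2) by (simp add: minus_eq a_assoc)
  also have "\<dots> = y" using c by simp
  finally show ?thesis .
qed

lemma (in module) smult_lcomm: "a \<in> carrier R \<Longrightarrow> b \<in> carrier R \<Longrightarrow> x \<in> carrier M \<Longrightarrow>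
  a \<odot>\<^bsub>M\<^esub> (b \<odot>\<^bsub>M\<^esub> x) = b \<odot>\<^bsub>M\<^esub> (a \<odot>\<^bsub>M\<^esub> x)"
  by (metis smult_assoc1 m_comm)

lemma linear_map_closed: "linear_map R M N f \<Longrightarrow> x \<in> carrier M \<Longrightarrow> f x \<in> carrier N"
  unfolding linear_map_def by auto

lemma linear_map_add: "linear_map R M N f \<Longrightarrow> x \<in> carrier M \<Longrightarrow> y \<in> carrier M \<Longrightarrow>
   f (x \<oplus>\<^bsub>M\<^esub> y) = f x \<oplus>\<^bsub>N\<^esub> f y"
  unfolding linear_map_def by auto

lemma linear_map_smult: "linear_map R M N f \<Longrightarrow> a \<in> carrier R \<Longrightarrow> x \<in> carrier M \<Longrightarrow>
   f (a \<odot>\<^bsub>M\<^esub> x) = a \<odot>\<^bsub>N\<^esub> f x"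
  unfolding linear_map_def by auto

lemma linear_map_zero:
  assumes "module R M" "module R N" "linear_map R M N f"
  shows "f \<zero>\<^bsub>M\<^esub> = \<zero>\<^bsub>N\<^esub>"
proof -
  interpret M: module R M by fact
  interpret N: module R N by fact
  have "f \<zero>\<^bsub>M\<^esub> \<oplus>\<^bsub>N\<^esub> f \<zero>\<^bsub>M\<^esub> = f \<zero>\<^bsub>M\<^esub>"
    using linear_map_add[OF assms(3), of "\<zero>\<^bsub>M\<^esub>" "\<zero>\<^bsub>M\<^esub>"] by simp
  then show ?thesis
    using linear_map_closed[OF assms(3) M.zero_closed] by (metis N.add.r_cancel_one')
qed

lemma linear_map_neg:
  assumes "module R M" "module R N" "linear_map R M N f" "x \<in> carrier M"
  shows "f (\<ominus>\<^bsub>M\<^esub> x) = \<ominus>\<^bsub>N\<^esub> f x"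
proof -
  interpret M: module R M by fact
  interpret N: module R N by fact
  have "f (\<ominus>\<^bsub>M\<^esub> x) = f ((\<ominus>\<^bsub>R\<^esub> \<one>\<^bsub>R\<^esub>) \<odot>\<^bsub>M\<^esub> x)"
    using assms(4) by (simp add: M.smult_l_minus)
  also have "\<dots> = \<ominus>\<^bsub>N\<^esub> f x"
    using linear_map_smult[OF assms(3)] linear_map_closed[OF assms(3)] assms(4)
    by (simp add: N.smult_l_minus)
  finally show ?thesis .
qed

lemma linear_map_diff:
  assumes "module R M" "module R N" "linear_map R M N f" "x \<in> carrier M" "y \<in> carrier M"
  shows "f (x \<ominus>\<^bsub>M\<^esub> y) = f x \<ominus>\<^bsub>N\<^esub> f y"
proof -
  interpret M: module R M by fact
  interpret N: module R N by fact
  show ?thesis using assms linear_map_neg[OF assms(1-3)] linear_map_add[OF assms(3)]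
    by (simp add: M.minus_eq N.minus_eq)
qed

lemma linear_map_comp:
  "linear_map R M N f \<Longrightarrow> linear_map R N P g \<Longrightarrow> linear_map R M P (\<lambda>x. g (f x))"
  unfolding linear_map_def by (auto simp: Pi_def)

lemma linear_map_id: "module R M \<Longrightarrow> linear_map R M M (\<lambda>x. x)"
  unfolding linear_map_def by auto

lemma linear_map_cong:
  "linear_map R M N f \<Longrightarrow> (\<And>x. x \<in> carrier M \<Longrightarrow> f x = g x) \<Longrightarrow> module R M \<Longrightarrow> linear_map R M N g"
  unfolding linear_map_def
  by (auto simp: Pi_def module.smult_closed abelian_monoid.a_closed abelian_group.axioms(1) module.axioms(2))

lemma linear_map_pointwise_add:
  assumes "module R M" "module R N" "linear_map R M N f" "linear_map R M N g"
  shows "linear_map R M N (\<lambda>x. f x \<oplus>\<^bsub>N\<^esub> g x)"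
proof -
  interpret M: module R M by fact
  interpret N: module R N by fact
  show ?thesis using assms(3,4) unfolding linear_map_def
    by (auto simp: Pi_def N.smult_r_distr N.a_ac)
qed

lemma linear_map_pointwise_smult:
  assumes "module R M" "module R N" "linear_map R M N f" "c \<in> carrier R"
  shows "linear_map R M N (\<lambda>x. c \<odot>\<^bsub>N\<^esub> f x)"
proof -
  interpret M: module R M by fact
  interpret N: module R N by fact
  show ?thesis using assms(3,4) unfolding linear_map_def
    by (auto simp: Pi_def N.smult_r_distr N.smult_assoc1[symmetric] M.m_comm)
qed

lemma linear_map_pointwise_diff:
  assumes "module R M" "module R N" "linear_map R M N f" "linear_map R M N g"
  shows "linear_map R M N (\<lambda>x. f x \<ominus>\<^bsub>N\<^esub> g x)"
proof -
  interpret M: module R M by fact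
  interpret N: module R N by fact
  have "linear_map R M N (\<lambda>x. f x \<oplus>\<^bsub>N\<^esub> ((\<ominus>\<^bsub>R\<^esub> \<one>\<^bsub>R\<^esub>) \<odot>\<^bsub>N\<^esub> g x))"
    by (intro linear_map_pointwise_add linear_map_pointwise_smult assms) simp
  then show ?thesis
    by (rule linear_map_cong)
      (use linear_map_closed[OF assms(4)] assms(1) in \<open>simp_all add: N.smult_l_minus N.minus_eq\<close>)
qed

lemma linear_map_zero_fun:
  assumes "module R M" "module R N"
  shows "linear_map R M N (\<lambda>x. \<zero>\<^bsub>N\<^esub>)"
proof -
  interpret M: module R M by fact
  interpret N: module R N by fact
  show ?thesis unfolding linear_map_def by auto
qed

lemma linear_map_finsum:
  assumes "module R M" "module R N" "linear_map R M N h" "finite A" "g \<in> A \<rightarrow> carrier M"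
  shows "h (finsum M g A) = finsum N (\<lambda>i. h (g i)) A"
  using assms(4,5)
proof (induction A rule: finite_induct)
  interpret M: module R M by fact
  interpret N: module R N by fact
  case empty
  then show ?case using linear_map_zero[OF assms(1-3)] by simp
next
  interpret M: module R M by fact
  interpret N: module R N by fact
  case (insert x A)
  from insert show ?case
    using linear_map_add[OF assms(3)] linear_map_closed[OF assms(3)]
    by (simp add: Pi_def M.finsum_insert N.finsum_insert)
qed

definition bilinear ::
    "'r ring \<Rightarrow> ('r, 'm) module \<Rightarrow> ('r, 'n) module \<Rightarrow> ('r, 'p) module \<Rightarrow> ('m \<times> 'n \<Rightarrow> 'p) \<Rightarrow> bool" where
  "bilinear R M N P \<phi> \<longleftrightarrow> (\<forall>b\<in>carrier N. linear_map R M P (\<lambda>a. \<phi> (a, b))) \<and>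
                             (\<forall>a\<in>carrier M. linear_map R N P (\<lambda>b. \<phi> (a, b)))"

lemma bilinearI:
  "(\<And>b. b \<in> carrier N \<Longrightarrow> linear_map R M P (\<lambda>a. h a b)) \<Longrightarrow>
   (\<And>a. a \<in> carrier M \<Longrightarrow> linear_map R N P (\<lambda>b. h a b)) \<Longrightarrow> bilinear R M N P (\<lambda>(a, b). h a b)"
  unfolding bilinear_def by auto

lemma bilinear_fst: "bilinear R M N P \<phi> \<Longrightarrow> b \<in> carrier N \<Longrightarrow> linear_map R M P (\<lambda>a. \<phi> (a, b))"
  unfolding bilinear_def by auto

lemma bilinear_snd: "bilinear R M N P \<phi> \<Longrightarrow> a \<in> carrier M \<Longrightarrow> linear_map R N P (\<lambda>b. \<phi> (a, b))"
  unfolding bilinear_def by auto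

lemma bilinear_closed:
  "bilinear R M N P \<phi> \<Longrightarrow> a \<in> carrier M \<Longrightarrow> b \<in> carrier N \<Longrightarrow> \<phi> (a, b) \<in> carrier P"
  using bilinear_snd linear_map_closed by metis

lemma module_ring_as_module: assumes "cring R" shows "module R (ring_as_module R)"
proof -
  interpret R: cring R by fact
  show ?thesis
  proof (rule moduleI)
    show "abelian_group (ring_as_module R)"
      by (rule abelian_groupI) (auto simp: ring_as_module_def R.a_ac R.l_neg intro: R.a_inv_closed)
  qed (auto simp: ring_as_module_def assms R.l_distr R.r_distr R.m_assoc)
qed

definition trilinear ::
    "'r ring \<Rightarrow> ('r, 'u) module \<Rightarrow> ('r, 'p) module \<Rightarrow> ('u \<Rightarrow> 'u \<Rightarrow> 'u \<Rightarrow> 'p) \<Rightarrow> bool" where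
  "trilinear R U P G \<longleftrightarrow>
     (\<forall>b\<in>carrier U. \<forall>c\<in>carrier U. linear_map R U P (\<lambda>a. G a b c)) \<and>
     (\<forall>a\<in>carrier U. \<forall>c\<in>carrier U. linear_map R U P (\<lambda>b. G a b c)) \<and>
     (\<forall>a\<in>carrier U. \<forall>b\<in>carrier U. linear_map R U P (\<lambda>c. G a b c))"

lemma trilinearD:
  assumes "trilinear R U P G"
  shows "\<And>b c. b \<in> carrier U \<Longrightarrow> c \<in> carrier U \<Longrightarrow> linear_map R U P (\<lambda>a. G a b c)"
    and "\<And>a c. a \<in> carrier U \<Longrightarrow> c \<in> carrier U \<Longrightarrow> linear_map R U P (\<lambda>b. G a b c)"
    and "\<And>a b. a \<in> carrier U \<Longrightarrow> b \<in> carrier U \<Longrightarrow> linear_map R U P (\<lambda>c. G a b c)"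
  using assms unfolding trilinear_def by simp_all

lemma trilinear_closed:
  "trilinear R U P G \<Longrightarrow> a \<in> carrier U \<Longrightarrow> b \<in> carrier U \<Longrightarrow> c \<in> carrier U \<Longrightarrow> G a b c \<in> carrier P"
  by (rule linear_map_closed[OF trilinearD(3)])

lemma trilinear_swap_12: "trilinear R U P G \<Longrightarrow> trilinear R U P (\<lambda>a b c. G b a c)"
  unfolding trilinear_def by simp

definition quadrilinear ::
    "'r ring \<Rightarrow> ('r, 'u) module \<Rightarrow> ('r, 'p) module \<Rightarrow> ('u \<Rightarrow> 'u \<Rightarrow> 'u \<Rightarrow> 'u \<Rightarrow> 'p) \<Rightarrow> bool" where
  "quadrilinear R U P G \<longleftrightarrow>
     (\<forall>b\<in>carrier U. \<forall>c\<in>carrier U. \<forall>d\<in>carrier U. linear_map R U P (\<lambda>a. G a b c d)) \<and>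
     (\<forall>a\<in>carrier U. \<forall>c\<in>carrier U. \<forall>d\<in>carrier U. linear_map R U P (\<lambda>b. G a b c d)) \<and>
     (\<forall>a\<in>carrier U. \<forall>b\<in>carrier U. \<forall>d\<in>carrier U. linear_map R U P (\<lambda>c. G a b c d)) \<and>
     (\<forall>a\<in>carrier U. \<forall>b\<in>carrier U. \<forall>c\<in>carrier U. linear_map R U P (\<lambda>d. G a b c d))"

lemma quadrilinearD:
  assumes "quadrilinear R U P G"
  shows "\<And>b c d. b \<in> carrier U \<Longrightarrow> c \<in> carrier U \<Longrightarrow> d \<in> carrier U \<Longrightarrow> linear_map R U P (\<lambda>a. G a b c d)"
    and "\<And>a c d. a \<in> carrier U \<Longrightarrow> c \<in> carrier U \<Longrightarrow> d \<in> carrier U \<Longrightarrow> linear_map R U P (\<lambda>b. G a b c d)"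
    and "\<And>a b d. a \<in> carrier U \<Longrightarrow> b \<in> carrier U \<Longrightarrow> d \<in> carrier U \<Longrightarrow> linear_map R U P (\<lambda>c. G a b c d)"
    and "\<And>a b c. a \<in> carrier U \<Longrightarrow> b \<in> carrier U \<Longrightarrow> c \<in> carrier U \<Longrightarrow> linear_map R U P (\<lambda>d. G a b c d)"
  using assms unfolding quadrilinear_def by simp_all

lemma quadrilinear_closed:
  "quadrilinear R U P G \<Longrightarrow> a \<in> carrier U \<Longrightarrow> b \<in> carrier U \<Longrightarrow> c \<in> carrier U \<Longrightarrow> d \<in> carrier U \<Longrightarrow>
   G a b c d \<in> carrier P"
  by (rule linear_map_closed[OF quadrilinearD(4)])

lemma quadrilinear_swap_23: "quadrilinear R U P G \<Longrightarrow> quadrilinear R U P (\<lambda>a b c d. G a c b d)"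
  unfolding quadrilinear_def by simp

section \<open>Tensor products of modules\<close>

lemma fsupp_add: "fsupp R (\<lambda>p. f p \<oplus>\<^bsub>R\<^esub> g p) \<subseteq> fsupp R f \<union> fsupp R g" if "cring R"
proof -
  interpret cring R by fact
  show ?thesis unfolding fsupp_def by auto
qed

lemma fsupp_smult: "a \<in> carrier R \<Longrightarrow> fsupp R (\<lambda>p. a \<otimes>\<^bsub>R\<^esub> f p) \<subseteq> fsupp R f" if "cring R"
proof -
  interpret cring R by fact
  show "a \<in> carrier R \<Longrightarrow> ?thesis" unfolding fsupp_def by auto
qed

lemma fsupp_diff: "fsupp R (\<lambda>p. f p \<ominus>\<^bsub>R\<^esub> g p) \<subseteq> fsupp R f \<union> fsupp R g" if "cring R"
proof -
  interpret cring R by fact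
  show ?thesis unfolding fsupp_def by (auto simp: minus_eq)
qed

lemma fsupp_fs_delta: "fsupp R (fs_delta R m n) \<subseteq> {(m, n)}"
  unfolding fsupp_def fs_delta_def by auto

locale tensor_product = R: cring R + M: module R M + N: module R N
  for R :: "'r ring" and M :: "('r, 'm) module" and N :: "('r, 'n) module"
begin

abbreviation "FS \<equiv> free_sums R M N"
abbreviation "REL \<equiv> tensor_rel R M N"
abbreviation "cls \<equiv> tensor_class R M N"
abbreviation "T \<equiv> tensor R M N"

lemma free_sums_iff: "f \<in> FS \<longleftrightarrow> finite (fsupp R f) \<and> (\<forall>p. f p \<in> carrier R) \<and> fsupp R f \<subseteq> carrier M \<times> carrier N"
  unfolding free_sums_def by auto

lemma free_sumsD: assumes "f \<in> FS" shows "finite (fsupp R f)" "f p \<in> carrier R" "fsupp R f \<subseteq> carrier M \<times> carrier N"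
  using assms unfolding free_sums_def by blast+

lemma fs_delta_closed: "fs_delta R m n p \<in> carrier R"
  unfolding fs_delta_def by auto

lemma fs_delta_free_sums: "m \<in> carrier M \<Longrightarrow> n \<in> carrier N \<Longrightarrow> fs_delta R m n \<in> FS"
  unfolding free_sums_iff using fsupp_fs_delta[of R m n] fs_delta_closed by (auto intro: finite_subset)

lemma free_sums_add: "f \<in> FS \<Longrightarrow> g \<in> FS \<Longrightarrow> (\<lambda>p. f p \<oplus>\<^bsub>R\<^esub> g p) \<in> FS"
  unfolding free_sums_iff using fsupp_add[OF R.is_cring, of f g] by (auto intro: finite_subset)

lemma free_sums_smult: "a \<in> carrier R \<Longrightarrow> f \<in> FS \<Longrightarrow> (\<lambda>p. a \<otimes>\<^bsub>R\<^esub> f p) \<in> FS"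
  unfolding free_sums_iff using fsupp_smult[OF R.is_cring, of a f] by (auto intro: finite_subset)

lemma free_sums_diff: "f \<in> FS \<Longrightarrow> g \<in> FS \<Longrightarrow> (\<lambda>p. f p \<ominus>\<^bsub>R\<^esub> g p) \<in> FS"
  unfolding free_sums_iff using fsupp_diff[OF R.is_cring, of f g] by (auto intro: finite_subset)

lemma free_sums_zero: "(\<lambda>p. \<zero>\<^bsub>R\<^esub>) \<in> FS"
  unfolding free_sums_iff fsupp_def by auto

lemma tensor_rel_free_sums: "f \<in> REL \<Longrightarrow> f \<in> FS"
proof (induction rule: tensor_rel.induct)
  case rel_zero
  then show ?case by (rule free_sums_zero)
next
  case (rel_add f g)
  then show ?case by (blast intro: free_sums_add)
next
  case (rel_smult a f)
  then show ?case by (blast intro: free_sums_smult)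
next
  case (rel_add_l m m' n)
  then show ?case by (intro free_sums_diff fs_delta_free_sums) auto
next
  case (rel_add_r m n n')
  then show ?case by (intro free_sums_diff fs_delta_free_sums) auto
next
  case (rel_smult_l a m n)
  then show ?case by (intro free_sums_diff free_sums_smult fs_delta_free_sums) auto
next
  case (rel_smult_r a m n)
  then show ?case by (intro free_sums_diff free_sums_smult fs_delta_free_sums) auto
qed

lemma tensor_rel_diff: assumes "f \<in> REL" "g \<in> REL" shows "(\<lambda>p. f p \<ominus>\<^bsub>R\<^esub> g p) \<in> REL"
proof -
  have "(\<lambda>p. f p \<oplus>\<^bsub>R\<^esub> (\<ominus>\<^bsub>R\<^esub> \<one>\<^bsub>R\<^esub> \<otimes>\<^bsub>R\<^esub> g p)) \<in> REL"
    using assms by (intro tensor_rel.rel_add tensor_rel.rel_smult) auto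
  moreover have "(\<lambda>p. f p \<oplus>\<^bsub>R\<^esub> (\<ominus>\<^bsub>R\<^esub> \<one>\<^bsub>R\<^esub> \<otimes>\<^bsub>R\<^esub> g p)) = (\<lambda>p. f p \<ominus>\<^bsub>R\<^esub> g p)"
  proof
    fix p
    have "f p \<in> carrier R" "g p \<in> carrier R" using tensor_rel_free_sums[OF assms(1)] tensor_rel_free_sums[OF assms(2)] free_sumsD by auto
    then show "f p \<oplus>\<^bsub>R\<^esub> (\<ominus>\<^bsub>R\<^esub> \<one>\<^bsub>R\<^esub> \<otimes>\<^bsub>R\<^esub> g p) = f p \<ominus>\<^bsub>R\<^esub> g p" by algebra
  qed
  ultimately show ?thesis by simp
qed

lemma tensor_class_self: assumes "f \<in> FS" shows "f \<in> cls f"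
proof -
  have "(\<lambda>p. f p \<ominus>\<^bsub>R\<^esub> f p) = (\<lambda>p. \<zero>\<^bsub>R\<^esub>)" using free_sumsD[OF assms] by (auto simp: R.r_neg R.minus_eq)
  then show ?thesis unfolding tensor_class_def using assms tensor_rel.rel_zero by auto
qed

lemma tensor_class_eqI: assumes "f \<in> FS" "g \<in> FS" "(\<lambda>p. f p \<ominus>\<^bsub>R\<^esub> g p) \<in> REL" shows "cls f = cls g"
proof -
  have to_g: "(\<lambda>p. h p \<ominus>\<^bsub>R\<^esub> g p) \<in> REL" if "h \<in> FS" "(\<lambda>p. h p \<ominus>\<^bsub>R\<^esub> f p) \<in> REL" for h
  proof -
    have "(\<lambda>p. (h p \<ominus>\<^bsub>R\<^esub> f p) \<oplus>\<^bsub>R\<^esub> (f p \<ominus>\<^bsub>R\<^esub> g p)) \<in> REL"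
      by (rule tensor_rel.rel_add[OF that(2) assms(3)])
    moreover have "(\<lambda>p. (h p \<ominus>\<^bsub>R\<^esub> f p) \<oplus>\<^bsub>R\<^esub> (f p \<ominus>\<^bsub>R\<^esub> g p)) = (\<lambda>p. h p \<ominus>\<^bsub>R\<^esub> g p)"
    proof
      fix p
      have "f p \<in> carrier R" "g p \<in> carrier R" "h p \<in> carrier R" using assms that free_sumsD by auto
      then show "(h p \<ominus>\<^bsub>R\<^esub> f p) \<oplus>\<^bsub>R\<^esub> (f p \<ominus>\<^bsub>R\<^esub> g p) = h p \<ominus>\<^bsub>R\<^esub> g p" by algebra
    qed
    ultimately show ?thesis by simp
  qed
  have to_f: "(\<lambda>p. h p \<ominus>\<^bsub>R\<^esub> f p) \<in> REL" if "h \<in> FS" "(\<lambda>p. h p \<ominus>\<^bsub>R\<^esub> g p) \<in> REL" for h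
  proof -
    have "(\<lambda>p. (h p \<ominus>\<^bsub>R\<^esub> g p) \<ominus>\<^bsub>R\<^esub> (f p \<ominus>\<^bsub>R\<^esub> g p)) \<in> REL"
      by (rule tensor_rel_diff[OF that(2) assms(3)])
    moreover have "(\<lambda>p. (h p \<ominus>\<^bsub>R\<^esub> g p) \<ominus>\<^bsub>R\<^esub> (f p \<ominus>\<^bsub>R\<^esub> g p)) = (\<lambda>p. h p \<ominus>\<^bsub>R\<^esub> f p)"
    proof
      fix p
      have "f p \<in> carrier R" "g p \<in> carrier R" "h p \<in> carrier R" using assms that free_sumsD by auto
      then show "(h p \<ominus>\<^bsub>R\<^esub> g p) \<ominus>\<^bsub>R\<^esub> (f p \<ominus>\<^bsub>R\<^esub> g p) = h p \<ominus>\<^bsub>R\<^esub> f p" by algebra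
    qed
    ultimately show ?thesis by simp
  qed
  show ?thesis unfolding tensor_class_def using to_f to_g by auto
qed

lemma rep_tensor_class: assumes "f \<in> FS" shows "rep (cls f) \<in> FS" "(\<lambda>p. rep (cls f) p \<ominus>\<^bsub>R\<^esub> f p) \<in> REL"
proof -
  have "rep (cls f) \<in> cls f" unfolding rep_def using tensor_class_self[OF assms] by (metis someI)
  then show "rep (cls f) \<in> FS" "(\<lambda>p. rep (cls f) p \<ominus>\<^bsub>R\<^esub> f p) \<in> REL" unfolding tensor_class_def by auto
qed

lemma tensor_class_rep_class: assumes "f \<in> FS" shows "cls (rep (cls f)) = cls f"
  by (rule tensor_class_eqI[OF rep_tensor_class(1)[OF assms] assms rep_tensor_class(2)[OF assms]])

lemma tensor_carrier: "carrier T = cls ` FS"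
  unfolding tensor_def by simp

lemma tensor_carrierE: assumes "X \<in> carrier T" obtains f where "f \<in> FS" "X = cls f"
  using assms tensor_carrier by auto

lemma rep_free_sums: "X \<in> carrier T \<Longrightarrow> rep X \<in> FS"
  using rep_tensor_class tensor_carrier by auto

lemma tensor_class_rep: "X \<in> carrier T \<Longrightarrow> cls (rep X) = X"
  using tensor_class_rep_class tensor_carrier by auto

lemma tensor_class_closed: "f \<in> FS \<Longrightarrow> cls f \<in> carrier T"
  using tensor_carrier by auto

lemma tensor_add_class: assumes "f \<in> FS" "g \<in> FS" shows "cls f \<oplus>\<^bsub>T\<^esub> cls g = cls (\<lambda>p. f p \<oplus>\<^bsub>R\<^esub> g p)"
proof -
  have "cls f \<oplus>\<^bsub>T\<^esub> cls g = cls (\<lambda>p. rep (cls f) p \<oplus>\<^bsub>R\<^esub> rep (cls g) p)"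
    unfolding tensor_def by simp
  also have "\<dots> = cls (\<lambda>p. f p \<oplus>\<^bsub>R\<^esub> g p)"
  proof (rule tensor_class_eqI)
    show "(\<lambda>p. rep (cls f) p \<oplus>\<^bsub>R\<^esub> rep (cls g) p) \<in> FS" using rep_tensor_class assms free_sums_add by auto
    show "(\<lambda>p. f p \<oplus>\<^bsub>R\<^esub> g p) \<in> FS" using assms free_sums_add by auto
    have "(\<lambda>p. (rep (cls f) p \<ominus>\<^bsub>R\<^esub> f p) \<oplus>\<^bsub>R\<^esub> (rep (cls g) p \<ominus>\<^bsub>R\<^esub> g p)) \<in> REL"
      using rep_tensor_class assms by (intro tensor_rel.rel_add) auto
    moreover have "(\<lambda>p. (rep (cls f) p \<ominus>\<^bsub>R\<^esub> f p) \<oplus>\<^bsub>R\<^esub> (rep (cls g) p \<ominus>\<^bsub>R\<^esub> g p)) =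
       (\<lambda>p. rep (cls f) p \<oplus>\<^bsub>R\<^esub> rep (cls g) p \<ominus>\<^bsub>R\<^esub> (f p \<oplus>\<^bsub>R\<^esub> g p))"
    proof
      fix p
      have "f p \<in> carrier R" "g p \<in> carrier R" "rep (cls f) p \<in> carrier R" "rep (cls g) p \<in> carrier R"
        using assms rep_tensor_class free_sumsD by auto
      then show "(rep (cls f) p \<ominus>\<^bsub>R\<^esub> f p) \<oplus>\<^bsub>R\<^esub> (rep (cls g) p \<ominus>\<^bsub>R\<^esub> g p) =
         rep (cls f) p \<oplus>\<^bsub>R\<^esub> rep (cls g) p \<ominus>\<^bsub>R\<^esub> (f p \<oplus>\<^bsub>R\<^esub> g p)" by algebra
    qed
    ultimately show "(\<lambda>p. rep (cls f) p \<oplus>\<^bsub>R\<^esub> rep (cls g) p \<ominus>\<^bsub>R\<^esub> (f p \<oplus>\<^bsub>R\<^esub> g p)) \<in> REL" by simp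
  qed
  finally show ?thesis .
qed

lemma tensor_smult_class: assumes "a \<in> carrier R" "f \<in> FS" shows "a \<odot>\<^bsub>T\<^esub> cls f = cls (\<lambda>p. a \<otimes>\<^bsub>R\<^esub> f p)"
proof -
  have "a \<odot>\<^bsub>T\<^esub> cls f = cls (\<lambda>p. a \<otimes>\<^bsub>R\<^esub> rep (cls f) p)"
    unfolding tensor_def by simp
  also have "\<dots> = cls (\<lambda>p. a \<otimes>\<^bsub>R\<^esub> f p)"
  proof (rule tensor_class_eqI)
    show "(\<lambda>p. a \<otimes>\<^bsub>R\<^esub> rep (cls f) p) \<in> FS" using rep_tensor_class assms free_sums_smult by auto
    show "(\<lambda>p. a \<otimes>\<^bsub>R\<^esub> f p) \<in> FS" using assms free_sums_smult by auto
    have "(\<lambda>p. a \<otimes>\<^bsub>R\<^esub> (rep (cls f) p \<ominus>\<^bsub>R\<^esub> f p)) \<in> REL"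
      using rep_tensor_class assms by (intro tensor_rel.rel_smult) auto
    moreover have "(\<lambda>p. a \<otimes>\<^bsub>R\<^esub> (rep (cls f) p \<ominus>\<^bsub>R\<^esub> f p)) =
       (\<lambda>p. a \<otimes>\<^bsub>R\<^esub> rep (cls f) p \<ominus>\<^bsub>R\<^esub> a \<otimes>\<^bsub>R\<^esub> f p)"
    proof
      fix p
      have "f p \<in> carrier R" "rep (cls f) p \<in> carrier R"
        using assms rep_tensor_class free_sumsD by auto
      then show "a \<otimes>\<^bsub>R\<^esub> (rep (cls f) p \<ominus>\<^bsub>R\<^esub> f p) = a \<otimes>\<^bsub>R\<^esub> rep (cls f) p \<ominus>\<^bsub>R\<^esub> a \<otimes>\<^bsub>R\<^esub> f p"
        using assms(1) by algebra
    qed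
    ultimately show "(\<lambda>p. a \<otimes>\<^bsub>R\<^esub> rep (cls f) p \<ominus>\<^bsub>R\<^esub> a \<otimes>\<^bsub>R\<^esub> f p) \<in> REL" by simp
  qed
  finally show ?thesis .
qed

lemma tensor_zero_class: "\<zero>\<^bsub>T\<^esub> = cls (\<lambda>p. \<zero>\<^bsub>R\<^esub>)"
  unfolding tensor_def by simp

lemma tensor_class_cong: "f \<in> FS \<Longrightarrow> (\<And>p. f p = g p) \<Longrightarrow> cls f = cls g"
  by (metis ext)

lemma tensor_abelian_group: "abelian_group T"
proof (rule abelian_groupI)
  fix X Y assume "X \<in> carrier T" "Y \<in> carrier T"
  then obtain f g where fg: "f \<in> FS" "g \<in> FS" "X = cls f" "Y = cls g" by (metis tensor_carrierE)
  show "X \<oplus>\<^bsub>T\<^esub> Y \<in> carrier T" unfolding fg tensor_add_class[OF fg(1,2)]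
    by (rule tensor_class_closed[OF free_sums_add[OF fg(1,2)]])
next
  show "\<zero>\<^bsub>T\<^esub> \<in> carrier T" unfolding tensor_zero_class by (rule tensor_class_closed[OF free_sums_zero])
next
  fix X Y Z assume "X \<in> carrier T" "Y \<in> carrier T" "Z \<in> carrier T"
  then obtain f g h where fgh: "f \<in> FS" "g \<in> FS" "h \<in> FS" "X = cls f" "Y = cls g" "Z = cls h"
    by (metis tensor_carrierE)
  have "X \<oplus>\<^bsub>T\<^esub> Y \<oplus>\<^bsub>T\<^esub> Z = cls (\<lambda>p. (f p \<oplus>\<^bsub>R\<^esub> g p) \<oplus>\<^bsub>R\<^esub> h p)"
    unfolding fgh tensor_add_class[OF fgh(1,2)] tensor_add_class[OF free_sums_add[OF fgh(1,2)] fgh(3)] ..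
  also have "\<dots> = cls (\<lambda>p. f p \<oplus>\<^bsub>R\<^esub> (g p \<oplus>\<^bsub>R\<^esub> h p))"
    by (rule tensor_class_cong, rule free_sums_add[OF free_sums_add[OF fgh(1,2)] fgh(3)],
        rule R.a_assoc, (rule free_sumsD, fact)+)
  also have "\<dots> = X \<oplus>\<^bsub>T\<^esub> (Y \<oplus>\<^bsub>T\<^esub> Z)"
    unfolding fgh tensor_add_class[OF fgh(2,3)] tensor_add_class[OF fgh(1) free_sums_add[OF fgh(2,3)]] ..
  finally show "X \<oplus>\<^bsub>T\<^esub> Y \<oplus>\<^bsub>T\<^esub> Z = X \<oplus>\<^bsub>T\<^esub> (Y \<oplus>\<^bsub>T\<^esub> Z)" .
next
  fix X Y assume "X \<in> carrier T" "Y \<in> carrier T"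
  then obtain f g where fg: "f \<in> FS" "g \<in> FS" "X = cls f" "Y = cls g" by (metis tensor_carrierE)
  show "X \<oplus>\<^bsub>T\<^esub> Y = Y \<oplus>\<^bsub>T\<^esub> X" unfolding fg tensor_add_class[OF fg(1,2)] tensor_add_class[OF fg(2,1)]
    by (rule tensor_class_cong, rule free_sums_add[OF fg(1,2)], rule R.a_comm, (rule free_sumsD, fact)+)
next
  fix X assume "X \<in> carrier T"
  then obtain f where f: "f \<in> FS" "X = cls f" by (metis tensor_carrierE)
  show "\<zero>\<^bsub>T\<^esub> \<oplus>\<^bsub>T\<^esub> X = X" unfolding f tensor_zero_class tensor_add_class[OF free_sums_zero f(1)]
    by (rule tensor_class_cong, rule free_sums_add[OF free_sums_zero f(1)], rule R.l_zero, rule free_sumsD, fact)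
next
  fix X assume "X \<in> carrier T"
  then obtain f where f: "f \<in> FS" "X = cls f"
    by (metis tensor_carrierE)
  have m: "(\<lambda>p. \<ominus>\<^bsub>R\<^esub> \<one>\<^bsub>R\<^esub> \<otimes>\<^bsub>R\<^esub> f p) \<in> FS" using f free_sums_smult by auto
  have "cls (\<lambda>p. \<ominus>\<^bsub>R\<^esub> \<one>\<^bsub>R\<^esub> \<otimes>\<^bsub>R\<^esub> f p) \<oplus>\<^bsub>T\<^esub> X = cls (\<lambda>p. \<ominus>\<^bsub>R\<^esub> \<one>\<^bsub>R\<^esub> \<otimes>\<^bsub>R\<^esub> f p \<oplus>\<^bsub>R\<^esub> f p)"
    unfolding f tensor_add_class[OF m f(1)] ..
  also have "\<dots> = cls (\<lambda>p. \<zero>\<^bsub>R\<^esub>)"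
  proof (rule tensor_class_cong)
    show "(\<lambda>p. \<ominus>\<^bsub>R\<^esub> \<one>\<^bsub>R\<^esub> \<otimes>\<^bsub>R\<^esub> f p \<oplus>\<^bsub>R\<^esub> f p) \<in> FS" by (rule free_sums_add[OF m f(1)])
    fix p have "f p \<in> carrier R" using f free_sumsD by auto
    then show "\<ominus>\<^bsub>R\<^esub> \<one>\<^bsub>R\<^esub> \<otimes>\<^bsub>R\<^esub> f p \<oplus>\<^bsub>R\<^esub> f p = \<zero>\<^bsub>R\<^esub>" by algebra
  qed
  finally have "cls (\<lambda>p. \<ominus>\<^bsub>R\<^esub> \<one>\<^bsub>R\<^esub> \<otimes>\<^bsub>R\<^esub> f p) \<oplus>\<^bsub>T\<^esub> X = \<zero>\<^bsub>T\<^esub>" unfolding tensor_zero_class .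
  then show "\<exists>Y\<in>carrier T. Y \<oplus>\<^bsub>T\<^esub> X = \<zero>\<^bsub>T\<^esub>" using tensor_class_closed[OF m] by blast
qed

lemma tensor_module: "module R T"
proof (rule moduleI)
  show "cring R" by (rule R.is_cring)
  show "abelian_group T" by (rule tensor_abelian_group)
next
  fix a X assume a: "a \<in> carrier R" "X \<in> carrier T"
  then obtain f where f: "f \<in> FS" "X = cls f" by (metis tensor_carrierE)
  show "a \<odot>\<^bsub>T\<^esub> X \<in> carrier T" unfolding f tensor_smult_class[OF a(1) f(1)]
    by (rule tensor_class_closed[OF free_sums_smult[OF a(1) f(1)]])
next
  fix a b X assume ab: "a \<in> carrier R" "b \<in> carrier R" "X \<in> carrier T"
  then obtain f where f: "f \<in> FS" "X = cls f" by (metis tensor_carrierE)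
  show "(a \<oplus>\<^bsub>R\<^esub> b) \<odot>\<^bsub>T\<^esub> X = a \<odot>\<^bsub>T\<^esub> X \<oplus>\<^bsub>T\<^esub> b \<odot>\<^bsub>T\<^esub> X"
    unfolding f tensor_smult_class[OF ab(1) f(1)] tensor_smult_class[OF ab(2) f(1)] tensor_smult_class[OF R.a_closed[OF ab(1,2)] f(1)]
      tensor_add_class[OF free_sums_smult[OF ab(1) f(1)] free_sums_smult[OF ab(2) f(1)]]
    by (rule tensor_class_cong, rule free_sums_smult[OF R.a_closed[OF ab(1,2)] f(1)], rule R.l_distr, rule ab, rule ab, rule free_sumsD, fact)
next
  fix a X Y assume ab: "a \<in> carrier R" "X \<in> carrier T" "Y \<in> carrier T"
  then obtain f g where f: "f \<in> FS" "X = cls f" "g \<in> FS" "Y = cls g" by (metis tensor_carrierE)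
  show "a \<odot>\<^bsub>T\<^esub> (X \<oplus>\<^bsub>T\<^esub> Y) = a \<odot>\<^bsub>T\<^esub> X \<oplus>\<^bsub>T\<^esub> a \<odot>\<^bsub>T\<^esub> Y"
    unfolding f tensor_add_class[OF f(1,3)] tensor_smult_class[OF ab(1) free_sums_add[OF f(1,3)]] tensor_smult_class[OF ab(1) f(1)] tensor_smult_class[OF ab(1) f(3)]
      tensor_add_class[OF free_sums_smult[OF ab(1) f(1)] free_sums_smult[OF ab(1) f(3)]]
    by (rule tensor_class_cong, rule free_sums_smult[OF ab(1) free_sums_add[OF f(1,3)]], rule R.r_distr, (rule free_sumsD, fact)+, rule ab)
next
  fix a b X assume ab: "a \<in> carrier R" "b \<in> carrier R" "X \<in> carrier T"
  then obtain f where f: "f \<in> FS" "X = cls f" by (metis tensor_carrierE)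
  show "(a \<otimes>\<^bsub>R\<^esub> b) \<odot>\<^bsub>T\<^esub> X = a \<odot>\<^bsub>T\<^esub> (b \<odot>\<^bsub>T\<^esub> X)"
    unfolding f tensor_smult_class[OF ab(2) f(1)] tensor_smult_class[OF ab(1) free_sums_smult[OF ab(2) f(1)]] tensor_smult_class[OF R.m_closed[OF ab(1,2)] f(1)]
    by (rule tensor_class_cong, rule free_sums_smult[OF R.m_closed[OF ab(1,2)] f(1)], rule R.m_assoc, rule ab, rule ab, rule free_sumsD, fact)
next
  fix X assume "X \<in> carrier T"
  then obtain f where f: "f \<in> FS" "X = cls f" by (metis tensor_carrierE)
  show "\<one>\<^bsub>R\<^esub> \<odot>\<^bsub>T\<^esub> X = X"
    unfolding f tensor_smult_class[OF R.one_closed f(1)]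
    by (rule tensor_class_cong, rule free_sums_smult[OF R.one_closed f(1)], rule R.l_one, rule free_sumsD, fact)
qed

lemma tens_closed: "m \<in> carrier M \<Longrightarrow> n \<in> carrier N \<Longrightarrow> tens R M N m n \<in> carrier T"
  unfolding tens_def by (rule tensor_class_closed[OF fs_delta_free_sums])

lemma tens_add_fst: assumes "m \<in> carrier M" "m' \<in> carrier M" "n \<in> carrier N"
  shows "tens R M N (m \<oplus>\<^bsub>M\<^esub> m') n = tens R M N m n \<oplus>\<^bsub>T\<^esub> tens R M N m' n"
proof -
  have d: "fs_delta R (m \<oplus>\<^bsub>M\<^esub> m') n \<in> FS" "fs_delta R m n \<in> FS" "fs_delta R m' n \<in> FS"
    using assms by (auto intro!: fs_delta_free_sums)
  show ?thesis unfolding tens_def tensor_add_class[OF d(2,3)]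
  proof (rule tensor_class_eqI[OF d(1) free_sums_add[OF d(2,3)]])
    have "(\<lambda>p. fs_delta R (m \<oplus>\<^bsub>M\<^esub> m') n p \<ominus>\<^bsub>R\<^esub> fs_delta R m n p \<ominus>\<^bsub>R\<^esub> fs_delta R m' n p) \<in> REL"
      using assms by (rule tensor_rel.rel_add_l)
    moreover have "(\<lambda>p. fs_delta R (m \<oplus>\<^bsub>M\<^esub> m') n p \<ominus>\<^bsub>R\<^esub> fs_delta R m n p \<ominus>\<^bsub>R\<^esub> fs_delta R m' n p)
       = (\<lambda>p. fs_delta R (m \<oplus>\<^bsub>M\<^esub> m') n p \<ominus>\<^bsub>R\<^esub> (fs_delta R m n p \<oplus>\<^bsub>R\<^esub> fs_delta R m' n p))"
    proof
      fix p
      have "fs_delta R (m \<oplus>\<^bsub>M\<^esub> m') n p \<in> carrier R" "fs_delta R m n p \<in> carrier R" "fs_delta R m' n p \<in> carrier R"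
        by (rule fs_delta_closed)+
      then show "fs_delta R (m \<oplus>\<^bsub>M\<^esub> m') n p \<ominus>\<^bsub>R\<^esub> fs_delta R m n p \<ominus>\<^bsub>R\<^esub> fs_delta R m' n p
          = fs_delta R (m \<oplus>\<^bsub>M\<^esub> m') n p \<ominus>\<^bsub>R\<^esub> (fs_delta R m n p \<oplus>\<^bsub>R\<^esub> fs_delta R m' n p)" by algebra
    qed
    ultimately show "(\<lambda>p. fs_delta R (m \<oplus>\<^bsub>M\<^esub> m') n p \<ominus>\<^bsub>R\<^esub> (fs_delta R m n p \<oplus>\<^bsub>R\<^esub> fs_delta R m' n p)) \<in> REL"
      by simp
  qed
qed

lemma tens_add_snd: assumes "m \<in> carrier M" "n \<in> carrier N" "n' \<in> carrier N"
  shows "tens R M N m (n \<oplus>\<^bsub>N\<^esub> n') = tens R M N m n \<oplus>\<^bsub>T\<^esub> tens R M N m n'"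
proof -
  have d: "fs_delta R m (n \<oplus>\<^bsub>N\<^esub> n') \<in> FS" "fs_delta R m n \<in> FS" "fs_delta R m n' \<in> FS"
    using assms by (auto intro!: fs_delta_free_sums)
  show ?thesis unfolding tens_def tensor_add_class[OF d(2,3)]
  proof (rule tensor_class_eqI[OF d(1) free_sums_add[OF d(2,3)]])
    have "(\<lambda>p. fs_delta R m (n \<oplus>\<^bsub>N\<^esub> n') p \<ominus>\<^bsub>R\<^esub> fs_delta R m n p \<ominus>\<^bsub>R\<^esub> fs_delta R m n' p) \<in> REL"
      using assms by (rule tensor_rel.rel_add_r)
    moreover have "(\<lambda>p. fs_delta R m (n \<oplus>\<^bsub>N\<^esub> n') p \<ominus>\<^bsub>R\<^esub> fs_delta R m n p \<ominus>\<^bsub>R\<^esub> fs_delta R m n' p)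
       = (\<lambda>p. fs_delta R m (n \<oplus>\<^bsub>N\<^esub> n') p \<ominus>\<^bsub>R\<^esub> (fs_delta R m n p \<oplus>\<^bsub>R\<^esub> fs_delta R m n' p))"
    proof
      fix p
      have "fs_delta R m (n \<oplus>\<^bsub>N\<^esub> n') p \<in> carrier R" "fs_delta R m n p \<in> carrier R" "fs_delta R m n' p \<in> carrier R"
        by (rule fs_delta_closed)+
      then show "fs_delta R m (n \<oplus>\<^bsub>N\<^esub> n') p \<ominus>\<^bsub>R\<^esub> fs_delta R m n p \<ominus>\<^bsub>R\<^esub> fs_delta R m n' p
          = fs_delta R m (n \<oplus>\<^bsub>N\<^esub> n') p \<ominus>\<^bsub>R\<^esub> (fs_delta R m n p \<oplus>\<^bsub>R\<^esub> fs_delta R m n' p)" by algebra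
    qed
    ultimately show "(\<lambda>p. fs_delta R m (n \<oplus>\<^bsub>N\<^esub> n') p \<ominus>\<^bsub>R\<^esub> (fs_delta R m n p \<oplus>\<^bsub>R\<^esub> fs_delta R m n' p)) \<in> REL"
      by simp
  qed
qed

lemma tens_smult_fst: assumes "a \<in> carrier R" "m \<in> carrier M" "n \<in> carrier N"
  shows "tens R M N (a \<odot>\<^bsub>M\<^esub> m) n = a \<odot>\<^bsub>T\<^esub> tens R M N m n"
proof -
  have d: "fs_delta R (a \<odot>\<^bsub>M\<^esub> m) n \<in> FS" "fs_delta R m n \<in> FS"
    using assms by (auto intro!: fs_delta_free_sums)
  show ?thesis unfolding tens_def tensor_smult_class[OF assms(1) d(2)]
    by (rule tensor_class_eqI[OF d(1) free_sums_smult[OF assms(1) d(2)]], rule tensor_rel.rel_smult_l[OF assms])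
qed

lemma tens_smult_snd: assumes "a \<in> carrier R" "m \<in> carrier M" "n \<in> carrier N"
  shows "tens R M N m (a \<odot>\<^bsub>N\<^esub> n) = a \<odot>\<^bsub>T\<^esub> tens R M N m n"
proof -
  have d: "fs_delta R m (a \<odot>\<^bsub>N\<^esub> n) \<in> FS" "fs_delta R m n \<in> FS"
    using assms by (auto intro!: fs_delta_free_sums)
  show ?thesis unfolding tens_def tensor_smult_class[OF assms(1) d(2)]
    by (rule tensor_class_eqI[OF d(1) free_sums_smult[OF assms(1) d(2)]], rule tensor_rel.rel_smult_r[OF assms])
qed

lemma tens_bilinear: "bilinear R M N T (\<lambda>(a, b). tens R M N a b)"
  by (rule bilinearI) (auto simp: linear_map_def tens_closed tens_add_fst tens_add_snd tens_smult_fst tens_smult_snd)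

end

definition free_lift :: "'r ring \<Rightarrow> ('r, 'p) module \<Rightarrow> ('m \<times> 'n \<Rightarrow> 'p) \<Rightarrow> ('m \<times> 'n \<Rightarrow> 'r) \<Rightarrow> 'p" where
  "free_lift R P \<phi> f = finsum P (\<lambda>q. f q \<odot>\<^bsub>P\<^esub> \<phi> q) (fsupp R f)"

lemma tlift_free_lift: "tlift R M N P \<phi> X = free_lift R P \<phi> (rep X)"
  unfolding tlift_def free_lift_def ..

locale tensor_lift = tensor_product R M N + P: module R P
  for R :: "'r ring" and M :: "('r, 'm) module" and N :: "('r, 'n) module" and P :: "('r, 'p) module"
begin

lemma free_lift_superset: assumes f: "f \<in> FS" and A: "finite A" "fsupp R f \<subseteq> A" "A \<subseteq> carrier M \<times> carrier N"
  and phi: "\<phi> \<in> carrier M \<times> carrier N \<rightarrow> carrier P"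
  shows "free_lift R P \<phi> f = (\<Oplus>\<^bsub>P\<^esub>q\<in>A. f q \<odot>\<^bsub>P\<^esub> \<phi> q)"
  unfolding free_lift_def
proof (rule P.add.finprod_mono_neutral_cong_left)
  show "finite A" "fsupp R f \<subseteq> A" by (fact A)+
  show "\<And>i. i \<in> A - fsupp R f \<Longrightarrow> f i \<odot>\<^bsub>P\<^esub> \<phi> i = \<zero>\<^bsub>P\<^esub>"
    using A phi unfolding fsupp_def by (auto simp: Pi_def)
  show "\<And>x. x \<in> fsupp R f \<Longrightarrow> f x \<odot>\<^bsub>P\<^esub> \<phi> x = f x \<odot>\<^bsub>P\<^esub> \<phi> x" by simp
  show "(\<lambda>q. f q \<odot>\<^bsub>P\<^esub> \<phi> q) \<in> A \<rightarrow> carrier P"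
    using A phi free_sumsD[OF f] by (auto simp: Pi_def)
qed

lemma free_lift_closed: assumes f: "f \<in> FS" and phi: "\<phi> \<in> carrier M \<times> carrier N \<rightarrow> carrier P"
  shows "free_lift R P \<phi> f \<in> carrier P"
  unfolding free_lift_def using free_sumsD[OF f] phi by (intro P.finsum_closed) (auto simp: Pi_def)

lemma free_lift_add: assumes f: "f \<in> FS" "g \<in> FS" and phi: "\<phi> \<in> carrier M \<times> carrier N \<rightarrow> carrier P"
  shows "free_lift R P \<phi> (\<lambda>p. f p \<oplus>\<^bsub>R\<^esub> g p) = free_lift R P \<phi> f \<oplus>\<^bsub>P\<^esub> free_lift R P \<phi> g"
proof -
  let ?A = "fsupp R f \<union> fsupp R g"
  have A: "finite ?A" "?A \<subseteq> carrier M \<times> carrier N" using free_sumsD[OF f(1)] free_sumsD[OF f(2)] by auto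
  have "free_lift R P \<phi> (\<lambda>p. f p \<oplus>\<^bsub>R\<^esub> g p) = (\<Oplus>\<^bsub>P\<^esub>q\<in>?A. (f q \<oplus>\<^bsub>R\<^esub> g q) \<odot>\<^bsub>P\<^esub> \<phi> q)"
    by (rule free_lift_superset[OF free_sums_add[OF f] A(1) fsupp_add[OF R.is_cring] A(2) phi])
  also have "\<dots> = (\<Oplus>\<^bsub>P\<^esub>q\<in>?A. f q \<odot>\<^bsub>P\<^esub> \<phi> q \<oplus>\<^bsub>P\<^esub> g q \<odot>\<^bsub>P\<^esub> \<phi> q)"
    using A phi free_sumsD[OF f(1)] free_sumsD[OF f(2)]
    by (intro P.finsum_cong') (auto simp: Pi_def P.smult_l_distr)
  also have "\<dots> = (\<Oplus>\<^bsub>P\<^esub>q\<in>?A. f q \<odot>\<^bsub>P\<^esub> \<phi> q) \<oplus>\<^bsub>P\<^esub> (\<Oplus>\<^bsub>P\<^esub>q\<in>?A. g q \<odot>\<^bsub>P\<^esub> \<phi> q)"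
    using A phi free_sumsD[OF f(1)] free_sumsD[OF f(2)]
    by (intro P.finsum_addf) (auto simp: Pi_def)
  also have "\<dots> = free_lift R P \<phi> f \<oplus>\<^bsub>P\<^esub> free_lift R P \<phi> g"
    using free_lift_superset[OF f(1) A(1) _ A(2) phi] free_lift_superset[OF f(2) A(1) _ A(2) phi] by auto
  finally show ?thesis .
qed

lemma free_lift_smult: assumes a: "a \<in> carrier R" and f: "f \<in> FS" and phi: "\<phi> \<in> carrier M \<times> carrier N \<rightarrow> carrier P"
  shows "free_lift R P \<phi> (\<lambda>p. a \<otimes>\<^bsub>R\<^esub> f p) = a \<odot>\<^bsub>P\<^esub> free_lift R P \<phi> f"
proof -
  let ?A = "fsupp R f"
  have A: "finite ?A" "?A \<subseteq> carrier M \<times> carrier N" using free_sumsD[OF f(1)] by auto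
  have "free_lift R P \<phi> (\<lambda>p. a \<otimes>\<^bsub>R\<^esub> f p) = (\<Oplus>\<^bsub>P\<^esub>q\<in>?A. (a \<otimes>\<^bsub>R\<^esub> f q) \<odot>\<^bsub>P\<^esub> \<phi> q)"
    by (rule free_lift_superset[OF free_sums_smult[OF a f] A(1) fsupp_smult[OF R.is_cring a] A(2) phi])
  also have "\<dots> = (\<Oplus>\<^bsub>P\<^esub>q\<in>?A. a \<odot>\<^bsub>P\<^esub> (f q \<odot>\<^bsub>P\<^esub> \<phi> q))"
    using A phi free_sumsD[OF f(1)] a
    by (intro P.finsum_cong') (auto simp: Pi_def P.smult_assoc1)
  also have "\<dots> = a \<odot>\<^bsub>P\<^esub> (\<Oplus>\<^bsub>P\<^esub>q\<in>?A. f q \<odot>\<^bsub>P\<^esub> \<phi> q)"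
    using A phi free_sumsD[OF f(1)] a
    by (intro P.finsum_smult_ldistr[symmetric]) (auto simp: Pi_def)
  finally show ?thesis unfolding free_lift_def .
qed

lemma free_lift_zero: "free_lift R P \<phi> (\<lambda>p. \<zero>\<^bsub>R\<^esub>) = \<zero>\<^bsub>P\<^esub>"
  unfolding free_lift_def fsupp_def by simp

lemma free_lift_diff: assumes f: "f \<in> FS" "g \<in> FS" and phi: "\<phi> \<in> carrier M \<times> carrier N \<rightarrow> carrier P"
  shows "free_lift R P \<phi> (\<lambda>p. f p \<ominus>\<^bsub>R\<^esub> g p) = free_lift R P \<phi> f \<ominus>\<^bsub>P\<^esub> free_lift R P \<phi> g"
proof -
  have "(\<lambda>p. f p \<ominus>\<^bsub>R\<^esub> g p) = (\<lambda>p. f p \<oplus>\<^bsub>R\<^esub> (\<ominus>\<^bsub>R\<^esub> \<one>\<^bsub>R\<^esub> \<otimes>\<^bsub>R\<^esub> g p))"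
  proof
    fix p have "f p \<in> carrier R" "g p \<in> carrier R" using free_sumsD f by auto
    then show "f p \<ominus>\<^bsub>R\<^esub> g p = f p \<oplus>\<^bsub>R\<^esub> (\<ominus>\<^bsub>R\<^esub> \<one>\<^bsub>R\<^esub> \<otimes>\<^bsub>R\<^esub> g p)" by algebra
  qed
  then have "free_lift R P \<phi> (\<lambda>p. f p \<ominus>\<^bsub>R\<^esub> g p) = free_lift R P \<phi> f \<oplus>\<^bsub>P\<^esub> (\<ominus>\<^bsub>R\<^esub> \<one>\<^bsub>R\<^esub>) \<odot>\<^bsub>P\<^esub> free_lift R P \<phi> g"
    using free_lift_add[OF f(1) free_sums_smult[OF _ f(2)] phi] free_lift_smult[OF _ f(2) phi] by simp
  also have "\<dots> = free_lift R P \<phi> f \<ominus>\<^bsub>P\<^esub> free_lift R P \<phi> g"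
    using free_lift_closed[OF f(2) phi] by (simp add: P.smult_l_minus P.minus_eq)
  finally show ?thesis .
qed

lemma free_lift_fs_delta: assumes "m \<in> carrier M" "n \<in> carrier N" and phi: "\<phi> \<in> carrier M \<times> carrier N \<rightarrow> carrier P"
  shows "free_lift R P \<phi> (fs_delta R m n) = \<phi> (m, n)"
proof -
  have "free_lift R P \<phi> (fs_delta R m n) = (\<Oplus>\<^bsub>P\<^esub>q\<in>{(m,n)}. fs_delta R m n q \<odot>\<^bsub>P\<^esub> \<phi> q)"
    using assms by (intro free_lift_superset fs_delta_free_sums fsupp_fs_delta) auto
  also have "\<dots> = \<phi> (m, n)" using assms by (simp add: fs_delta_def Pi_def)
  finally show ?thesis .
qed

lemma free_lift_tensor_rel: assumes phi: "bilinear R M N P \<phi>" and f: "f \<in> REL"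
  shows "free_lift R P \<phi> f = \<zero>\<^bsub>P\<^esub>"
proof -
  have phic: "\<phi> \<in> carrier M \<times> carrier N \<rightarrow> carrier P" using bilinear_closed[OF phi] by auto
  from f show ?thesis
  proof (induction rule: tensor_rel.induct)
    case rel_zero
    then show ?case by (rule free_lift_zero)
  next
    case (rel_add f g)
    then show ?case using free_lift_add[OF tensor_rel_free_sums tensor_rel_free_sums phic] by simp
  next
    case (rel_smult a f)
    then show ?case using free_lift_smult[OF _ tensor_rel_free_sums phic] by simp
  next
    case (rel_add_l m m' n)
    then show ?case
      using linear_map_add[OF bilinear_fst[OF phi rel_add_l(3)] rel_add_l(1,2)] bilinear_closed[OF phi]
      by (simp add: phic free_lift_diff free_sums_diff fs_delta_free_sums free_lift_fs_delta P.add_minus_minus_cancel)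
  next
    case (rel_add_r m n n')
    then show ?case
      using linear_map_add[OF bilinear_snd[OF phi rel_add_r(1)] rel_add_r(2,3)] bilinear_closed[OF phi]
      by (simp add: phic free_lift_diff free_sums_diff fs_delta_free_sums free_lift_fs_delta P.add_minus_minus_cancel)
  next
    case (rel_smult_l a m n)
    then show ?case
      using linear_map_smult[OF bilinear_fst[OF phi rel_smult_l(3)] rel_smult_l(1,2)] bilinear_closed[OF phi]
      by (simp add: phic free_lift_diff free_lift_smult free_sums_smult fs_delta_free_sums free_lift_fs_delta P.minus_self)
  next
    case (rel_smult_r a m n)
    then show ?case
      using linear_map_smult[OF bilinear_snd[OF phi rel_smult_r(2)] rel_smult_r(1,3)] bilinear_closed[OF phi]
      by (simp add: phic free_lift_diff free_lift_smult free_sums_smult fs_delta_free_sums free_lift_fs_delta P.minus_self)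
  qed
qed

lemma tlift_tensor_class: assumes phi: "bilinear R M N P \<phi>" and f: "f \<in> FS"
  shows "tlift R M N P \<phi> (cls f) = free_lift R P \<phi> f"
proof -
  have phic: "\<phi> \<in> carrier M \<times> carrier N \<rightarrow> carrier P" using bilinear_closed[OF phi] by auto
  let ?g = "rep (cls f)"
  have g: "?g \<in> FS" "(\<lambda>p. ?g p \<ominus>\<^bsub>R\<^esub> f p) \<in> REL" using rep_tensor_class[OF f] by auto
  have "?g = (\<lambda>p. (?g p \<ominus>\<^bsub>R\<^esub> f p) \<oplus>\<^bsub>R\<^esub> f p)"
  proof
    fix p have "f p \<in> carrier R" "?g p \<in> carrier R" using free_sumsD f g by auto
    then show "?g p = (?g p \<ominus>\<^bsub>R\<^esub> f p) \<oplus>\<^bsub>R\<^esub> f p" by algebra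
  qed
  then have "free_lift R P \<phi> ?g = free_lift R P \<phi> (\<lambda>p. ?g p \<ominus>\<^bsub>R\<^esub> f p) \<oplus>\<^bsub>P\<^esub> free_lift R P \<phi> f"
    using free_lift_add[OF tensor_rel_free_sums[OF g(2)] f phic] by metis
  also have "\<dots> = free_lift R P \<phi> f" using free_lift_tensor_rel[OF phi g(2)] free_lift_closed[OF f phic] by simp
  finally show ?thesis unfolding tlift_free_lift .
qed

lemma tlift_tens: assumes phi: "bilinear R M N P \<phi>" and "m \<in> carrier M" "n \<in> carrier N"
  shows "tlift R M N P \<phi> (tens R M N m n) = \<phi> (m, n)"
  unfolding tens_def using assms bilinear_closed[OF phi]
  by (simp add: tlift_tensor_class fs_delta_free_sums free_lift_fs_delta Pi_def)

lemma tlift_closed: assumes "X \<in> carrier T" and phi: "\<phi> \<in> carrier M \<times> carrier N \<rightarrow> carrier P"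
  shows "tlift R M N P \<phi> X \<in> carrier P"
  unfolding tlift_free_lift by (rule free_lift_closed[OF rep_free_sums[OF assms(1)] phi])

lemma linear_map_tlift: assumes phi: "bilinear R M N P \<phi>"
  shows "linear_map R T P (tlift R M N P \<phi>)"
proof -
  have phic: "\<phi> \<in> carrier M \<times> carrier N \<rightarrow> carrier P" using bilinear_closed[OF phi] by auto
  show ?thesis unfolding linear_map_def
  proof (intro conjI ballI)
    show "tlift R M N P \<phi> \<in> carrier T \<rightarrow> carrier P" using tlift_closed[OF _ phic] by auto
  next
    fix X Y assume "X \<in> carrier T" "Y \<in> carrier T"
    then obtain f g where fg: "f \<in> FS" "g \<in> FS" "X = cls f" "Y = cls g" by (metis tensor_carrierE)
    show "tlift R M N P \<phi> (X \<oplus>\<^bsub>T\<^esub> Y) = tlift R M N P \<phi> X \<oplus>\<^bsub>P\<^esub> tlift R M N P \<phi> Y"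
      unfolding fg tensor_add_class[OF fg(1,2)] tlift_tensor_class[OF phi free_sums_add[OF fg(1,2)]] tlift_tensor_class[OF phi fg(1)]
        tlift_tensor_class[OF phi fg(2)] by (rule free_lift_add[OF fg(1,2) phic])
  next
    fix a X assume "a \<in> carrier R" "X \<in> carrier T"
    then obtain f where f: "f \<in> FS" "X = cls f" by (metis tensor_carrierE)
    show "tlift R M N P \<phi> (a \<odot>\<^bsub>T\<^esub> X) = a \<odot>\<^bsub>P\<^esub> tlift R M N P \<phi> X"
      unfolding f tensor_smult_class[OF \<open>a \<in> carrier R\<close> f(1)] tlift_tensor_class[OF phi free_sums_smult[OF \<open>a \<in> carrier R\<close> f(1)]]
        tlift_tensor_class[OF phi f(1)] by (rule free_lift_smult[OF \<open>a \<in> carrier R\<close> f(1) phic])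
  qed
qed

lemma tlift_cong: assumes "X \<in> carrier T" "\<And>a b. a \<in> carrier M \<Longrightarrow> b \<in> carrier N \<Longrightarrow> \<phi> (a, b) = \<phi>' (a, b)"
   "\<phi>' \<in> carrier M \<times> carrier N \<rightarrow> carrier P"
  shows "tlift R M N P \<phi> X = tlift R M N P \<phi>' X"
proof -
  have "fsupp R (rep X) \<subseteq> carrier M \<times> carrier N" using free_sumsD rep_free_sums assms by auto
  then show ?thesis unfolding tlift_def using assms(2,3) free_sumsD[OF rep_free_sums[OF assms(1)]]
    by (intro P.finsum_cong') (auto simp: Pi_def)
qed

lemma tlift_add_fun:
  assumes "X \<in> carrier T" "\<phi>1 \<in> carrier M \<times> carrier N \<rightarrow> carrier P" "\<phi>2 \<in> carrier M \<times> carrier N \<rightarrow> carrier P"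
  shows "tlift R M N P (\<lambda>q. \<phi>1 q \<oplus>\<^bsub>P\<^esub> \<phi>2 q) X = tlift R M N P \<phi>1 X \<oplus>\<^bsub>P\<^esub> tlift R M N P \<phi>2 X"
proof -
  have f: "rep X \<in> FS" by (rule rep_free_sums[OF assms(1)])
  have A: "fsupp R (rep X) \<subseteq> carrier M \<times> carrier N" "finite (fsupp R (rep X))" using free_sumsD[OF f] by auto
  have "tlift R M N P (\<lambda>q. \<phi>1 q \<oplus>\<^bsub>P\<^esub> \<phi>2 q) X =
        (\<Oplus>\<^bsub>P\<^esub>q\<in>fsupp R (rep X). rep X q \<odot>\<^bsub>P\<^esub> \<phi>1 q \<oplus>\<^bsub>P\<^esub> rep X q \<odot>\<^bsub>P\<^esub> \<phi>2 q)"
    unfolding tlift_def using A assms free_sumsD[OF f]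
    by (intro P.finsum_cong') (auto simp: Pi_def P.smult_r_distr)
  also have "\<dots> = tlift R M N P \<phi>1 X \<oplus>\<^bsub>P\<^esub> tlift R M N P \<phi>2 X"
    unfolding tlift_def using A assms free_sumsD[OF f] by (intro P.finsum_addf) (auto simp: Pi_def)
  finally show ?thesis .
qed

lemma tlift_smult_fun:
  assumes "X \<in> carrier T" "\<phi> \<in> carrier M \<times> carrier N \<rightarrow> carrier P" "c \<in> carrier R"
  shows "tlift R M N P (\<lambda>q. c \<odot>\<^bsub>P\<^esub> \<phi> q) X = c \<odot>\<^bsub>P\<^esub> tlift R M N P \<phi> X"
proof -
  have f: "rep X \<in> FS" by (rule rep_free_sums[OF assms(1)])
  have A: "fsupp R (rep X) \<subseteq> carrier M \<times> carrier N" "finite (fsupp R (rep X))" using free_sumsD[OF f] by auto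
  have "tlift R M N P (\<lambda>q. c \<odot>\<^bsub>P\<^esub> \<phi> q) X =
        (\<Oplus>\<^bsub>P\<^esub>q\<in>fsupp R (rep X). c \<odot>\<^bsub>P\<^esub> (rep X q \<odot>\<^bsub>P\<^esub> \<phi> q))"
    unfolding tlift_def using A assms free_sumsD[OF f]
    by (intro P.finsum_cong') (auto simp: Pi_def P.smult_assoc1[symmetric] R.m_comm)
  also have "\<dots> = c \<odot>\<^bsub>P\<^esub> tlift R M N P \<phi> X"
    unfolding tlift_def using A assms free_sumsD[OF f]
    by (intro P.finsum_smult_ldistr[symmetric]) (auto simp: Pi_def)
  finally show ?thesis .
qed

lemma linear_map_tlift_comp: assumes "module R Q" "linear_map R P Q h" "X \<in> carrier T" "\<phi> \<in> carrier M \<times> carrier N \<rightarrow> carrier P"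
  shows "h (tlift R M N P \<phi> X) = tlift R M N Q (\<lambda>q. h (\<phi> q)) X"
proof -
  interpret Q: module R Q by fact
  have f: "rep X \<in> FS" by (rule rep_free_sums[OF assms(3)])
  have A: "fsupp R (rep X) \<subseteq> carrier M \<times> carrier N" "finite (fsupp R (rep X))" using free_sumsD[OF f] by auto
  have "h (tlift R M N P \<phi> X) = (\<Oplus>\<^bsub>Q\<^esub>i\<in>fsupp R (rep X). h (rep X i \<odot>\<^bsub>P\<^esub> \<phi> i))"
    unfolding tlift_def
    using A assms(4) free_sumsD[OF f] by (intro linear_map_finsum[OF P.module_axioms assms(1,2) A(2)]) (auto simp: Pi_def)
  also have "\<dots> = tlift R M N Q (\<lambda>q. h (\<phi> q)) X"
    unfolding tlift_def
    using A assms(4) free_sumsD[OF f] linear_map_smult[OF assms(2)] linear_map_closed[OF assms(2)]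
    by (intro Q.finsum_cong') (auto simp: Pi_def)
  finally show ?thesis .
qed

lemma linear_map_tlift_param: assumes "module R C" "X \<in> carrier T"
  "\<And>a b. a \<in> carrier M \<Longrightarrow> b \<in> carrier N \<Longrightarrow> linear_map R C P (\<lambda>c. \<phi> c (a, b))"
  shows "linear_map R C P (\<lambda>c. tlift R M N P (\<phi> c) X)"
proof -
  interpret C: module R C by fact
  have cl: "\<phi> c \<in> carrier M \<times> carrier N \<rightarrow> carrier P" if "c \<in> carrier C" for c
    using linear_map_closed[OF assms(3) that] by auto
  show ?thesis unfolding linear_map_def
  proof (intro conjI ballI)
    show "(\<lambda>c. tlift R M N P (\<phi> c) X) \<in> carrier C \<rightarrow> carrier P" using tlift_closed[OF assms(2) cl] by auto
  next
    fix x y assume xy: "x \<in> carrier C" "y \<in> carrier C"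
    have "tlift R M N P (\<phi> (x \<oplus>\<^bsub>C\<^esub> y)) X = tlift R M N P (\<lambda>q. \<phi> x q \<oplus>\<^bsub>P\<^esub> \<phi> y q) X"
      using xy cl by (intro tlift_cong[OF assms(2)]) (auto simp: linear_map_add[OF assms(3)] Pi_def)
    also have "\<dots> = tlift R M N P (\<phi> x) X \<oplus>\<^bsub>P\<^esub> tlift R M N P (\<phi> y) X"
      by (rule tlift_add_fun[OF assms(2) cl cl], fact+)
    finally show "tlift R M N P (\<phi> (x \<oplus>\<^bsub>C\<^esub> y)) X = tlift R M N P (\<phi> x) X \<oplus>\<^bsub>P\<^esub> tlift R M N P (\<phi> y) X" .
  next
    fix a x assume ax: "a \<in> carrier R" "x \<in> carrier C"
    have "tlift R M N P (\<phi> (a \<odot>\<^bsub>C\<^esub> x)) X = tlift R M N P (\<lambda>q. a \<odot>\<^bsub>P\<^esub> \<phi> x q) X"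
      using ax cl by (intro tlift_cong[OF assms(2)]) (auto simp: linear_map_smult[OF assms(3)] Pi_def)
    also have "\<dots> = a \<odot>\<^bsub>P\<^esub> tlift R M N P (\<phi> x) X"
      by (rule tlift_smult_fun[OF assms(2) cl], fact+)
    finally show "tlift R M N P (\<phi> (a \<odot>\<^bsub>C\<^esub> x)) X = a \<odot>\<^bsub>P\<^esub> tlift R M N P (\<phi> x) X" .
  qed
qed

end

lemma tensor_productI: "module R M \<Longrightarrow> module R N \<Longrightarrow> tensor_product R M N"
  unfolding tensor_product_def using module.axioms(1) by blast

lemma tensor_liftI: "module R M \<Longrightarrow> module R N \<Longrightarrow> module R P \<Longrightarrow> tensor_lift R M N P"
  unfolding tensor_lift_def using tensor_productI by blast

context tensor_product
begin

lemma finsum_fs_delta: assumes "finite A" "A \<subseteq> carrier M \<times> carrier N" "\<And>p. g p \<in> carrier R"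
  shows "(\<Oplus>\<^bsub>T\<^esub>q\<in>A. g q \<odot>\<^bsub>T\<^esub> cls (fs_delta R (fst q) (snd q))) = cls (\<lambda>p. if p \<in> A then g p else \<zero>\<^bsub>R\<^esub>)"
  using assms(1,2)
proof (induction A rule: finite_induct)
  interpret TT: module R T by (rule tensor_module)
  case empty
  show ?case by (simp add: tensor_zero_class)
next
  interpret TT: module R T by (rule tensor_module)
  case (insert x A)
  have fsA: "(\<lambda>p. if p \<in> A then g p else \<zero>\<^bsub>R\<^esub>) \<in> FS"
    unfolding free_sums_iff fsupp_def using insert assms(3) by (auto intro: finite_subset)
  have dx: "fs_delta R (fst x) (snd x) \<in> FS" using insert by (intro fs_delta_free_sums) auto
  have "(\<Oplus>\<^bsub>T\<^esub>q\<in>insert x A. g q \<odot>\<^bsub>T\<^esub> cls (fs_delta R (fst q) (snd q)))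
      = g x \<odot>\<^bsub>T\<^esub> cls (fs_delta R (fst x) (snd x)) \<oplus>\<^bsub>T\<^esub> (\<Oplus>\<^bsub>T\<^esub>q\<in>A. g q \<odot>\<^bsub>T\<^esub> cls (fs_delta R (fst q) (snd q)))"
    using insert assms(3) by (intro TT.finsum_insert) (auto simp: Pi_def intro!: tensor_class_closed fs_delta_free_sums)
  also have "\<dots> = cls (\<lambda>p. g x \<otimes>\<^bsub>R\<^esub> fs_delta R (fst x) (snd x) p \<oplus>\<^bsub>R\<^esub> (if p \<in> A then g p else \<zero>\<^bsub>R\<^esub>))"
    using insert by (simp add: tensor_smult_class[OF assms(3) dx] tensor_add_class[OF free_sums_smult[OF assms(3) dx] fsA])
  also have "\<dots> = cls (\<lambda>p. if p \<in> insert x A then g p else \<zero>\<^bsub>R\<^esub>)"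
    by (rule tensor_class_cong, rule free_sums_add[OF free_sums_smult[OF assms(3) dx] fsA])
       (use insert assms(3) in \<open>auto simp: fs_delta_def\<close>)
  finally show ?case .
qed

lemma tlift_tens_id: assumes "X \<in> carrier T" shows "tlift R M N T (\<lambda>(a, b). tens R M N a b) X = X"
proof -
  let ?g = "rep X"
  have f: "?g \<in> FS" by (rule rep_free_sums[OF assms(1)])
  have "tlift R M N T (\<lambda>(a, b). tens R M N a b) X = (\<Oplus>\<^bsub>T\<^esub>q\<in>fsupp R ?g. ?g q \<odot>\<^bsub>T\<^esub> cls (fs_delta R (fst q) (snd q)))"
    unfolding tlift_def tens_def by (simp add: case_prod_beta)
  also have "\<dots> = cls (\<lambda>p. if p \<in> fsupp R ?g then ?g p else \<zero>\<^bsub>R\<^esub>)"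
    using free_sumsD[OF f] by (intro finsum_fs_delta) auto
  also have "\<dots> = cls ?g" by (rule arg_cong[where f = cls]) (auto simp: fsupp_def)
  also have "\<dots> = X" by (rule tensor_class_rep[OF assms])
  finally show ?thesis .
qed

lemma tlift_expand: assumes "module R Q" "linear_map R T Q h" "X \<in> carrier T"
  shows "h X = tlift R M N Q (\<lambda>(a, b). h (tens R M N a b)) X"
proof -
  interpret tensor_lift R M N T by (rule tensor_liftI, rule M.module_axioms, rule N.module_axioms, rule tensor_module)
  have "h X = h (tlift R M N T (\<lambda>(a, b). tens R M N a b) X)" using tlift_tens_id[OF assms(3)] by simp
  also have "\<dots> = tlift R M N Q (\<lambda>q. h ((\<lambda>(a, b). tens R M N a b) q)) X"
    by (rule linear_map_tlift_comp[OF assms(1,2,3)]) (auto simp: tens_closed)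
  also have "\<dots> = tlift R M N Q (\<lambda>(a, b). h (tens R M N a b)) X"
    by (simp add: split_def)
  finally show ?thesis .
qed

end

lemma tensor_module: "module R M \<Longrightarrow> module R N \<Longrightarrow> module R (tensor R M N)"
  by (rule tensor_product.tensor_module[OF tensor_productI])

lemma tens_closed: "module R M \<Longrightarrow> module R N \<Longrightarrow> a \<in> carrier M \<Longrightarrow> b \<in> carrier N \<Longrightarrow>
   tens R M N a b \<in> carrier (tensor R M N)"
  by (rule tensor_product.tens_closed[OF tensor_productI])

lemma tens_bilinear: "module R M \<Longrightarrow> module R N \<Longrightarrow> bilinear R M N (tensor R M N) (\<lambda>(a, b). tens R M N a b)"
  by (rule tensor_product.tens_bilinear[OF tensor_productI])

lemma linear_map_tens_fst: "module R M \<Longrightarrow> module R N \<Longrightarrow> b \<in> carrier N \<Longrightarrow> linear_map R M (tensor R M N) (\<lambda>a. tens R M N a b)"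
  using bilinear_fst[OF tens_bilinear[of R M N]] by simp

lemma linear_map_tens_snd: "module R M \<Longrightarrow> module R N \<Longrightarrow> a \<in> carrier M \<Longrightarrow> linear_map R N (tensor R M N) (\<lambda>b. tens R M N a b)"
  using bilinear_snd[OF tens_bilinear[of R M N]] by simp

lemma tlift_tens: "module R M \<Longrightarrow> module R N \<Longrightarrow> module R P \<Longrightarrow> bilinear R M N P \<phi> \<Longrightarrow>
   a \<in> carrier M \<Longrightarrow> b \<in> carrier N \<Longrightarrow> tlift R M N P \<phi> (tens R M N a b) = \<phi> (a, b)"
  by (rule tensor_lift.tlift_tens[OF tensor_liftI])

lemma linear_map_tlift: "module R M \<Longrightarrow> module R N \<Longrightarrow> module R P \<Longrightarrow> bilinear R M N P \<phi> \<Longrightarrow>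
   linear_map R (tensor R M N) P (tlift R M N P \<phi>)"
  by (rule tensor_lift.linear_map_tlift[OF tensor_liftI])

lemma tlift_closed: assumes "module R M" "module R N" "module R P" "X \<in> carrier (tensor R M N)"
   "\<And>a b. a \<in> carrier M \<Longrightarrow> b \<in> carrier N \<Longrightarrow> \<phi> (a, b) \<in> carrier P"
 shows "tlift R M N P \<phi> X \<in> carrier P"
proof -
  interpret tensor_lift R M N P by (rule tensor_liftI; fact)
  show ?thesis by (rule tlift_closed) (use assms in auto)
qed

lemma tlift_cong: assumes "module R M" "module R N" "module R P" "X \<in> carrier (tensor R M N)"
   "\<And>a b. a \<in> carrier M \<Longrightarrow> b \<in> carrier N \<Longrightarrow> \<phi> (a, b) = \<phi>' (a, b)"
   "\<And>a b. a \<in> carrier M \<Longrightarrow> b \<in> carrier N \<Longrightarrow> \<phi>' (a, b) \<in> carrier P"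
 shows "tlift R M N P \<phi> X = tlift R M N P \<phi>' X"
proof -
  interpret tensor_lift R M N P by (rule tensor_liftI; fact)
  show ?thesis by (rule tlift_cong) (use assms in auto)
qed

lemma tlift_add_fun: assumes "module R M" "module R N" "module R P" "X \<in> carrier (tensor R M N)"
   "\<And>a b. a \<in> carrier M \<Longrightarrow> b \<in> carrier N \<Longrightarrow> \<phi>1 (a, b) \<in> carrier P"
   "\<And>a b. a \<in> carrier M \<Longrightarrow> b \<in> carrier N \<Longrightarrow> \<phi>2 (a, b) \<in> carrier P"
 shows "tlift R M N P (\<lambda>q. \<phi>1 q \<oplus>\<^bsub>P\<^esub> \<phi>2 q) X = tlift R M N P \<phi>1 X \<oplus>\<^bsub>P\<^esub> tlift R M N P \<phi>2 X"
proof -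
  interpret tensor_lift R M N P by (rule tensor_liftI; fact)
  show ?thesis by (rule tlift_add_fun) (use assms in auto)
qed

lemma tlift_smult_fun: assumes "module R M" "module R N" "module R P" "X \<in> carrier (tensor R M N)"
   "\<And>a b. a \<in> carrier M \<Longrightarrow> b \<in> carrier N \<Longrightarrow> \<phi> (a, b) \<in> carrier P" "c \<in> carrier R"
 shows "tlift R M N P (\<lambda>q. c \<odot>\<^bsub>P\<^esub> \<phi> q) X = c \<odot>\<^bsub>P\<^esub> tlift R M N P \<phi> X"
proof -
  interpret tensor_lift R M N P by (rule tensor_liftI; fact)
  show ?thesis by (rule tlift_smult_fun) (use assms in auto)
qed

lemma linear_map_tlift_comp: assumes "module R M" "module R N" "module R P" "module R Q" "linear_map R P Q h"
   "X \<in> carrier (tensor R M N)"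
   "\<And>a b. a \<in> carrier M \<Longrightarrow> b \<in> carrier N \<Longrightarrow> \<phi> (a, b) \<in> carrier P"
 shows "h (tlift R M N P \<phi> X) = tlift R M N Q (\<lambda>q. h (\<phi> q)) X"
proof -
  interpret tensor_lift R M N P by (rule tensor_liftI; fact)
  show ?thesis by (rule linear_map_tlift_comp) (use assms in auto)
qed

lemma linear_map_tlift_param: assumes "module R M" "module R N" "module R P" "module R C"
   "X \<in> carrier (tensor R M N)"
   "\<And>a b. a \<in> carrier M \<Longrightarrow> b \<in> carrier N \<Longrightarrow> linear_map R C P (\<lambda>c. \<phi> c (a, b))"
 shows "linear_map R C P (\<lambda>c. tlift R M N P (\<phi> c) X)"
proof -
  interpret tensor_lift R M N P by (rule tensor_liftI; fact)
  show ?thesis by (rule linear_map_tlift_param) (use assms in auto)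
qed

lemma tlift_expand: "module R M \<Longrightarrow> module R N \<Longrightarrow> module R Q \<Longrightarrow> linear_map R (tensor R M N) Q h \<Longrightarrow>
   X \<in> carrier (tensor R M N) \<Longrightarrow> h X = tlift R M N Q (\<lambda>(a, b). h (tens R M N a b)) X"
  by (rule tensor_product.tlift_expand[OF tensor_productI])

lemma tensor_linear_map_ext: assumes "module R M" "module R N" "module R Q"
  "linear_map R (tensor R M N) Q h1" "linear_map R (tensor R M N) Q h2"
  "\<And>a b. a \<in> carrier M \<Longrightarrow> b \<in> carrier N \<Longrightarrow> h1 (tens R M N a b) = h2 (tens R M N a b)"
  "X \<in> carrier (tensor R M N)"
  shows "h1 X = h2 X"
proof -
  have "h1 X = tlift R M N Q (\<lambda>(a, b). h1 (tens R M N a b)) X" by (rule tlift_expand; fact)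
  also have "\<dots> = tlift R M N Q (\<lambda>(a, b). h2 (tens R M N a b)) X"
    using assms by (intro tlift_cong) (auto intro!: linear_map_closed[OF assms(5)] tens_closed)
  also have "\<dots> = h2 X" by (rule tlift_expand[symmetric]; fact)
  finally show ?thesis .
qed

lemma tspan_subset_carrier:
  assumes "module R M" "module R N" "S \<subseteq> carrier M \<times> carrier N"
  shows "tspan R M N S \<subseteq> carrier (tensor R M N)"
proof
  interpret T: module R "tensor R M N" by (rule tensor_module; fact)
  show "x \<in> carrier (tensor R M N)" if "x \<in> tspan R M N S" for x
    using that by induction (use assms in \<open>auto intro: tens_closed\<close>)
qed

lemma tspan_linear_map_eq: assumes "module R M" "module R N" "module R Q"
  "linear_map R (tensor R M N) Q h1" "linear_map R (tensor R M N) Q h2" "S \<subseteq> carrier M \<times> carrier N"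
  "\<And>a b. (a, b) \<in> S \<Longrightarrow> h1 (tens R M N a b) = h2 (tens R M N a b)"
  shows "x \<in> tspan R M N S \<Longrightarrow> h1 x = h2 x"
proof (induction rule: tspan.induct)
  case tspan_zero
  show ?case using linear_map_zero[OF tensor_module[OF assms(1,2)] assms(3,4)] linear_map_zero[OF tensor_module[OF assms(1,2)] assms(3,5)]
    by simp
next
  case (tspan_gen a b)
  then show ?case by (rule assms(7))
next
  case (tspan_add x y)
  have "x \<in> carrier (tensor R M N)" "y \<in> carrier (tensor R M N)"
    using tspan_add tspan_subset_carrier[OF assms(1,2,6)] by auto
  then show ?case using tspan_add linear_map_add[OF assms(4)] linear_map_add[OF assms(5)] by simp
next
  case (tspan_smult r x)
  have "x \<in> carrier (tensor R M N)"
    using tspan_smult tspan_subset_carrier[OF assms(1,2,6)] by auto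
  then show ?case using tspan_smult linear_map_smult[OF assms(4)] linear_map_smult[OF assms(5)] by simp
qed

lemma tspan_linear_map_zero: assumes "module R M" "module R N" "module R Q"
  "linear_map R (tensor R M N) Q h" "S \<subseteq> carrier M \<times> carrier N"
  "\<And>a b. (a, b) \<in> S \<Longrightarrow> h (tens R M N a b) = \<zero>\<^bsub>Q\<^esub>"
  shows "x \<in> tspan R M N S \<Longrightarrow> h x = \<zero>\<^bsub>Q\<^esub>"
  using tspan_linear_map_eq[OF assms(1-4) linear_map_zero_fun[OF tensor_module[OF assms(1,2)] assms(3)] assms(5)] assms(6) by metis

lemma tmap_bilinear: assumes "module R M" "module R N" "module R M'" "module R N'"
  "linear_map R M M' f" "linear_map R N N' g"
  shows "bilinear R M N (tensor R M' N') (\<lambda>(m, n). tens R M' N' (f m) (g n))"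
  using linear_map_comp[OF assms(5) linear_map_tens_fst[OF assms(3,4) linear_map_closed[OF assms(6)]]]
    linear_map_comp[OF assms(6) linear_map_tens_snd[OF assms(3,4) linear_map_closed[OF assms(5)]]]
  by (intro bilinearI)

lemma tmap_tens: assumes "module R M" "module R N" "module R M'" "module R N'"
  "linear_map R M M' f" "linear_map R N N' g" "a \<in> carrier M" "b \<in> carrier N"
  shows "tmap R M N M' N' f g (tens R M N a b) = tens R M' N' (f a) (g b)"
  unfolding tmap_def using tlift_tens[OF assms(1,2) tensor_module[OF assms(3,4)] tmap_bilinear[OF assms(1-6)] assms(7,8)]
  by simp

lemma linear_map_tmap: assumes "module R M" "module R N" "module R M'" "module R N'"
  "linear_map R M M' f" "linear_map R N N' g"
  shows "linear_map R (tensor R M N) (tensor R M' N') (tmap R M N M' N' f g)"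
  unfolding tmap_def by (rule linear_map_tlift[OF assms(1,2) tensor_module[OF assms(3,4)] tmap_bilinear[OF assms]])

section \<open>Filtered coalgebra monoids\<close>

locale filtered_coalg_monoid =
  fixes R :: "'r ring" and U :: "('r, 'u) module"
    and eps :: "'u \<Rightarrow> 'r" and psi :: "'u \<Rightarrow> ('u \<times> 'u \<Rightarrow> 'r) set"
    and sigma :: "('u \<times> 'u \<Rightarrow> 'r) set \<Rightarrow> 'u" and eta :: "'r \<Rightarrow> 'u"
    and F :: "nat \<Rightarrow> 'u set"
  assumes R_cring: "cring R"
    and U_monoid: "coalg_ab_monoid R U eps psi sigma eta"
    and F_good: "good_filtration R U eps psi F"
    and eta_good: "good_basepoint R eps F eta"
begin

abbreviation "T \<equiv> tensor R U U"
abbreviation "RR \<equiv> ring_as_module R"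
abbreviation "tns \<equiv> tens R U U"

lemma U_coalgebra: "coalgebra R U eps psi" using U_monoid unfolding coalg_ab_monoid_def by simp

lemma U_module: "module R U" using U_coalgebra unfolding coalgebra_def by simp

lemma T_module: "module R T" by (rule tensor_module[OF U_module U_module])

lemma RR_module: "module R RR" by (rule module_ring_as_module[OF R_cring])

lemma TT_module: "module R (tensor R T T)" by (rule tensor_module[OF T_module T_module])

lemma linear_map_eps: "linear_map R U RR eps" using U_coalgebra unfolding coalgebra_def by simp

lemma linear_map_psi: "linear_map R U T psi" using U_coalgebra unfolding coalgebra_def by simp

lemma counit_left: "c \<in> carrier U \<Longrightarrow> tlift R U U U (\<lambda>(a, b). eps a \<odot>\<^bsub>U\<^esub> b) (psi c) = c"
  using U_coalgebra unfolding coalgebra_def by simp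

lemma counit_right: "c \<in> carrier U \<Longrightarrow> tlift R U U U (\<lambda>(a, b). eps b \<odot>\<^bsub>U\<^esub> a) (psi c) = c"
  using U_coalgebra unfolding coalgebra_def by simp

lemma coassoc: "c \<in> carrier U \<Longrightarrow> tassoc R U U U (tmap R U U T U psi (\<lambda>x. x) (psi c))
                     = tmap R U U U T (\<lambda>x. x) psi (psi c)"
  using U_coalgebra unfolding coalgebra_def by simp

lemma cocomm: "c \<in> carrier U \<Longrightarrow> tswap R U U (psi c) = psi c"
  using U_coalgebra unfolding coalgebra_def by simp

lemma sigma_coalg_map: "coalg_map R T (tensor_counit R U U eps eps) (tensor_coprod R U U psi psi) U eps psi sigma"
  using U_monoid unfolding coalg_ab_monoid_def by simp

lemma linear_map_sigma: "linear_map R T U sigma" using sigma_coalg_map unfolding coalg_map_def by simp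

lemma sigma_eps: "x \<in> carrier T \<Longrightarrow> eps (sigma x) = tensor_counit R U U eps eps x"
  using sigma_coalg_map unfolding coalg_map_def by simp

lemma sigma_psi: "x \<in> carrier T \<Longrightarrow> psi (sigma x) = tmap R T T U U sigma sigma (tensor_coprod R U U psi psi x)"
  using sigma_coalg_map unfolding coalg_map_def by simp

lemma eta_coalg_map: "coalg_map R RR (\<lambda>r. r) (ring_coprod R) U eps psi eta"
  using U_monoid unfolding coalg_ab_monoid_def by simp

lemma linear_map_eta: "linear_map R RR U eta" using eta_coalg_map unfolding coalg_map_def by simp

lemma eta_eps: "r \<in> carrier R \<Longrightarrow> eps (eta r) = r"
  using eta_coalg_map unfolding coalg_map_def by (simp add: ring_as_module_def)

lemma eta_psi: "r \<in> carrier R \<Longrightarrow> psi (eta r) = tmap R RR RR U U eta eta (ring_coprod R r)"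
  using eta_coalg_map unfolding coalg_map_def by (simp add: ring_as_module_def)

lemma sigma_unit_left: "r \<in> carrier R \<Longrightarrow> u \<in> carrier U \<Longrightarrow> sigma (tns (eta r) u) = r \<odot>\<^bsub>U\<^esub> u"
  using U_monoid unfolding coalg_ab_monoid_def by simp

lemma sigma_unit_right: "r \<in> carrier R \<Longrightarrow> u \<in> carrier U \<Longrightarrow> sigma (tns u (eta r)) = r \<odot>\<^bsub>U\<^esub> u"
  using U_monoid unfolding coalg_ab_monoid_def by simp

lemma sigma_commute: "a \<in> carrier U \<Longrightarrow> b \<in> carrier U \<Longrightarrow> sigma (tns a b) = sigma (tns b a)"
  using U_monoid unfolding coalg_ab_monoid_def by simp

lemma eps_closed: "u \<in> carrier U \<Longrightarrow> eps u \<in> carrier R"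
  using linear_map_closed[OF linear_map_eps] by (simp add: ring_as_module_def)

lemma eta_closed: "r \<in> carrier R \<Longrightarrow> eta r \<in> carrier U"
  using linear_map_closed[OF linear_map_eta] by (simp add: ring_as_module_def)

lemma psi_closed: "u \<in> carrier U \<Longrightarrow> psi u \<in> carrier T"
  using linear_map_closed[OF linear_map_psi] by simp

lemma sigma_closed: "x \<in> carrier T \<Longrightarrow> sigma x \<in> carrier U"
  using linear_map_closed[OF linear_map_sigma] by simp

lemma tns_closed: "a \<in> carrier U \<Longrightarrow> b \<in> carrier U \<Longrightarrow> tns a b \<in> carrier T"
  by (rule tens_closed[OF U_module U_module])

lemma tmap_tens_U: "linear_map R U U f \<Longrightarrow> linear_map R U U g \<Longrightarrow> a \<in> carrier U \<Longrightarrow> b \<in> carrier U \<Longrightarrow>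
   tmap R U U U U f g (tns a b) = tns (f a) (g b)"
  by (rule tmap_tens[OF U_module U_module U_module U_module])

lemma linear_map_tmap_U: "linear_map R U U f \<Longrightarrow> linear_map R U U g \<Longrightarrow> linear_map R T T (tmap R U U U U f g)"
  by (rule linear_map_tmap[OF U_module U_module U_module U_module])

lemma tens_zero_fst: "b \<in> carrier U \<Longrightarrow> tns \<zero>\<^bsub>U\<^esub> b = \<zero>\<^bsub>T\<^esub>"
  by (rule linear_map_zero[OF U_module T_module linear_map_tens_fst[OF U_module U_module]])

lemma tens_zero_snd: "a \<in> carrier U \<Longrightarrow> tns a \<zero>\<^bsub>U\<^esub> = \<zero>\<^bsub>T\<^esub>"
  by (rule linear_map_zero[OF U_module T_module linear_map_tens_snd[OF U_module U_module]])

lemma eta_smult: "r \<in> carrier R \<Longrightarrow> eta r = r \<odot>\<^bsub>U\<^esub> eta \<one>\<^bsub>R\<^esub>"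
proof -
  assume r: "r \<in> carrier R"
  interpret R: cring R by (rule R_cring)
  have "eta r = eta (r \<odot>\<^bsub>RR\<^esub> \<one>\<^bsub>R\<^esub>)" using r by (simp add: ring_as_module_def)
  also have "\<dots> = r \<odot>\<^bsub>U\<^esub> eta \<one>\<^bsub>R\<^esub>" using linear_map_smult[OF linear_map_eta r] by (simp add: ring_as_module_def)
  finally show ?thesis .
qed

lemma eps_add: "u \<in> carrier U \<Longrightarrow> v \<in> carrier U \<Longrightarrow> eps (u \<oplus>\<^bsub>U\<^esub> v) = eps u \<oplus>\<^bsub>R\<^esub> eps v"
  using linear_map_add[OF linear_map_eps] by (simp add: ring_as_module_def)

lemma eps_smult: "r \<in> carrier R \<Longrightarrow> u \<in> carrier U \<Longrightarrow> eps (r \<odot>\<^bsub>U\<^esub> u) = r \<otimes>\<^bsub>R\<^esub> eps u"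
  using linear_map_smult[OF linear_map_eps] by (simp add: ring_as_module_def)

lemma F_submodule: "submodule (F s) R U" using F_good unfolding good_filtration_def by simp

lemma F_carrier: "F s \<subseteq> carrier U"
  using F_submodule[of s] unfolding submodule_def subgroup_def by simp

lemma F_Suc: "F s \<subseteq> F (Suc s)" using F_good unfolding good_filtration_def by simp

lemma F_mono: "s \<le> t \<Longrightarrow> F s \<subseteq> F t"
  by (induction t rule: dec_induct) (use F_Suc in auto)

lemma F_bij: "bij_betw eps (F 0) (carrier R)" using F_good unfolding good_filtration_def by simp

lemma F_exhaustive: "u \<in> carrier U \<Longrightarrow> \<exists>s. u \<in> F s" using F_good unfolding good_filtration_def by auto

abbreviation "F_pairs s \<equiv> {(a, b) | a b t v. t + v = s \<and> a \<in> F t \<and> b \<in> F v}"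

lemma F_psi: assumes "u \<in> F s" shows "psi u \<in> tspan R U U (F_pairs s)"
proof -
  have "psi ` F s \<subseteq> tspan R U U (F_pairs s)"
    using F_good unfolding good_filtration_def by blast
  then show ?thesis using assms by blast
qed

lemma F_add: "u \<in> F s \<Longrightarrow> v \<in> F s \<Longrightarrow> u \<oplus>\<^bsub>U\<^esub> v \<in> F s"
  using F_submodule[of s] unfolding submodule_def subgroup_def by simp

lemma F_smult: "r \<in> carrier R \<Longrightarrow> u \<in> F s \<Longrightarrow> r \<odot>\<^bsub>U\<^esub> u \<in> F s"
  using F_submodule[of s] unfolding submodule_def submodule_axioms_def by simp

lemma eta_F0: "r \<in> carrier R \<Longrightarrow> eta r \<in> F 0" using eta_good unfolding good_basepoint_def by simp

lemma F0_eq_eta_eps: assumes "u \<in> F 0" shows "u = eta (eps u)"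
proof -
  have u: "u \<in> carrier U" using assms F_carrier by auto
  have "eta (eps u) \<in> F 0" by (rule eta_F0[OF eps_closed[OF u]])
  moreover have "eps (eta (eps u)) = eps u" by (rule eta_eps[OF eps_closed[OF u]])
  ultimately show ?thesis using F_bij assms unfolding bij_betw_def inj_on_def by metis
qed

lemma F_pairs_subset: "F_pairs s \<subseteq> carrier U \<times> carrier U"
  using F_carrier by blast

section \<open>Sweedler sums\<close>

text \<open>sweedler P h u is the Sweedler sum \<Sum> h u' u'' for \<psi> u = \<Sum> u' \<otimes> u''.\<close>
definition sweedler :: "('r, 'p) module \<Rightarrow> ('u \<Rightarrow> 'u \<Rightarrow> 'p) \<Rightarrow> 'u \<Rightarrow> 'p" where
  "sweedler P h u = tlift R U U P (\<lambda>(a, b). h a b) (psi u)"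

lemma sweedler_closed: assumes "module R P" "u \<in> carrier U" "\<And>a b. a \<in> carrier U \<Longrightarrow> b \<in> carrier U \<Longrightarrow> h a b \<in> carrier P"
  shows "sweedler P h u \<in> carrier P"
  unfolding sweedler_def using assms by (intro tlift_closed[OF U_module U_module assms(1) psi_closed]) auto

lemma linear_map_sweedler: assumes "module R P" "bilinear R U U P (\<lambda>(a, b). h a b)" shows "linear_map R U P (sweedler P h)"
  unfolding sweedler_def by (rule linear_map_comp[OF linear_map_psi linear_map_tlift[OF U_module U_module assms(1) assms(2)]])

lemma sweedler_cong: assumes "module R P" "u \<in> carrier U" "\<And>a b. a \<in> carrier U \<Longrightarrow> b \<in> carrier U \<Longrightarrow> h a b = h' a b"
  "\<And>a b. a \<in> carrier U \<Longrightarrow> b \<in> carrier U \<Longrightarrow> h' a b \<in> carrier P"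
  shows "sweedler P h u = sweedler P h' u"
  unfolding sweedler_def using assms by (intro tlift_cong[OF U_module U_module assms(1) psi_closed]) auto

lemma linear_map_sweedler_comp: assumes "module R P" "module R Q" "linear_map R P Q k" "u \<in> carrier U"
  "\<And>a b. a \<in> carrier U \<Longrightarrow> b \<in> carrier U \<Longrightarrow> h a b \<in> carrier P"
  shows "k (sweedler P h u) = sweedler Q (\<lambda>a b. k (h a b)) u"
  unfolding sweedler_def using assms
  by (subst linear_map_tlift_comp[OF U_module U_module assms(1,2,3) psi_closed]) (auto simp: split_def)

lemma sweedler_add: assumes "module R P" "u \<in> carrier U" "\<And>a b. a \<in> carrier U \<Longrightarrow> b \<in> carrier U \<Longrightarrow> h1 a b \<in> carrier P"
  "\<And>a b. a \<in> carrier U \<Longrightarrow> b \<in> carrier U \<Longrightarrow> h2 a b \<in> carrier P"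
  shows "sweedler P (\<lambda>a b. h1 a b \<oplus>\<^bsub>P\<^esub> h2 a b) u = sweedler P h1 u \<oplus>\<^bsub>P\<^esub> sweedler P h2 u"
  unfolding sweedler_def using assms
  by (subst tlift_add_fun[OF U_module U_module assms(1) psi_closed, symmetric]) (auto simp: split_def)

lemma sweedler_smult: assumes "module R P" "u \<in> carrier U" "\<And>a b. a \<in> carrier U \<Longrightarrow> b \<in> carrier U \<Longrightarrow> h a b \<in> carrier P"
  "c \<in> carrier R"
  shows "sweedler P (\<lambda>a b. c \<odot>\<^bsub>P\<^esub> h a b) u = c \<odot>\<^bsub>P\<^esub> sweedler P h u"
  unfolding sweedler_def using assms
  by (subst tlift_smult_fun[OF U_module U_module assms(1) psi_closed, symmetric]) (auto simp: split_def)

lemma linear_map_sweedler_param: assumes "module R P" "module R C" "u \<in> carrier U"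
  "\<And>a b. a \<in> carrier U \<Longrightarrow> b \<in> carrier U \<Longrightarrow> linear_map R C P (\<lambda>c. h c a b)"
  shows "linear_map R C P (\<lambda>c. sweedler P (h c) u)"
  unfolding sweedler_def using assms
  by (intro linear_map_tlift_param[OF U_module U_module assms(1,2) psi_closed]) auto

lemma sweedler_counit_left: "u \<in> carrier U \<Longrightarrow> sweedler U (\<lambda>a b. eps a \<odot>\<^bsub>U\<^esub> b) u = u"
  unfolding sweedler_def using counit_left by simp

lemma sweedler_diff: assumes "module R P" "u \<in> carrier U" "\<And>a b. a \<in> carrier U \<Longrightarrow> b \<in> carrier U \<Longrightarrow> h1 a b \<in> carrier P"
  "\<And>a b. a \<in> carrier U \<Longrightarrow> b \<in> carrier U \<Longrightarrow> h2 a b \<in> carrier P"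
  shows "sweedler P (\<lambda>a b. h1 a b \<ominus>\<^bsub>P\<^esub> h2 a b) u = sweedler P h1 u \<ominus>\<^bsub>P\<^esub> sweedler P h2 u"
proof -
  interpret P: module R P by fact
  have "sweedler P (\<lambda>a b. h1 a b \<ominus>\<^bsub>P\<^esub> h2 a b) u = sweedler P (\<lambda>a b. h1 a b \<oplus>\<^bsub>P\<^esub> (\<ominus>\<^bsub>R\<^esub> \<one>\<^bsub>R\<^esub>) \<odot>\<^bsub>P\<^esub> h2 a b) u"
    using assms by (intro sweedler_cong) (auto simp: P.smult_l_minus P.minus_eq)
  also have "\<dots> = sweedler P h1 u \<oplus>\<^bsub>P\<^esub> (\<ominus>\<^bsub>R\<^esub> \<one>\<^bsub>R\<^esub>) \<odot>\<^bsub>P\<^esub> sweedler P h2 u"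
    using assms by (simp add: sweedler_add sweedler_smult)
  also have "\<dots> = sweedler P h1 u \<ominus>\<^bsub>P\<^esub> sweedler P h2 u"
  proof -
    have c: "sweedler P h2 u \<in> carrier P" by (rule sweedler_closed[OF assms(1,2)]) (rule assms(4))
    show ?thesis using c by (simp add: P.smult_l_minus P.minus_eq)
  qed
  finally show ?thesis .
qed

lemma sweedler_zero: assumes "module R P" "u \<in> carrier U"
  shows "sweedler P (\<lambda>a b. \<zero>\<^bsub>P\<^esub>) u = \<zero>\<^bsub>P\<^esub>"
proof -
  interpret P: module R P by fact
  have "sweedler P (\<lambda>a b. \<zero>\<^bsub>P\<^esub>) u = sweedler P (\<lambda>a b. \<zero>\<^bsub>R\<^esub> \<odot>\<^bsub>P\<^esub> \<zero>\<^bsub>P\<^esub>) u"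
    using assms by (intro sweedler_cong) auto
  also have "\<dots> = \<zero>\<^bsub>P\<^esub>" using sweedler_smult[OF assms(1,2), of "\<lambda>a b. \<zero>\<^bsub>P\<^esub>" "\<zero>\<^bsub>R\<^esub>"]
      sweedler_closed[OF assms(1,2), of "\<lambda>a b. \<zero>\<^bsub>P\<^esub>"] by simp
  finally show ?thesis .
qed

lemma swap_bilinear: "bilinear R U U T (\<lambda>(a, b). tns b a)"
  by (rule bilinearI) (auto intro: linear_map_tens_fst[OF U_module U_module] linear_map_tens_snd[OF U_module U_module])

lemma tswap_tens: "a \<in> carrier U \<Longrightarrow> b \<in> carrier U \<Longrightarrow> tswap R U U (tns a b) = tns b a"
  unfolding tswap_def using tlift_tens[OF U_module U_module T_module swap_bilinear] by simp

lemma linear_map_tswap: "linear_map R T T (tswap R U U)"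
  unfolding tswap_def by (rule linear_map_tlift[OF U_module U_module T_module swap_bilinear])

lemma sweedler_cocomm: assumes "module R P" "bilinear R U U P (\<lambda>(a, b). h a b)" "u \<in> carrier U"
  shows "sweedler P h u = sweedler P (\<lambda>a b. h b a) u"
proof -
  let ?k = "tlift R U U P (\<lambda>(a, b). h a b)"
  have k: "linear_map R T P ?k" by (rule linear_map_tlift[OF U_module U_module assms(1) assms(2)])
  have "sweedler P h u = ?k (tswap R U U (psi u))" unfolding sweedler_def cocomm[OF assms(3)] ..
  also have "\<dots> = tlift R U U P (\<lambda>(a, b). ?k (tswap R U U (tns a b))) (psi u)"
    by (rule tlift_expand[OF U_module U_module assms(1) linear_map_comp[OF linear_map_tswap k] psi_closed[OF assms(3)]])
  also have "\<dots> = tlift R U U P (\<lambda>(a, b). h b a) (psi u)"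
    using assms bilinear_closed[OF assms(2)]
    by (intro tlift_cong[OF U_module U_module assms(1) psi_closed])
       (auto simp: tswap_tens tlift_tens[OF U_module U_module assms(1) assms(2)])
  finally show ?thesis unfolding sweedler_def .
qed

abbreviation "UT \<equiv> tensor R U T"
abbreviation "TU \<equiv> tensor R T U"

lemma UT_module: "module R UT" by (rule tensor_module[OF U_module T_module])

lemma tassoc_inner_bilinear: "c \<in> carrier U \<Longrightarrow> bilinear R U U UT (\<lambda>(a, b). tens R U T a (tns b c))"
  by (rule bilinearI) (auto intro!: linear_map_tens_fst[OF U_module T_module] tns_closed
      linear_map_comp[OF linear_map_tens_fst[OF U_module U_module] linear_map_tens_snd[OF U_module T_module]])

lemma tassoc_bilinear: "bilinear R T U UT (\<lambda>(X, c). tlift R U U UT (\<lambda>(a, b). tens R U T a (tns b c)) X)"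
proof (rule bilinearI)
  fix c assume "c \<in> carrier U"
  then show "linear_map R T UT (\<lambda>X. tlift R U U UT (\<lambda>(a, b). tens R U T a (tns b c)) X)"
    by (rule linear_map_tlift[OF U_module U_module UT_module tassoc_inner_bilinear])
next
  fix X assume "X \<in> carrier T"
  then show "linear_map R U UT (\<lambda>c. tlift R U U UT (\<lambda>(a, b). tens R U T a (tns b c)) X)"
    by (intro linear_map_tlift_param[OF U_module U_module UT_module U_module])
       (auto intro!: linear_map_comp[OF linear_map_tens_snd[OF U_module U_module] linear_map_tens_snd[OF U_module T_module]])
qed

lemma tassoc_tens: "Y \<in> carrier T \<Longrightarrow> c \<in> carrier U \<Longrightarrow>
  tassoc R U U U (tens R T U Y c) = tlift R U U UT (\<lambda>(a, b). tens R U T a (tns b c)) Y"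
  unfolding tassoc_def using tlift_tens[OF T_module U_module UT_module tassoc_bilinear] by simp

lemma linear_map_tassoc: "linear_map R TU UT (tassoc R U U U)"
  unfolding tassoc_def by (rule linear_map_tlift[OF T_module U_module UT_module tassoc_bilinear])

definition trilift ::
    "('r, 'p) module \<Rightarrow> ('u \<Rightarrow> 'u \<Rightarrow> 'u \<Rightarrow> 'p) \<Rightarrow> ('u \<times> ('u \<times> 'u \<Rightarrow> 'r) set \<Rightarrow> 'r) set \<Rightarrow> 'p" where
  "trilift P G = tlift R U T P (\<lambda>(a, Y). tlift R U U P (\<lambda>(b, c). G a b c) Y)"

context
  fixes P :: "('r, 'p) module" and G :: "'u \<Rightarrow> 'u \<Rightarrow> 'u \<Rightarrow> 'p"
  assumes P: "module R P" and G: "trilinear R U P G"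
begin

lemma trilinear_bilinear_23: "a \<in> carrier U \<Longrightarrow> bilinear R U U P (\<lambda>(b, c). G a b c)"
  by (rule bilinearI) (use G in \<open>auto intro: trilinearD(2,3)\<close>)

lemma trilift_bilinear: "bilinear R U T P (\<lambda>(a, Y). tlift R U U P (\<lambda>(b, c). G a b c) Y)"
proof (rule bilinearI)
  fix Y assume "Y \<in> carrier T"
  then show "linear_map R U P (\<lambda>a. tlift R U U P (\<lambda>(b, c). G a b c) Y)"
    by (intro linear_map_tlift_param[OF U_module U_module P U_module]) (use G in \<open>auto intro: trilinearD(1)\<close>)
next
  fix a assume "a \<in> carrier U"
  then show "linear_map R T P (\<lambda>Y. tlift R U U P (\<lambda>(b, c). G a b c) Y)"
    by (intro linear_map_tlift[OF U_module U_module P trilinear_bilinear_23])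
qed

lemma linear_map_trilift: "linear_map R UT P (trilift P G)"
  unfolding trilift_def by (rule linear_map_tlift[OF U_module T_module P trilift_bilinear])

lemma trilift_tens:
  "a \<in> carrier U \<Longrightarrow> b \<in> carrier U \<Longrightarrow> c \<in> carrier U \<Longrightarrow> trilift P G (tens R U T a (tns b c)) = G a b c"
  unfolding trilift_def
  by (simp add: tlift_tens[OF U_module T_module P trilift_bilinear] tns_closed
      tlift_tens[OF U_module U_module P trilinear_bilinear_23])

lemma trilift_id_psi:
  assumes u: "u \<in> carrier U"
  shows "trilift P G (tmap R U U U T (\<lambda>x. x) psi (psi u)) = sweedler P (\<lambda>a y. sweedler P (\<lambda>b c. G a b c) y) u"
proof -
  have "linear_map R T UT (tmap R U U U T (\<lambda>x. x) psi)"
    by (rule linear_map_tmap[OF U_module U_module U_module T_module linear_map_id[OF U_module] linear_map_psi])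
  then have "trilift P G (tmap R U U U T (\<lambda>x. x) psi (psi u))
      = tlift R U U P (\<lambda>(a, y). trilift P G (tmap R U U U T (\<lambda>x. x) psi (tns a y))) (psi u)"
    by (intro tlift_expand[OF U_module U_module P linear_map_comp[OF _ linear_map_trilift] psi_closed[OF u]])
  also have "\<dots> = tlift R U U P (\<lambda>(a, y). tlift R U U P (\<lambda>(b, c). G a b c) (psi y)) (psi u)"
    using trilinear_closed[OF G]
    by (intro tlift_cong[OF U_module U_module P psi_closed[OF u]])
       (auto simp: tmap_tens[OF U_module U_module U_module T_module linear_map_id[OF U_module] linear_map_psi]
          trilift_def tlift_tens[OF U_module T_module P trilift_bilinear] psi_closed
          intro!: tlift_closed[OF U_module U_module P])
  finally show ?thesis unfolding sweedler_def by simp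
qed

lemma trilift_tassoc_psi_id:
  assumes u: "u \<in> carrier U"
  shows "trilift P G (tassoc R U U U (tmap R U U T U psi (\<lambda>x. x) (psi u)))
    = sweedler P (\<lambda>x c. sweedler P (\<lambda>a b. G a b c) x) u"
proof -
  have inner: "trilift P G (tlift R U U UT (\<lambda>(a, b). tens R U T a (tns b c)) (psi x))
      = tlift R U U P (\<lambda>(a, b). G a b c) (psi x)" if "x \<in> carrier U" "c \<in> carrier U" for x c
  proof -
    have "trilift P G (tlift R U U UT (\<lambda>(a, b). tens R U T a (tns b c)) (psi x))
       = tlift R U U P (\<lambda>q. trilift P G ((\<lambda>(a, b). tens R U T a (tns b c)) q)) (psi x)"
      using that by (intro linear_map_tlift_comp[OF U_module U_module UT_module P linear_map_trilift psi_closed])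
        (auto intro!: tens_closed[OF U_module T_module] tns_closed)
    also have "\<dots> = tlift R U U P (\<lambda>(a, b). G a b c) (psi x)"
      using that trilinear_closed[OF G]
      by (intro tlift_cong[OF U_module U_module P psi_closed]) (auto simp: trilift_tens)
    finally show ?thesis .
  qed
  have "linear_map R T TU (tmap R U U T U psi (\<lambda>x. x))"
    by (rule linear_map_tmap[OF U_module U_module T_module U_module linear_map_psi linear_map_id[OF U_module]])
  then have "trilift P G (tassoc R U U U (tmap R U U T U psi (\<lambda>x. x) (psi u)))
      = tlift R U U P (\<lambda>(x, c). trilift P G (tassoc R U U U (tmap R U U T U psi (\<lambda>x. x) (tns x c)))) (psi u)"
    by (intro tlift_expand[OF U_module U_module P _ psi_closed[OF u]]
        linear_map_comp[OF _ linear_map_comp[OF linear_map_tassoc linear_map_trilift]])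
  also have "\<dots> = tlift R U U P (\<lambda>(x, c). tlift R U U P (\<lambda>(a, b). G a b c) (psi x)) (psi u)"
    using trilinear_closed[OF G]
    by (intro tlift_cong[OF U_module U_module P psi_closed[OF u]])
       (auto simp: tmap_tens[OF U_module U_module T_module U_module linear_map_psi linear_map_id[OF U_module]]
          tassoc_tens psi_closed inner intro!: tlift_closed[OF U_module U_module P])
  finally show ?thesis unfolding sweedler_def by simp
qed

lemma sweedler_coassoc:
  "u \<in> carrier U \<Longrightarrow>
   sweedler P (\<lambda>x c. sweedler P (\<lambda>a b. G a b c) x) u = sweedler P (\<lambda>a y. sweedler P (\<lambda>b c. G a b c) y) u"
  using coassoc trilift_id_psi trilift_tassoc_psi_id by metis

end

lemma trilinear_sweedler:
  assumes P: "module R P" and G: "quadrilinear R U P G"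
  shows "trilinear R U P (\<lambda>a b c. sweedler P (G a b) c)"
  unfolding trilinear_def
proof (intro conjI ballI)
  fix b c assume "b \<in> carrier U" "c \<in> carrier U"
  then show "linear_map R U P (\<lambda>a. sweedler P (G a b) c)"
    by (intro linear_map_sweedler_param[OF P U_module]) (auto intro: quadrilinearD[OF G])
next
  fix a c assume "a \<in> carrier U" "c \<in> carrier U"
  then show "linear_map R U P (\<lambda>b. sweedler P (G a b) c)"
    by (intro linear_map_sweedler_param[OF P U_module]) (auto intro: quadrilinearD[OF G])
next
  fix a b assume "a \<in> carrier U" "b \<in> carrier U"
  then show "linear_map R U P (\<lambda>c. sweedler P (G a b) c)"
    using linear_map_sweedler[OF P, of "G a b"] by (auto intro: bilinearI quadrilinearD[OF G])
qed

lemma sweedler_swap_12: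
  assumes P: "module R P" and G: "trilinear R U P G" and y: "y \<in> carrier U"
  shows "sweedler P (\<lambda>b c. sweedler P (G b) c) y = sweedler P (\<lambda>b c. sweedler P (\<lambda>b' c'. G b' b c') c) y"
proof -
  have "sweedler P (\<lambda>b c. sweedler P (G b) c) y = sweedler P (\<lambda>x c. sweedler P (\<lambda>b b'. G b b' c) x) y"
    using sweedler_coassoc[OF P G y] by simp
  also have "\<dots> = sweedler P (\<lambda>x c. sweedler P (\<lambda>b b'. G b' b c) x) y"
  proof (rule sweedler_cong[OF P y])
    fix x c assume xc: "x \<in> carrier U" "c \<in> carrier U"
    have "bilinear R U U P (\<lambda>(b, b'). G b b' c)"
      using xc by (intro bilinearI) (auto intro: trilinearD[OF G])
    then show "sweedler P (\<lambda>b b'. G b b' c) x = sweedler P (\<lambda>b b'. G b' b c) x"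
      by (rule sweedler_cocomm[OF P _ xc(1)])
    show "sweedler P (\<lambda>b b'. G b' b c) x \<in> carrier P"
      using xc by (intro sweedler_closed[OF P]) (auto intro: trilinear_closed[OF G])
  qed
  also have "\<dots> = sweedler P (\<lambda>b c. sweedler P (\<lambda>b' c'. G b' b c') c) y"
    using sweedler_coassoc[OF P trilinear_swap_12[OF G] y] by simp
  finally show ?thesis .
qed

lemma sweedler_middle_swap:
  assumes P: "module R P" and G: "quadrilinear R U P G" and u: "u \<in> carrier U"
  shows "sweedler P (\<lambda>a b. sweedler P (\<lambda>a1 a2. sweedler P (\<lambda>b1 b2. G a1 a2 b1 b2) b) a) u
       = sweedler P (\<lambda>a b. sweedler P (\<lambda>a1 a2. sweedler P (\<lambda>b1 b2. G a1 b1 a2 b2) b) a) u"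
proof -
  have "sweedler P (\<lambda>a b. sweedler P (\<lambda>a1 a2. sweedler P (\<lambda>b1 b2. G a1 a2 b1 b2) b) a) u
      = sweedler P (\<lambda>a y. sweedler P (\<lambda>b c. sweedler P (G a b) c) y) u"
    using sweedler_coassoc[OF P trilinear_sweedler[OF P G] u] by simp
  also have "\<dots> = sweedler P (\<lambda>a y. sweedler P (\<lambda>b c. sweedler P (\<lambda>b' c'. G a b' b c') c) y) u"
  proof (rule sweedler_cong[OF P u])
    fix a y assume ay: "a \<in> carrier U" "y \<in> carrier U"
    have "trilinear R U P (G a)"
      using ay unfolding trilinear_def by (auto intro: quadrilinearD[OF G])
    then show "sweedler P (\<lambda>b c. sweedler P (G a b) c) y
        = sweedler P (\<lambda>b c. sweedler P (\<lambda>b' c'. G a b' b c') c) y"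
      by (rule sweedler_swap_12[OF P _ ay(2)])
    show "sweedler P (\<lambda>b c. sweedler P (\<lambda>b' c'. G a b' b c') c) y \<in> carrier P"
      using ay by (intro sweedler_closed[OF P]) (auto intro: quadrilinear_closed[OF G])
  qed
  also have "\<dots> = sweedler P (\<lambda>a b. sweedler P (\<lambda>a1 a2. sweedler P (\<lambda>b1 b2. G a1 b1 a2 b2) b) a) u"
    using sweedler_coassoc[OF P trilinear_sweedler[OF P quadrilinear_swap_23[OF G]] u] by simp
  finally show ?thesis .
qed

section \<open>Convolution and the antipode\<close>

definition conv :: "('u \<Rightarrow> 'u) \<Rightarrow> ('u \<Rightarrow> 'u) \<Rightarrow> 'u \<Rightarrow> 'u" where
  "conv f g u = sigma (tmap R U U U U f g (psi u))"

definition conv_unit :: "'u \<Rightarrow> 'u" where "conv_unit u = eta (eps u)"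

definition unit_minus_id :: "'u \<Rightarrow> 'u" where "unit_minus_id u = conv_unit u \<ominus>\<^bsub>U\<^esub> u"

primrec conv_power :: "('u \<Rightarrow> 'u) \<Rightarrow> nat \<Rightarrow> 'u \<Rightarrow> 'u" where
  "conv_power f 0 = conv_unit"
| "conv_power f (Suc n) = conv f (conv_power f n)"

primrec antipode_approx :: "nat \<Rightarrow> 'u \<Rightarrow> 'u" where
  "antipode_approx 0 = conv_unit"
| "antipode_approx (Suc n) = (\<lambda>x. antipode_approx n x \<oplus>\<^bsub>U\<^esub> conv_power unit_minus_id (Suc n) x)"

text \<open>
  The series of convolution powers of \<eta> \<epsilon> - id is truncated at some s with u \<in> F s; every such
  s gives the same value (antipode_eq_approx), and one exists because the filtration is exhaustive.
\<close>
definition antipode :: "'u \<Rightarrow> 'u" where "antipode u = antipode_approx (SOME s. u \<in> F s) u"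

lemma linear_map_sigma_tens_fst: "b \<in> carrier U \<Longrightarrow> linear_map R U U (\<lambda>a. sigma (tns a b))"
  by (rule linear_map_comp[OF linear_map_tens_fst[OF U_module U_module] linear_map_sigma])

lemma linear_map_sigma_tens_snd: "a \<in> carrier U \<Longrightarrow> linear_map R U U (\<lambda>b. sigma (tns a b))"
  by (rule linear_map_comp[OF linear_map_tens_snd[OF U_module U_module] linear_map_sigma])

lemma sigma_tens_closed: "a \<in> carrier U \<Longrightarrow> b \<in> carrier U \<Longrightarrow> sigma (tns a b) \<in> carrier U"
  by (simp add: sigma_closed tns_closed)

lemma conv_sweedler: assumes "linear_map R U U f" "linear_map R U U g" "u \<in> carrier U"
  shows "conv f g u = sweedler U (\<lambda>a b. sigma (tns (f a) (g b))) u"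
  unfolding conv_def tmap_def sweedler_def
  using assms linear_map_closed[OF assms(1)] linear_map_closed[OF assms(2)]
  by (subst linear_map_tlift_comp[OF U_module U_module T_module U_module linear_map_sigma psi_closed])
     (auto simp: split_def tns_closed)

lemma linear_map_conv: assumes "linear_map R U U f" "linear_map R U U g"
  shows "linear_map R U U (conv f g)"
  unfolding conv_def
  by (rule linear_map_comp[OF linear_map_psi linear_map_comp[OF linear_map_tmap[OF U_module U_module U_module U_module assms] linear_map_sigma]])

lemma linear_map_conv_unit: "linear_map R U U conv_unit"
  unfolding conv_unit_def by (rule linear_map_comp[OF linear_map_eps linear_map_eta])

lemma conv_unit_closed: "u \<in> carrier U \<Longrightarrow> conv_unit u \<in> carrier U"
  using linear_map_closed[OF linear_map_conv_unit] by simp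

lemma linear_map_unit_minus_id: "linear_map R U U unit_minus_id"
  unfolding unit_minus_id_def by (rule linear_map_pointwise_diff[OF U_module U_module linear_map_conv_unit linear_map_id[OF U_module]])

lemma linear_map_conv_power: "linear_map R U U f \<Longrightarrow> linear_map R U U (conv_power f n)"
  by (induction n) (simp_all add: linear_map_conv_unit linear_map_conv)

lemmas linear_map_unit_minus_id_power = linear_map_conv_power[OF linear_map_unit_minus_id]

lemma linear_map_antipode_approx: "linear_map R U U (antipode_approx n)"
proof (induction n)
  case 0 show ?case by (simp add: linear_map_conv_unit)
next
  case (Suc n)
  show ?case using linear_map_pointwise_add[OF U_module U_module Suc.IH linear_map_unit_minus_id_power[of "Suc n"]] by simp
qed

lemma conv_cong_left: assumes "linear_map R U U f" "linear_map R U U f'" "linear_map R U U g" "u \<in> carrier U"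
  "\<And>x. x \<in> carrier U \<Longrightarrow> f x = f' x"
  shows "conv f g u = conv f' g u"
  unfolding conv_sweedler[OF assms(1,3,4)] conv_sweedler[OF assms(2,3,4)] using assms
  by (intro sweedler_cong[OF U_module]) (auto intro!: sigma_tens_closed linear_map_closed[OF assms(2)] linear_map_closed[OF assms(3)])

lemma conv_unit_left: assumes "linear_map R U U h" "u \<in> carrier U"
  shows "conv conv_unit h u = h u"
proof -
  have "conv conv_unit h u = sweedler U (\<lambda>a b. sigma (tns (eta (eps a)) (h b))) u"
    using conv_sweedler[OF linear_map_conv_unit assms] unfolding conv_unit_def .
  also have "\<dots> = sweedler U (\<lambda>a b. h (eps a \<odot>\<^bsub>U\<^esub> b)) u"
  proof (rule sweedler_cong[OF U_module assms(2)])
    fix a b assume ab: "a \<in> carrier U" "b \<in> carrier U"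
    show "sigma (tns (eta (eps a)) (h b)) = h (eps a \<odot>\<^bsub>U\<^esub> b)"
      using sigma_unit_left[OF eps_closed[OF ab(1)] linear_map_closed[OF assms(1) ab(2)]]
        linear_map_smult[OF assms(1) eps_closed[OF ab(1)] ab(2)] by simp
    show "h (eps a \<odot>\<^bsub>U\<^esub> b) \<in> carrier U"
      using ab by (intro linear_map_closed[OF assms(1)] module.smult_closed[OF U_module] eps_closed)
  qed
  also have "\<dots> = h (sweedler U (\<lambda>a b. eps a \<odot>\<^bsub>U\<^esub> b) u)"
    using assms by (intro linear_map_sweedler_comp[symmetric, OF U_module U_module]) (auto intro: module.smult_closed[OF U_module] eps_closed)
  also have "\<dots> = h u" using sweedler_counit_left[OF assms(2)] by simp
  finally show ?thesis .
qed

lemma conv_diff_left: assumes "linear_map R U U f1" "linear_map R U U f2" "linear_map R U U h" "u \<in> carrier U"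
  shows "conv (\<lambda>x. f1 x \<ominus>\<^bsub>U\<^esub> f2 x) h u = conv f1 h u \<ominus>\<^bsub>U\<^esub> conv f2 h u"
proof -
  have l: "linear_map R U U (\<lambda>x. f1 x \<ominus>\<^bsub>U\<^esub> f2 x)" by (rule linear_map_pointwise_diff[OF U_module U_module assms(1,2)])
  have "conv (\<lambda>x. f1 x \<ominus>\<^bsub>U\<^esub> f2 x) h u = sweedler U (\<lambda>a b. sigma (tns (f1 a \<ominus>\<^bsub>U\<^esub> f2 a) (h b))) u"
    by (rule conv_sweedler[OF l assms(3,4)])
  also have "\<dots> = sweedler U (\<lambda>a b. sigma (tns (f1 a) (h b)) \<ominus>\<^bsub>U\<^esub> sigma (tns (f2 a) (h b))) u"
    using assms linear_map_closed[OF assms(1)] linear_map_closed[OF assms(2)] linear_map_closed[OF assms(3)]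
    by (intro sweedler_cong[OF U_module])
       (auto simp: linear_map_diff[OF U_module U_module linear_map_sigma_tens_fst] intro!: module.smult_closed[OF U_module]
         abelian_group.minus_closed[OF module.axioms(2)[OF U_module]] sigma_tens_closed)
  also have "\<dots> = conv f1 h u \<ominus>\<^bsub>U\<^esub> conv f2 h u"
    using assms linear_map_closed[OF assms(1)] linear_map_closed[OF assms(2)] linear_map_closed[OF assms(3)]
    by (simp add: sweedler_diff[OF U_module] conv_sweedler sigma_tens_closed)
  finally show ?thesis .
qed

lemma conv_add_right: assumes "linear_map R U U f" "linear_map R U U h1" "linear_map R U U h2" "u \<in> carrier U"
  shows "conv f (\<lambda>x. h1 x \<oplus>\<^bsub>U\<^esub> h2 x) u = conv f h1 u \<oplus>\<^bsub>U\<^esub> conv f h2 u"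
proof -
  have l: "linear_map R U U (\<lambda>x. h1 x \<oplus>\<^bsub>U\<^esub> h2 x)" by (rule linear_map_pointwise_add[OF U_module U_module assms(2,3)])
  have "conv f (\<lambda>x. h1 x \<oplus>\<^bsub>U\<^esub> h2 x) u = sweedler U (\<lambda>a b. sigma (tns (f a) (h1 b \<oplus>\<^bsub>U\<^esub> h2 b))) u"
    by (rule conv_sweedler[OF assms(1) l assms(4)])
  also have "\<dots> = sweedler U (\<lambda>a b. sigma (tns (f a) (h1 b)) \<oplus>\<^bsub>U\<^esub> sigma (tns (f a) (h2 b))) u"
    using assms linear_map_closed[OF assms(1)] linear_map_closed[OF assms(2)] linear_map_closed[OF assms(3)]
    by (intro sweedler_cong[OF U_module])
       (auto simp: linear_map_add[OF linear_map_sigma_tens_snd] intro!: sigma_tens_closed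
         abelian_monoid.a_closed[OF abelian_group.axioms(1)[OF module.axioms(2)[OF U_module]]])
  also have "\<dots> = conv f h1 u \<oplus>\<^bsub>U\<^esub> conv f h2 u"
    using assms linear_map_closed[OF assms(1)] linear_map_closed[OF assms(2)] linear_map_closed[OF assms(3)]
    by (simp add: sweedler_add[OF U_module] conv_sweedler sigma_tens_closed)
  finally show ?thesis .
qed

lemma conv_id_left: assumes "linear_map R U U h" "u \<in> carrier U"
  shows "conv (\<lambda>x. x) h u = h u \<ominus>\<^bsub>U\<^esub> conv unit_minus_id h u"
proof -
  interpret U: module R U by (rule U_module)
  have "conv (\<lambda>x. x) h u = conv (\<lambda>x. conv_unit x \<ominus>\<^bsub>U\<^esub> unit_minus_id x) h u"
    using assms conv_unit_closed
    by (intro conv_cong_left[OF linear_map_id[OF U_module] linear_map_pointwise_diff[OF U_module U_module linear_map_conv_unit linear_map_unit_minus_id]])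
       (auto simp: unit_minus_id_def U.minus_eq U.minus_add U.a_assoc[symmetric] U.r_neg U.minus_minus)
  also have "\<dots> = h u \<ominus>\<^bsub>U\<^esub> conv unit_minus_id h u"
    by (simp add: conv_diff_left[OF linear_map_conv_unit linear_map_unit_minus_id assms] conv_unit_left[OF assms])
  finally show ?thesis .
qed

lemma conv_id_antipode_approx:
  assumes u: "u \<in> carrier U"
  shows "conv (\<lambda>x. x) (antipode_approx N) u = conv_unit u \<ominus>\<^bsub>U\<^esub> conv_power unit_minus_id (Suc N) u"
proof (induction N)
  case 0
  show ?case using conv_id_left[OF linear_map_conv_unit u] by simp
next
  case (Suc N)
  interpret U: module R U by (rule U_module)
  let ?g = "conv_power unit_minus_id"
  have "conv (\<lambda>x. x) (antipode_approx (Suc N)) u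
      = conv (\<lambda>x. x) (antipode_approx N) u \<oplus>\<^bsub>U\<^esub> conv (\<lambda>x. x) (?g (Suc N)) u"
    unfolding antipode_approx.simps(2)
    by (rule conv_add_right[OF linear_map_id[OF U_module] linear_map_antipode_approx linear_map_unit_minus_id_power u])
  also have "\<dots> = (conv_unit u \<ominus>\<^bsub>U\<^esub> ?g (Suc N) u) \<oplus>\<^bsub>U\<^esub> (?g (Suc N) u \<ominus>\<^bsub>U\<^esub> ?g (Suc (Suc N)) u)"
    using Suc conv_id_left[OF linear_map_unit_minus_id_power[of "Suc N"] u]
      conv_power.simps(2)[of unit_minus_id "Suc N"] by (simp del: conv_power.simps)
  also have "\<dots> = conv_unit u \<ominus>\<^bsub>U\<^esub> ?g (Suc (Suc N)) u"
    using conv_unit_closed[OF u] linear_map_closed[OF linear_map_unit_minus_id_power u]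
    by (intro U.minus_telescope)
  finally show ?case .
qed

lemma unit_minus_id_F0: assumes "a \<in> F 0" shows "unit_minus_id a = \<zero>\<^bsub>U\<^esub>"
proof -
  interpret U: module R U by (rule U_module)
  have a: "a \<in> carrier U" using assms F_carrier by auto
  have "conv_unit a = a" unfolding conv_unit_def using F0_eq_eta_eps[OF assms] by simp
  then show ?thesis unfolding unit_minus_id_def using a by (simp add: U.minus_eq U.r_neg)
qed

lemma conv_power_vanish: "u \<in> F s \<Longrightarrow> s < n \<Longrightarrow> conv_power unit_minus_id n u = \<zero>\<^bsub>U\<^esub>"
proof (induction n arbitrary: s u)
  case 0
  then show ?case by simp
next
  case (Suc m)
  have u: "u \<in> carrier U" using Suc F_carrier by auto
  have "tmap R U U U U unit_minus_id (conv_power unit_minus_id m) (psi u) = \<zero>\<^bsub>T\<^esub>"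
  proof (rule tspan_linear_map_zero[OF U_module U_module T_module
        linear_map_tmap_U[OF linear_map_unit_minus_id linear_map_unit_minus_id_power] F_pairs_subset _
        F_psi[OF Suc.prems(1)]])
    fix a b assume "(a, b) \<in> F_pairs s"
    then obtain t v where tv: "t + v = s" "a \<in> F t" "b \<in> F v" by blast
    have ab: "a \<in> carrier U" "b \<in> carrier U" using tv F_carrier by auto
    show "tmap R U U U U unit_minus_id (conv_power unit_minus_id m) (tns a b) = \<zero>\<^bsub>T\<^esub>"
    proof (cases "t = 0")
      case True
      then show ?thesis using tv ab unit_minus_id_F0 linear_map_closed[OF linear_map_unit_minus_id_power]
        by (simp add: tmap_tens_U[OF linear_map_unit_minus_id linear_map_unit_minus_id_power] tens_zero_fst)
    next
      case False
      then have "v < m" using tv Suc.prems by auto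
      then have "conv_power unit_minus_id m b = \<zero>\<^bsub>U\<^esub>" using Suc.IH tv by blast
      then show ?thesis using ab linear_map_closed[OF linear_map_unit_minus_id]
        by (simp add: tmap_tens_U[OF linear_map_unit_minus_id linear_map_unit_minus_id_power] tens_zero_snd)
    qed
  qed
  then show ?case unfolding conv_power.simps conv_def using linear_map_zero[OF T_module U_module linear_map_sigma] by simp
qed

lemma antipode_approx_stable: assumes "u \<in> F s" "s \<le> M" shows "antipode_approx M u = antipode_approx s u"
  using assms(2)
proof (induction M rule: dec_induct)
  case base
  then show ?case by simp
next
  interpret U: module R U by (rule U_module)
  case (step k)
  have u: "u \<in> carrier U" using assms F_carrier by auto
  have "conv_power unit_minus_id (Suc k) u = \<zero>\<^bsub>U\<^esub>" by (rule conv_power_vanish[OF assms(1)]) (use step(1) in simp)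
  then show ?case using step linear_map_closed[OF linear_map_antipode_approx u] by (simp del: conv_power.simps)
qed

lemma antipode_eq_approx: assumes "u \<in> F s" "s \<le> M" shows "antipode u = antipode_approx M u"
proof -
  let ?s0 = "SOME s. u \<in> F s"
  have s0: "u \<in> F ?s0" using assms(1) by (rule someI)
  have "antipode u = antipode_approx ?s0 u" unfolding antipode_def ..
  also have "\<dots> = antipode_approx (max ?s0 M) u" using antipode_approx_stable[OF s0, of "max ?s0 M"] by simp
  also have "\<dots> = antipode_approx s u" using antipode_approx_stable[OF assms(1), of "max ?s0 M"] assms(2) by simp
  also have "\<dots> = antipode_approx M u" using antipode_approx_stable[OF assms] by simp
  finally show ?thesis .
qed

lemma linear_map_antipode: "linear_map R U U antipode"
  unfolding linear_map_def
proof (intro conjI ballI)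
  interpret U: module R U by (rule U_module)
  show "antipode \<in> carrier U \<rightarrow> carrier U"
  proof
    fix u assume u: "u \<in> carrier U"
    then obtain s where "u \<in> F s" using F_exhaustive by blast
    then show "antipode u \<in> carrier U" using antipode_eq_approx[of u s s] linear_map_closed[OF linear_map_antipode_approx u] by simp
  qed
next
  fix u v assume uv: "u \<in> carrier U" "v \<in> carrier U"
  then obtain s t where st: "u \<in> F s" "v \<in> F t" using F_exhaustive by blast
  let ?M = "max s t"
  have M: "u \<in> F ?M" "v \<in> F ?M" using st F_mono[of s ?M] F_mono[of t ?M] by auto
  have "u \<oplus>\<^bsub>U\<^esub> v \<in> F ?M" using M F_add by blast
  then show "antipode (u \<oplus>\<^bsub>U\<^esub> v) = antipode u \<oplus>\<^bsub>U\<^esub> antipode v"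
    using antipode_eq_approx[OF M(1) order_refl] antipode_eq_approx[OF M(2) order_refl] antipode_eq_approx[of "u \<oplus>\<^bsub>U\<^esub> v" ?M ?M] linear_map_add[OF linear_map_antipode_approx uv]
    by simp
next
  fix r u assume ru: "r \<in> carrier R" "u \<in> carrier U"
  then obtain s where s: "u \<in> F s" using F_exhaustive by blast
  have "r \<odot>\<^bsub>U\<^esub> u \<in> F s" using F_smult[OF ru(1) s] .
  then show "antipode (r \<odot>\<^bsub>U\<^esub> u) = r \<odot>\<^bsub>U\<^esub> antipode u"
    using antipode_eq_approx[OF s order_refl] antipode_eq_approx[of "r \<odot>\<^bsub>U\<^esub> u" s s] linear_map_smult[OF linear_map_antipode_approx ru] by simp
qed

lemma conv_id_antipode:
  assumes u: "u \<in> carrier U"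
  shows "conv (\<lambda>x. x) antipode u = conv_unit u"
proof -
  interpret U: module R U by (rule U_module)
  obtain s where s: "u \<in> F s" using F_exhaustive[OF u] by blast
  note tmap_id = linear_map_tmap_U[OF linear_map_id[OF U_module]]
  have "tmap R U U U U (\<lambda>x. x) antipode (psi u) = tmap R U U U U (\<lambda>x. x) (antipode_approx s) (psi u)"
  proof (rule tspan_linear_map_eq[OF U_module U_module T_module tmap_id[OF linear_map_antipode]
        tmap_id[OF linear_map_antipode_approx] F_pairs_subset _ F_psi[OF s]])
    fix a b assume "(a, b) \<in> F_pairs s"
    then obtain t v where tv: "t + v = s" "a \<in> F t" "b \<in> F v" by blast
    then have "a \<in> carrier U" "b \<in> carrier U" "antipode b = antipode_approx s b"
      using F_carrier antipode_eq_approx[OF tv(3)] by auto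
    then show "tmap R U U U U (\<lambda>x. x) antipode (tns a b) = tmap R U U U U (\<lambda>x. x) (antipode_approx s) (tns a b)"
      by (simp add: tmap_tens_U[OF linear_map_id[OF U_module] linear_map_antipode]
          tmap_tens_U[OF linear_map_id[OF U_module] linear_map_antipode_approx])
  qed
  then have "conv (\<lambda>x. x) antipode u = conv (\<lambda>x. x) (antipode_approx s) u" unfolding conv_def by simp
  also have "\<dots> = conv_unit u \<ominus>\<^bsub>U\<^esub> conv_power unit_minus_id (Suc s) u" by (rule conv_id_antipode_approx[OF u])
  also have "\<dots> = conv_unit u"
    using conv_power_vanish[OF s, of "Suc s"] conv_unit_closed[OF u] by (simp add: U.minus_eq del: conv_power.simps)
  finally show ?thesis .
qed

lemma conv_comm: assumes "linear_map R U U f" "linear_map R U U g" "u \<in> carrier U"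
  shows "conv f g u = conv g f u"
proof -
  have h: "bilinear R U U U (\<lambda>(a, b). sigma (tns (f a) (g b)))"
  proof (rule bilinearI)
    fix b assume b: "b \<in> carrier U"
    show "linear_map R U U (\<lambda>a. sigma (tns (f a) (g b)))"
      by (rule linear_map_comp[OF assms(1) linear_map_sigma_tens_fst[OF linear_map_closed[OF assms(2) b]]])
  next
    fix a assume a: "a \<in> carrier U"
    show "linear_map R U U (\<lambda>b. sigma (tns (f a) (g b)))"
      by (rule linear_map_comp[OF assms(2) linear_map_sigma_tens_snd[OF linear_map_closed[OF assms(1) a]]])
  qed
  have "conv f g u = sweedler U (\<lambda>a b. sigma (tns (f a) (g b))) u" by (rule conv_sweedler[OF assms])
  also have "\<dots> = sweedler U (\<lambda>a b. sigma (tns (f b) (g a))) u" by (rule sweedler_cocomm[OF U_module h assms(3)])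
  also have "\<dots> = sweedler U (\<lambda>a b. sigma (tns (g a) (f b))) u"
    using assms linear_map_closed[OF assms(1)] linear_map_closed[OF assms(2)]
    by (intro sweedler_cong[OF U_module]) (auto simp: sigma_commute intro!: sigma_tens_closed)
  also have "\<dots> = conv g f u" by (rule conv_sweedler[symmetric, OF assms(2,1,3)])
  finally show ?thesis .
qed

lemma conv_antipode_id: "u \<in> carrier U \<Longrightarrow> conv antipode (\<lambda>x. x) u = conv_unit u"
  using conv_comm[OF linear_map_antipode linear_map_id[OF U_module]] conv_id_antipode by simp

section \<open>The antipode preserves the counit\<close>

lemma counit_tensor_bilinear: "bilinear R U U RR (\<lambda>(u, v). eps u \<otimes>\<^bsub>R\<^esub> eps v)"
proof -
  interpret R: cring R by (rule R_cring)
  show ?thesis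
    by (rule bilinearI) (auto simp: linear_map_def ring_as_module_def eps_closed eps_add eps_smult
        R.l_distr R.r_distr R.m_assoc R.m_lcomm)
qed

lemma eps_sigma_tens: "x \<in> carrier U \<Longrightarrow> y \<in> carrier U \<Longrightarrow> eps (sigma (tns x y)) = eps x \<otimes>\<^bsub>R\<^esub> eps y"
  using sigma_eps[OF tns_closed] tlift_tens[OF U_module U_module RR_module counit_tensor_bilinear]
  unfolding tensor_counit_def by simp

lemma eps_conv: assumes "linear_map R U U f" "linear_map R U U h" "u \<in> carrier U"
  shows "eps (conv f h u) = sweedler RR (\<lambda>a b. eps (f a) \<otimes>\<^bsub>R\<^esub> eps (h b)) u"
proof -
  interpret R: cring R by (rule R_cring)
  have "eps (conv f h u) = sweedler RR (\<lambda>a b. eps (sigma (tns (f a) (h b)))) u"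
    unfolding conv_sweedler[OF assms]
    using assms linear_map_closed[OF assms(1)] linear_map_closed[OF assms(2)]
    by (intro linear_map_sweedler_comp[OF U_module RR_module linear_map_eps]) (auto intro!: sigma_tens_closed)
  also have "\<dots> = sweedler RR (\<lambda>a b. eps (f a) \<otimes>\<^bsub>R\<^esub> eps (h b)) u"
    using assms linear_map_closed[OF assms(1)] linear_map_closed[OF assms(2)]
    by (intro sweedler_cong[OF RR_module]) (auto simp: eps_sigma_tens ring_as_module_def
        intro!: R.m_closed eps_closed)
  finally show ?thesis .
qed

lemma eps_unit_minus_id: assumes "a \<in> carrier U" shows "eps (unit_minus_id a) = \<zero>\<^bsub>R\<^esub>"
proof -
  interpret R: cring R by (rule R_cring)
  interpret U: module R U by (rule U_module)
  have "eps (unit_minus_id a) \<oplus>\<^bsub>R\<^esub> eps a = eps (unit_minus_id a \<oplus>\<^bsub>U\<^esub> a)"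
    using assms linear_map_closed[OF linear_map_unit_minus_id] by (simp add: eps_add)
  also have "unit_minus_id a \<oplus>\<^bsub>U\<^esub> a = conv_unit a" unfolding unit_minus_id_def using assms conv_unit_closed
    by (simp add: U.minus_eq U.a_assoc U.l_neg)
  also have "eps (conv_unit a) = eps a" unfolding conv_unit_def by (rule eta_eps[OF eps_closed[OF assms]])
  finally have "eps (unit_minus_id a) \<oplus>\<^bsub>R\<^esub> eps a = eps a" .
  then show ?thesis using assms linear_map_closed[OF linear_map_unit_minus_id] eps_closed
    by (metis R.add.r_cancel_one' R.l_zero R.zero_closed R.add.m_comm)
qed

lemma eps_conv_power_Suc: assumes "u \<in> carrier U" shows "eps (conv_power unit_minus_id (Suc m) u) = \<zero>\<^bsub>R\<^esub>"
proof -
  interpret R: cring R by (rule R_cring)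
  have "eps (conv_power unit_minus_id (Suc m) u) = sweedler RR (\<lambda>a b. eps (unit_minus_id a) \<otimes>\<^bsub>R\<^esub> eps (conv_power unit_minus_id m b)) u"
    using eps_conv[OF linear_map_unit_minus_id linear_map_unit_minus_id_power assms] by simp
  also have "\<dots> = sweedler RR (\<lambda>a b. \<zero>\<^bsub>RR\<^esub>) u"
    using assms linear_map_closed[OF linear_map_unit_minus_id_power]
    by (intro sweedler_cong[OF RR_module]) (auto simp: eps_unit_minus_id eps_closed ring_as_module_def)
  also have "\<dots> = \<zero>\<^bsub>RR\<^esub>" by (rule sweedler_zero[OF RR_module assms])
  finally show ?thesis by (simp add: ring_as_module_def)
qed

lemma eps_antipode_approx: assumes "u \<in> carrier U" shows "eps (antipode_approx N u) = eps u"
proof (induction N)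
  case 0
  then show ?case unfolding antipode_approx.simps conv_unit_def using eta_eps eps_closed assms by simp
next
  interpret R: cring R by (rule R_cring)
  case (Suc N)
  have "eps (antipode_approx (Suc N) u) = eps (antipode_approx N u) \<oplus>\<^bsub>R\<^esub> eps (conv_power unit_minus_id (Suc N) u)"
    unfolding antipode_approx.simps using assms linear_map_closed[OF linear_map_antipode_approx] linear_map_closed[OF linear_map_unit_minus_id_power] by (simp add: eps_add del: conv_power.simps)
  then show ?case using Suc eps_conv_power_Suc[OF assms] eps_closed[OF assms] by (simp del: conv_power.simps)
qed

lemma eps_antipode: assumes "u \<in> carrier U" shows "eps (antipode u) = eps u"
proof -
  obtain s where "u \<in> F s" using F_exhaustive[OF assms] by blast
  then show ?thesis using antipode_eq_approx[of u s s] eps_antipode_approx[OF assms] by simp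
qed

section \<open>The algebra structure on U \<otimes> U\<close>

abbreviation "TT \<equiv> tensor R T T"
abbreviation "tns2 \<equiv> tens R T T"

lemma tmiddle_inner_bilinear: assumes "a \<in> carrier U" "a' \<in> carrier U"
  shows "bilinear R U U TT (\<lambda>(b, b'). tns2 (tns a b) (tns a' b'))"
proof (rule bilinearI)
  fix b' assume "b' \<in> carrier U"
  then show "linear_map R U TT (\<lambda>b. tns2 (tns a b) (tns a' b'))"
    using linear_map_comp[OF linear_map_tens_snd[OF U_module U_module assms(1)] linear_map_tens_fst[OF T_module T_module tns_closed[OF assms(2)]]] by simp
next
  fix b assume "b \<in> carrier U"
  then show "linear_map R U TT (\<lambda>b'. tns2 (tns a b) (tns a' b'))"
    using linear_map_comp[OF linear_map_tens_snd[OF U_module U_module assms(2)] linear_map_tens_snd[OF T_module T_module tns_closed[OF assms(1)]]] by simp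
qed

lemma tmiddle_middle_bilinear: assumes "Y \<in> carrier T"
  shows "bilinear R U U TT (\<lambda>(a, a'). tlift R U U TT (\<lambda>(b, b'). tns2 (tns a b) (tns a' b')) Y)"
proof (rule bilinearI)
  fix a' assume a': "a' \<in> carrier U"
  have "linear_map R U TT (\<lambda>a. tlift R U U TT ((\<lambda>a. \<lambda>(b, b'). tns2 (tns a b) (tns a' b')) a) Y)"
    by (rule linear_map_tlift_param[OF U_module U_module TT_module U_module assms])
       (use a' in \<open>auto intro!: linear_map_comp[OF linear_map_tens_fst[OF U_module U_module] linear_map_tens_fst[OF T_module T_module]] tns_closed\<close>)
  then show "linear_map R U TT (\<lambda>a. tlift R U U TT (\<lambda>(b, b'). tns2 (tns a b) (tns a' b')) Y)"
    by simp
next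
  fix a assume a: "a \<in> carrier U"
  have "linear_map R U TT (\<lambda>a'. tlift R U U TT ((\<lambda>a'. \<lambda>(b, b'). tns2 (tns a b) (tns a' b')) a') Y)"
    by (rule linear_map_tlift_param[OF U_module U_module TT_module U_module assms])
       (use a in \<open>auto intro!: linear_map_comp[OF linear_map_tens_fst[OF U_module U_module] linear_map_tens_snd[OF T_module T_module]] tns_closed\<close>)
  then show "linear_map R U TT (\<lambda>a'. tlift R U U TT (\<lambda>(b, b'). tns2 (tns a b) (tns a' b')) Y)"
    by simp
qed

lemma tmiddle_bilinear: "bilinear R T T TT (\<lambda>(X, Y). tlift R U U TT (\<lambda>(a, a'). tlift R U U TT (\<lambda>(b, b'). tns2 (tns a b) (tns a' b')) Y) X)"
proof (rule bilinearI)
  fix Y assume Y: "Y \<in> carrier T"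
  show "linear_map R T TT (\<lambda>X. tlift R U U TT (\<lambda>(a, a'). tlift R U U TT (\<lambda>(b, b'). tns2 (tns a b) (tns a' b')) Y) X)"
    using linear_map_tlift[OF U_module U_module TT_module tmiddle_middle_bilinear[OF Y]] by simp
next
  fix X assume X: "X \<in> carrier T"
  have "linear_map R T TT (\<lambda>Y. tlift R U U TT ((\<lambda>Y. \<lambda>(a, a'). tlift R U U TT (\<lambda>(b, b'). tns2 (tns a b) (tns a' b')) Y) Y) X)"
    by (rule linear_map_tlift_param[OF U_module U_module TT_module T_module X])
       (auto intro!: linear_map_tlift[OF U_module U_module TT_module tmiddle_inner_bilinear])
  then show "linear_map R T TT (\<lambda>Y. tlift R U U TT (\<lambda>(a, a'). tlift R U U TT (\<lambda>(b, b'). tns2 (tns a b) (tns a' b')) Y) X)"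
    by simp
qed

lemma tmiddle_eq: "tmiddle R U U = tlift R T T TT (\<lambda>(X, Y). tlift R U U TT (\<lambda>(a, a'). tlift R U U TT (\<lambda>(b, b'). tns2 (tns a b) (tns a' b')) Y) X)"
  unfolding tmiddle_def Let_def ..

lemma linear_map_tmiddle: "linear_map R TT TT (tmiddle R U U)"
  unfolding tmiddle_eq by (rule linear_map_tlift[OF T_module T_module TT_module tmiddle_bilinear])

lemma tmiddle_tens: assumes "a1 \<in> carrier U" "a2 \<in> carrier U" "b1 \<in> carrier U" "b2 \<in> carrier U"
  shows "tmiddle R U U (tns2 (tns a1 a2) (tns b1 b2)) = tns2 (tns a1 b1) (tns a2 b2)"
  unfolding tmiddle_eq
  using assms tlift_tens[OF T_module T_module TT_module tmiddle_bilinear tns_closed tns_closed]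
    tlift_tens[OF U_module U_module TT_module tmiddle_middle_bilinear[OF tns_closed]]
    tlift_tens[OF U_module U_module TT_module tmiddle_inner_bilinear]
  by simp

definition tmult :: "('u \<times> 'u \<Rightarrow> 'r) set \<Rightarrow> ('u \<times> 'u \<Rightarrow> 'r) set \<Rightarrow> ('u \<times> 'u \<Rightarrow> 'r) set" where
  "tmult Y Z = tmap R T T U U sigma sigma (tmiddle R U U (tns2 Y Z))"

lemma linear_map_tmap_tmiddle: "linear_map R TT T (\<lambda>x. tmap R T T U U sigma sigma (tmiddle R U U x))"
  by (rule linear_map_comp[OF linear_map_tmiddle linear_map_tmap[OF T_module T_module U_module U_module linear_map_sigma linear_map_sigma]])

lemma linear_map_tmult_fst: "Z \<in> carrier T \<Longrightarrow> linear_map R T T (\<lambda>Y. tmult Y Z)"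
  unfolding tmult_def by (rule linear_map_comp[OF linear_map_tens_fst[OF T_module T_module] linear_map_tmap_tmiddle])

lemma linear_map_tmult_snd: "Y \<in> carrier T \<Longrightarrow> linear_map R T T (\<lambda>Z. tmult Y Z)"
  unfolding tmult_def by (rule linear_map_comp[OF linear_map_tens_snd[OF T_module T_module] linear_map_tmap_tmiddle])

lemma tmult_closed: "Y \<in> carrier T \<Longrightarrow> Z \<in> carrier T \<Longrightarrow> tmult Y Z \<in> carrier T"
  using linear_map_closed[OF linear_map_tmult_fst] by blast

lemma tmult_tens: assumes "a1 \<in> carrier U" "a2 \<in> carrier U" "b1 \<in> carrier U" "b2 \<in> carrier U"
  shows "tmult (tns a1 a2) (tns b1 b2) = tns (sigma (tns a1 b1)) (sigma (tns a2 b2))"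
  unfolding tmult_def tmiddle_tens[OF assms]
  by (rule tmap_tens[OF T_module T_module U_module U_module linear_map_sigma linear_map_sigma]) (use assms in \<open>auto intro: tns_closed\<close>)

lemma psi_sigma: assumes "a \<in> carrier U" "b \<in> carrier U"
  shows "psi (sigma (tns a b)) = tmult (psi a) (psi b)"
  unfolding sigma_psi[OF tns_closed[OF assms]] tensor_coprod_def tmult_def
  using tmap_tens[OF U_module U_module T_module T_module linear_map_psi linear_map_psi assms] by simp

abbreviation "T_one \<equiv> tns (eta \<one>\<^bsub>R\<^esub>) (eta \<one>\<^bsub>R\<^esub>)"

lemma one_in_RR: "\<one>\<^bsub>R\<^esub> \<in> carrier RR"
  using cring.axioms(1)[OF R_cring] by (simp add: ring_as_module_def ring.ring_simprules(6))

lemma T_one_closed: "T_one \<in> carrier T"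
  using eta_closed one_in_RR by (simp add: tns_closed ring_as_module_def)

lemma psi_eta: assumes "r \<in> carrier R" shows "psi (eta r) = r \<odot>\<^bsub>T\<^esub> T_one"
proof -
  have tl: "linear_map R (tensor R RR RR) T (tmap R RR RR U U eta eta)"
    by (rule linear_map_tmap[OF RR_module RR_module U_module U_module linear_map_eta linear_map_eta])
  have "psi (eta r) = tmap R RR RR U U eta eta (r \<odot>\<^bsub>tensor R RR RR\<^esub> tens R RR RR \<one>\<^bsub>R\<^esub> \<one>\<^bsub>R\<^esub>)"
    using eta_psi[OF assms] unfolding ring_coprod_def .
  also have "\<dots> = r \<odot>\<^bsub>T\<^esub> tmap R RR RR U U eta eta (tens R RR RR \<one>\<^bsub>R\<^esub> \<one>\<^bsub>R\<^esub>)"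
    by (rule linear_map_smult[OF tl assms tens_closed[OF RR_module RR_module one_in_RR one_in_RR]])
  also have "\<dots> = r \<odot>\<^bsub>T\<^esub> T_one"
    using tmap_tens[OF RR_module RR_module U_module U_module linear_map_eta linear_map_eta one_in_RR one_in_RR] by simp
  finally show ?thesis .
qed

lemma tmult_T_one: assumes "Y \<in> carrier T" shows "tmult Y T_one = Y"
proof (rule tensor_linear_map_ext[OF U_module U_module T_module linear_map_tmult_fst[OF T_one_closed] linear_map_id[OF T_module] _ assms])
  fix a b assume ab: "a \<in> carrier U" "b \<in> carrier U"
  have o: "\<one>\<^bsub>R\<^esub> \<in> carrier R" using one_in_RR by (simp add: ring_as_module_def)
  show "tmult (tns a b) T_one = tns a b"
    using tmult_tens[OF ab eta_closed[OF o] eta_closed[OF o]] sigma_unit_right[OF o ab(1)] sigma_unit_right[OF o ab(2)] ab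
      module.smult_one[OF U_module] by simp
qed

lemma counit_right_bilinear: "bilinear R U U U (\<lambda>(a, b). eps b \<odot>\<^bsub>U\<^esub> a)"
proof -
  interpret U: module R U by (rule U_module)
  interpret R: cring R by (rule R_cring)
  show ?thesis
    by (rule bilinearI) (auto simp: linear_map_def eps_closed eps_add eps_smult U.smult_l_distr
        U.smult_r_distr U.smult_lcomm U.smult_assoc1)
qed

definition tconv ::
    "('u \<Rightarrow> ('u \<times> 'u \<Rightarrow> 'r) set) \<Rightarrow> ('u \<Rightarrow> ('u \<times> 'u \<Rightarrow> 'r) set) \<Rightarrow> 'u \<Rightarrow> ('u \<times> 'u \<Rightarrow> 'r) set" where
  "tconv X Y u = sweedler T (\<lambda>a b. tmult (X a) (Y b)) u"

lemma tmult_psi_lower_vanishing: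
  assumes D: "linear_map R U T D" and tw: "t + w = s" "a \<in> F t" "b \<in> F w"
    and lower: "\<And>t a. t < s \<Longrightarrow> a \<in> F t \<Longrightarrow> D a = \<zero>\<^bsub>T\<^esub>"
  shows "tmult (D a) (psi b) = D (eps b \<odot>\<^bsub>U\<^esub> a)"
proof -
  have ab: "a \<in> carrier U" "b \<in> carrier U" and eb: "eps b \<in> carrier R"
    using tw F_carrier eps_closed by auto
  show ?thesis
  proof (cases "t < s")
    case True
    then show ?thesis
      using lower tw linear_map_zero[OF T_module T_module linear_map_tmult_fst[OF psi_closed[OF ab(2)]]]
        linear_map_smult[OF D eb ab(1)] module.smult_r_null[OF T_module eb] by simp
  next
    case False
    then have "w = 0" using tw by simp
    then have "b = eta (eps b)" using F0_eq_eta_eps tw by simp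
    then have "tmult (D a) (psi b) = tmult (D a) (eps b \<odot>\<^bsub>T\<^esub> T_one)"
      using psi_eta[OF eb] by metis
    also have "\<dots> = eps b \<odot>\<^bsub>T\<^esub> tmult (D a) T_one"
      by (rule linear_map_smult[OF linear_map_tmult_snd[OF linear_map_closed[OF D ab(1)]] eb T_one_closed])
    also have "\<dots> = D (eps b \<odot>\<^bsub>U\<^esub> a)"
      using tmult_T_one[OF linear_map_closed[OF D ab(1)]] linear_map_smult[OF D eb ab(1)] by simp
    finally show ?thesis .
  qed
qed

lemma tconv_psi_lower_vanishing:
  assumes D: "linear_map R U T D" and v: "v \<in> F s"
    and lower: "\<And>t a. t < s \<Longrightarrow> a \<in> F t \<Longrightarrow> D a = \<zero>\<^bsub>T\<^esub>"
  shows "tconv D psi v = D v"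
proof -
  let ?c = "tlift R U U U (\<lambda>(a, b). eps b \<odot>\<^bsub>U\<^esub> a)"
  have c: "linear_map R T U ?c" by (rule linear_map_tlift[OF U_module U_module U_module counit_right_bilinear])
  have k_bilinear: "bilinear R U U T (\<lambda>(a, b). tmult (D a) (psi b))"
    using linear_map_comp[OF D linear_map_tmult_fst[OF psi_closed]]
      linear_map_comp[OF linear_map_psi linear_map_tmult_snd[OF linear_map_closed[OF D]]]
    by (intro bilinearI)
  let ?k = "tlift R U U T (\<lambda>(a, b). tmult (D a) (psi b))"
  have k: "linear_map R T T ?k" by (rule linear_map_tlift[OF U_module U_module T_module k_bilinear])
  have "?k (psi v) = D (?c (psi v))"
  proof (rule tspan_linear_map_eq[OF U_module U_module T_module k linear_map_comp[OF c D] F_pairs_subset _ F_psi[OF v]])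
    fix a b assume "(a, b) \<in> F_pairs s"
    then obtain t w where tw: "t + w = s" "a \<in> F t" "b \<in> F w" by blast
    then have ab: "a \<in> carrier U" "b \<in> carrier U" using F_carrier by auto
    show "?k (tns a b) = D (?c (tns a b))"
      using tmult_psi_lower_vanishing[OF D tw lower] tlift_tens[OF U_module U_module T_module k_bilinear ab]
        tlift_tens[OF U_module U_module U_module counit_right_bilinear ab] by simp
  qed
  then show ?thesis
    unfolding tconv_def sweedler_def using counit_right[OF F_carrier[THEN subsetD, OF v]] by simp
qed

lemma tconv_psi_eq_zero_imp_zero:
  assumes D: "linear_map R U T D" and zero: "\<And>u. u \<in> carrier U \<Longrightarrow> tconv D psi u = \<zero>\<^bsub>T\<^esub>"
    and u: "u \<in> carrier U"
  shows "D u = \<zero>\<^bsub>T\<^esub>"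
proof -
  have "\<forall>v\<in>F s. D v = \<zero>\<^bsub>T\<^esub>" for s
  proof (induction s rule: less_induct)
    case (less s)
    then show ?case
      using tconv_psi_lower_vanishing[OF D] zero F_carrier by (metis subsetD)
  qed
  then show ?thesis using F_exhaustive[OF u] by blast
qed

lemma tconv_psi_cancel:
  assumes X: "linear_map R U T X" and X': "linear_map R U T X'"
    and eq: "\<And>u. u \<in> carrier U \<Longrightarrow> tconv X psi u = tconv X' psi u"
    and u: "u \<in> carrier U"
  shows "X u = X' u"
proof -
  interpret T: module R T by (rule T_module)
  let ?D = "\<lambda>a. X a \<ominus>\<^bsub>T\<^esub> X' a"
  have D: "linear_map R U T ?D" by (rule linear_map_pointwise_diff[OF U_module T_module X X'])
  have "tconv ?D psi v = \<zero>\<^bsub>T\<^esub>" if v: "v \<in> carrier U" for v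
  proof -
    have "tconv ?D psi v = sweedler T (\<lambda>a b. tmult (X a) (psi b) \<ominus>\<^bsub>T\<^esub> tmult (X' a) (psi b)) v"
      unfolding tconv_def using v linear_map_closed[OF X] linear_map_closed[OF X'] psi_closed
      by (intro sweedler_cong[OF T_module])
         (auto simp: linear_map_diff[OF T_module T_module linear_map_tmult_fst] tmult_closed)
    also have "\<dots> = \<zero>\<^bsub>T\<^esub>"
      using v linear_map_closed[OF X] linear_map_closed[OF X'] psi_closed eq[OF v]
      by (simp add: tconv_def sweedler_diff[OF T_module] tmult_closed sweedler_closed[OF T_module] T.minus_self)
    finally show ?thesis .
  qed
  then have "?D u = \<zero>\<^bsub>T\<^esub>" by (rule tconv_psi_eq_zero_imp_zero[OF D _ u])
  then show ?thesis using linear_map_closed[OF X u] linear_map_closed[OF X' u] by (rule T.minus_eq_zeroD[rotated 2])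
qed

section \<open>The antipode preserves the coproduct\<close>

lemma tconv_psi_antipode_psi:
  assumes u: "u \<in> carrier U"
  shows "tconv (\<lambda>a. psi (antipode a)) psi u = eps u \<odot>\<^bsub>T\<^esub> T_one"
proof -
  have S: "\<And>a. a \<in> carrier U \<Longrightarrow> antipode a \<in> carrier U" by (rule linear_map_closed[OF linear_map_antipode])
  have "tconv (\<lambda>a. psi (antipode a)) psi u = sweedler T (\<lambda>a b. psi (sigma (tns (antipode a) b))) u"
    unfolding tconv_def using S
    by (intro sweedler_cong[OF T_module u]) (auto simp: psi_sigma intro: tmult_closed psi_closed)
  also have "\<dots> = psi (sweedler U (\<lambda>a b. sigma (tns (antipode a) b)) u)"
    using S by (intro linear_map_sweedler_comp[symmetric, OF U_module T_module linear_map_psi u] sigma_tens_closed)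
  also have "\<dots> = psi (conv antipode (\<lambda>x. x) u)"
    using conv_sweedler[OF linear_map_antipode linear_map_id[OF U_module] u] by simp
  also have "\<dots> = eps u \<odot>\<^bsub>T\<^esub> T_one"
    using conv_antipode_id[OF u] psi_eta[OF eps_closed[OF u]] unfolding conv_unit_def by simp
  finally show ?thesis .
qed

definition antipode_quad :: "'u \<Rightarrow> 'u \<Rightarrow> 'u \<Rightarrow> 'u \<Rightarrow> ('u \<times> 'u \<Rightarrow> 'r) set" where
  "antipode_quad x y z w = tns (sigma (tns (antipode x) z)) (sigma (tns (antipode y) w))"

lemma quadrilinear_antipode_quad: "quadrilinear R U T antipode_quad"
proof -
  have S: "\<And>x. x \<in> carrier U \<Longrightarrow> antipode x \<in> carrier U" by (rule linear_map_closed[OF linear_map_antipode])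
  note sigma_antipode = linear_map_comp[OF linear_map_antipode linear_map_sigma_tens_fst]
  show ?thesis
    unfolding quadrilinear_def antipode_quad_def using S
    by (auto intro!: sigma_tens_closed
        linear_map_comp[OF sigma_antipode linear_map_tens_fst[OF U_module U_module]]
        linear_map_comp[OF sigma_antipode linear_map_tens_snd[OF U_module U_module]]
        linear_map_comp[OF linear_map_sigma_tens_snd linear_map_tens_fst[OF U_module U_module]]
        linear_map_comp[OF linear_map_sigma_tens_snd linear_map_tens_snd[OF U_module U_module]])
qed

lemma tmult_tmap_antipode_psi: assumes ab: "a \<in> carrier U" "b \<in> carrier U"
  shows "tmult (tmap R U U U U antipode antipode (psi a)) (psi b) = sweedler T (\<lambda>a1 a2. sweedler T (\<lambda>b1 b2. antipode_quad a1 a2 b1 b2) b) a"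
proof -
  have l: "linear_map R T T (\<lambda>Y. tmult (tmap R U U U U antipode antipode Y) (psi b))"
    by (rule linear_map_comp[OF linear_map_tmap_U[OF linear_map_antipode linear_map_antipode] linear_map_tmult_fst[OF psi_closed[OF ab(2)]]])
  have inner: "tmult (tns (antipode x) (antipode y)) (psi b) = sweedler T (\<lambda>b1 b2. antipode_quad x y b1 b2) b"
    if xy: "x \<in> carrier U" "y \<in> carrier U" for x y
  proof -
    have Sxy: "antipode x \<in> carrier U" "antipode y \<in> carrier U" using xy linear_map_closed[OF linear_map_antipode] by auto
    have "tmult (tns (antipode x) (antipode y)) (psi b) = tlift R U U T (\<lambda>(b1, b2). tmult (tns (antipode x) (antipode y)) (tns b1 b2)) (psi b)"
      by (rule tlift_expand[OF U_module U_module T_module linear_map_tmult_snd[OF tns_closed[OF Sxy]] psi_closed[OF ab(2)]])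
    also have "\<dots> = tlift R U U T (\<lambda>(b1, b2). antipode_quad x y b1 b2) (psi b)"
      using xy ab Sxy by (intro tlift_cong[OF U_module U_module T_module psi_closed])
        (auto simp: tmult_tens antipode_quad_def intro!: tns_closed sigma_tens_closed)
    finally show ?thesis unfolding sweedler_def .
  qed
  have "tmult (tmap R U U U U antipode antipode (psi a)) (psi b)
      = tlift R U U T (\<lambda>(a1, a2). tmult (tmap R U U U U antipode antipode (tns a1 a2)) (psi b)) (psi a)"
    by (rule tlift_expand[OF U_module U_module T_module l psi_closed[OF ab(1)]])
  also have "\<dots> = tlift R U U T (\<lambda>(a1, a2). sweedler T (\<lambda>b1 b2. antipode_quad a1 a2 b1 b2) b) (psi a)"
  proof (rule tlift_cong[OF U_module U_module T_module psi_closed[OF ab(1)]])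
    fix x y assume xy: "x \<in> carrier U" "y \<in> carrier U"
    show "(\<lambda>(a1, a2). tmult (tmap R U U U U antipode antipode (tns a1 a2)) (psi b)) (x, y) = (\<lambda>(a1, a2). sweedler T (\<lambda>b1 b2. antipode_quad a1 a2 b1 b2) b) (x, y)"
      using tmap_tens_U[OF linear_map_antipode linear_map_antipode xy] inner[OF xy] by simp
    show "(\<lambda>(a1, a2). sweedler T (\<lambda>b1 b2. antipode_quad a1 a2 b1 b2) b) (x, y) \<in> carrier T"
      using sweedler_closed[OF T_module ab(2), of "antipode_quad x y"] quadrilinear_closed[OF quadrilinear_antipode_quad xy] by simp
  qed
  finally show ?thesis unfolding sweedler_def .
qed

lemma sweedler_antipode_quad_swapped:
  assumes ab: "a \<in> carrier U" "b \<in> carrier U"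
  shows "sweedler T (\<lambda>a1 a2. sweedler T (\<lambda>b1 b2. antipode_quad a1 b1 a2 b2) b) a = tns (conv_unit a) (conv_unit b)"
proof -
  have S: "\<And>x. x \<in> carrier U \<Longrightarrow> antipode x \<in> carrier U" by (rule linear_map_closed[OF linear_map_antipode])
  have conv_antipode_id': "sweedler U (\<lambda>x y. sigma (tns (antipode x) y)) v = conv_unit v" if "v \<in> carrier U" for v
    using conv_sweedler[OF linear_map_antipode linear_map_id[OF U_module] that] conv_antipode_id[OF that] by simp
  have inner: "sweedler T (\<lambda>b1 b2. antipode_quad a1 b1 a2 b2) b = tns (sigma (tns (antipode a1) a2)) (conv_unit b)"
    if a12: "a1 \<in> carrier U" "a2 \<in> carrier U" for a1 a2
  proof -
    have "sweedler T (\<lambda>b1 b2. antipode_quad a1 b1 a2 b2) b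
        = tns (sigma (tns (antipode a1) a2)) (sweedler U (\<lambda>b1 b2. sigma (tns (antipode b1) b2)) b)"
      unfolding antipode_quad_def using a12 S
      by (intro linear_map_sweedler_comp[symmetric, OF U_module T_module linear_map_tens_snd[OF U_module U_module] ab(2)]
          sigma_tens_closed)
    then show ?thesis using conv_antipode_id'[OF ab(2)] by simp
  qed
  have "sweedler T (\<lambda>a1 a2. sweedler T (\<lambda>b1 b2. antipode_quad a1 b1 a2 b2) b) a
      = sweedler T (\<lambda>a1 a2. tns (sigma (tns (antipode a1) a2)) (conv_unit b)) a"
    using S ab by (intro sweedler_cong[OF T_module ab(1)]) (auto simp: inner intro!: tns_closed sigma_tens_closed conv_unit_closed)
  also have "\<dots> = tns (sweedler U (\<lambda>a1 a2. sigma (tns (antipode a1) a2)) a) (conv_unit b)"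
    using S by (intro linear_map_sweedler_comp[symmetric, OF U_module T_module
        linear_map_tens_fst[OF U_module U_module conv_unit_closed[OF ab(2)]] ab(1)] sigma_tens_closed)
  also have "\<dots> = tns (conv_unit a) (conv_unit b)" using conv_antipode_id'[OF ab(1)] by simp
  finally show ?thesis .
qed

lemma linear_map_smult_T_one: "linear_map R RR T (\<lambda>r. r \<odot>\<^bsub>T\<^esub> T_one)"
proof -
  interpret TM: module R T by (rule T_module)
  show ?thesis unfolding linear_map_def
  proof (intro conjI ballI)
    show "(\<lambda>r. r \<odot>\<^bsub>T\<^esub> T_one) \<in> carrier RR \<rightarrow> carrier T"
      using T_one_closed by (auto simp: ring_as_module_def)
  next
    fix x y assume "x \<in> carrier RR" "y \<in> carrier RR"
    then have "x \<in> carrier R" "y \<in> carrier R" by (simp_all add: ring_as_module_def)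
    then show "(x \<oplus>\<^bsub>RR\<^esub> y) \<odot>\<^bsub>T\<^esub> T_one = x \<odot>\<^bsub>T\<^esub> T_one \<oplus>\<^bsub>T\<^esub> y \<odot>\<^bsub>T\<^esub> T_one"
      using TM.smult_l_distr[OF _ _ T_one_closed] by (simp add: ring_as_module_def)
  next
    fix a x assume "a \<in> carrier R" "x \<in> carrier RR"
    then have "a \<in> carrier R" "x \<in> carrier R" by (simp_all add: ring_as_module_def)
    then show "(a \<odot>\<^bsub>RR\<^esub> x) \<odot>\<^bsub>T\<^esub> T_one = a \<odot>\<^bsub>T\<^esub> (x \<odot>\<^bsub>T\<^esub> T_one)"
      using TM.smult_assoc1[OF _ _ T_one_closed] by (simp add: ring_as_module_def)
  qed
qed

lemma tens_conv_unit: assumes "a \<in> carrier U" "b \<in> carrier U"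
  shows "tns (conv_unit a) (conv_unit b) = (eps a \<otimes>\<^bsub>R\<^esub> eps b) \<odot>\<^bsub>T\<^esub> T_one"
proof -
  interpret TM: module R T by (rule T_module)
  have o: "\<one>\<^bsub>R\<^esub> \<in> carrier R" using one_in_RR by (simp add: ring_as_module_def)
  have ea: "eps a \<in> carrier R" "eps b \<in> carrier R" using assms eps_closed by auto
  have e1: "eta \<one>\<^bsub>R\<^esub> \<in> carrier U" by (rule eta_closed[OF o])
  have eb: "eps b \<odot>\<^bsub>U\<^esub> eta \<one>\<^bsub>R\<^esub> \<in> carrier U" by (rule module.smult_closed[OF U_module ea(2) e1])
  have "tns (conv_unit a) (conv_unit b) = tns (eps a \<odot>\<^bsub>U\<^esub> eta \<one>\<^bsub>R\<^esub>) (eps b \<odot>\<^bsub>U\<^esub> eta \<one>\<^bsub>R\<^esub>)"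
    unfolding conv_unit_def using eta_smult[OF ea(1)] eta_smult[OF ea(2)] by simp
  also have "\<dots> = eps a \<odot>\<^bsub>T\<^esub> tns (eta \<one>\<^bsub>R\<^esub>) (eps b \<odot>\<^bsub>U\<^esub> eta \<one>\<^bsub>R\<^esub>)"
    using linear_map_smult[OF linear_map_tens_fst[OF U_module U_module eb] ea(1) e1] by simp
  also have "tns (eta \<one>\<^bsub>R\<^esub>) (eps b \<odot>\<^bsub>U\<^esub> eta \<one>\<^bsub>R\<^esub>) = eps b \<odot>\<^bsub>T\<^esub> T_one"
    using linear_map_smult[OF linear_map_tens_snd[OF U_module U_module e1] ea(2) e1] by simp
  also have "eps a \<odot>\<^bsub>T\<^esub> (eps b \<odot>\<^bsub>T\<^esub> T_one) = (eps a \<otimes>\<^bsub>R\<^esub> eps b) \<odot>\<^bsub>T\<^esub> T_one"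
    using TM.smult_assoc1[OF ea T_one_closed] by simp
  finally show ?thesis .
qed

lemma sweedler_tens_conv_unit:
  assumes u: "u \<in> carrier U"
  shows "sweedler T (\<lambda>a b. tns (conv_unit a) (conv_unit b)) u = eps u \<odot>\<^bsub>T\<^esub> T_one"
proof -
  interpret R: cring R by (rule R_cring)
  have "sweedler T (\<lambda>a b. tns (conv_unit a) (conv_unit b)) u = sweedler T (\<lambda>a b. (eps a \<otimes>\<^bsub>R\<^esub> eps b) \<odot>\<^bsub>T\<^esub> T_one) u"
    by (intro sweedler_cong[OF T_module u])
       (auto simp: tens_conv_unit intro!: module.smult_closed[OF T_module] T_one_closed eps_closed)
  also have "\<dots> = sweedler RR (\<lambda>a b. eps (eps a \<odot>\<^bsub>U\<^esub> b)) u \<odot>\<^bsub>T\<^esub> T_one"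
    by (subst linear_map_sweedler_comp[OF RR_module T_module linear_map_smult_T_one u])
       (auto simp: ring_as_module_def eps_smult eps_closed intro!: sweedler_cong[OF T_module u]
         module.smult_closed[OF T_module] T_one_closed)
  also have "sweedler RR (\<lambda>a b. eps (eps a \<odot>\<^bsub>U\<^esub> b)) u = eps u"
    using sweedler_counit_left[OF u]
      linear_map_sweedler_comp[OF U_module RR_module linear_map_eps u, of "\<lambda>a b. eps a \<odot>\<^bsub>U\<^esub> b"]
    by (simp add: eps_closed module.smult_closed[OF U_module])
  finally show ?thesis .
qed

lemma tconv_tmap_antipode_psi:
  assumes u: "u \<in> carrier U"
  shows "tconv (\<lambda>a. tmap R U U U U antipode antipode (psi a)) psi u = eps u \<odot>\<^bsub>T\<^esub> T_one"
proof -
  have swapped_closed: "sweedler T (\<lambda>a1 a2. sweedler T (\<lambda>b1 b2. G a1 a2 b1 b2) b) a \<in> carrier T"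
    if "quadrilinear R U T G" "a \<in> carrier U" "b \<in> carrier U" for G a b
    using that by (intro sweedler_closed[OF T_module]) (auto intro: quadrilinear_closed)
  have "tconv (\<lambda>a. tmap R U U U U antipode antipode (psi a)) psi u
      = sweedler T (\<lambda>a b. sweedler T (\<lambda>a1 a2. sweedler T (\<lambda>b1 b2. antipode_quad a1 a2 b1 b2) b) a) u"
    unfolding tconv_def
    by (intro sweedler_cong[OF T_module u] tmult_tmap_antipode_psi swapped_closed quadrilinear_antipode_quad)
  also have "\<dots> = sweedler T (\<lambda>a b. sweedler T (\<lambda>a1 a2. sweedler T (\<lambda>b1 b2. antipode_quad a1 b1 a2 b2) b) a) u"
    by (rule sweedler_middle_swap[OF T_module quadrilinear_antipode_quad u])
  also have "\<dots> = sweedler T (\<lambda>a b. tns (conv_unit a) (conv_unit b)) u"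
    by (intro sweedler_cong[OF T_module u] sweedler_antipode_quad_swapped tns_closed conv_unit_closed)
  also have "\<dots> = eps u \<odot>\<^bsub>T\<^esub> T_one" by (rule sweedler_tens_conv_unit[OF u])
  finally show ?thesis .
qed

lemma psi_antipode:
  "u \<in> carrier U \<Longrightarrow> psi (antipode u) = tmap R U U U U antipode antipode (psi u)"
  using tconv_psi_cancel[OF linear_map_comp[OF linear_map_antipode linear_map_psi]
      linear_map_comp[OF linear_map_psi linear_map_tmap_U[OF linear_map_antipode linear_map_antipode]]]
    tconv_psi_antipode_psi tconv_tmap_antipode_psi by simp

theorem coalg_ab_group_antipode: "coalg_ab_group R U eps psi sigma eta"
  unfolding coalg_ab_group_def
proof (intro conjI exI[of _ antipode])
  show "coalg_ab_monoid R U eps psi sigma eta" by (rule U_monoid)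
  show "coalg_map R U eps psi U eps psi antipode"
    unfolding coalg_map_def using linear_map_antipode eps_antipode psi_antipode by blast
  show "\<forall>u\<in>carrier U. sigma (tmap R U U U U (\<lambda>x. x) antipode (psi u)) = eta (eps u)"
    using conv_id_antipode unfolding conv_def conv_unit_def by blast
  show "\<forall>u\<in>carrier U. sigma (tmap R U U U U antipode (\<lambda>x. x) (psi u)) = eta (eps u)"
    using conv_antipode_id unfolding conv_def conv_unit_def by blast
qed

end

theorem proposition6p12:
  fixes R :: "'r ring" and U :: "('r, 'u) module"
    and eps :: "'u \<Rightarrow> 'r" and psi :: "'u \<Rightarrow> ('u \<times> 'u \<Rightarrow> 'r) set"
    and sigma :: "('u \<times> 'u \<Rightarrow> 'r) set \<Rightarrow> 'u" and eta :: "'r \<Rightarrow> 'u"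
    and F :: "nat \<Rightarrow> 'u set"
  assumes "cring R"
    and "coalg_ab_monoid R U eps psi sigma eta"
    and "good_filtration R U eps psi F"
    and "good_basepoint R eps F eta"
    and "\<forall>s t. sigma ` tspan R U U {(a, b). a \<in> F s \<and> b \<in> F t} \<subseteq> F (s + t)"
  shows "coalg_ab_group R U eps psi sigma eta"
proof -
  interpret filtered_coalg_monoid R U eps psi sigma eta F
    using assms(1-4) by (rule filtered_coalg_monoid.intro)
  show ?thesis by (rule coalg_ab_group_antipode)
qed

end
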